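(* Let $\Gamma_1$ be a represented pointclass, let $\Gamma_2$ be the closure of $\Gamma_1$ under finite unions, rescaling, and union with clopen sets (with the induced representation), and let $\Gamma=\Gamma_2\cup\overline{\Gamma_2}$; assume $\Gamma_1$ and $\Gamma$ satisfy the standing assumptions. Then $\mathrm{FindWS}_{\Gamma_1}^*\times\mathrm{Win}_{\Gamma_1}^*\leq_W\mathrm{NE}^{ap}_\Gamma$.
   Context: $f\leq_W g$ iff there are computable partial $K,H$ on $\mathbb{N}^\mathbb{N}$ such that for every realizer $G$ of $g$, $p\mapsto K(\langle p,G(H(p))\rangle)$ realizes $f$. $\times$ is the product; $f^*$: $f^0=\mathrm{id}$, $f^{n+1}=f\times f^n$, $f^*(n,x)=f^n(x)$. Rescaling: $(w,A)\mapsto\{wp\mid p\in A\}$. $\overline{\Delta}=\{U^C\mid U\in\Delta\}$; a union of represented classes is named by a tag and a name in the respective class. Games: infinite sequential games with choices $\{0,1\}$, players, turn function $d:\{0,1\}^*\to A$, outcomes $O$, valuation $v$, preferences with well-founded inverses; strategy profiles $s:\{0,1\}^*\to\{0,1\}$; induced play $p_n=s(p_{<n})$; Nash equilibrium: no player can unilaterally switch strategy to get a strictly preferred outcome. Named by numbers of players/outcomes, $d$ and preferences as tables, and for each player $a$ and upper set $U$ w.r.t. $\prec_a$ a $\Gamma$-name of $v^{-1}(U)$. Win/lose games: two players, outcomes $w_1,w_2$, player $i$ prefers $w_i$. $\mathrm{Win}_\Delta$: input a win/lose game with player-1 winning set given by a $\Delta$-name; output which player has a winning strategy. $\mathrm{FindWS}_\Delta$: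 same input restricted to games where player 1 has a winning strategy; output a profile in which one strategy is winning. $\mathrm{NE}^{ap}_\Gamma$: input a two-player game with finitely many outcomes and linear antagonistic preferences; output a Nash equilibrium. Standing assumptions on a pointclass: determinacy of its win/lose games; contains $\emptyset,\{0,1\}^\mathbb{N}$; uniformly computable closure under rescaling and its inverse and intersection with clopens. *)

theory Defs
  imports Main "HOL-Library.Nat_Bijection"
begin

type_synonym baire = "nat \<Rightarrow> nat"
type_synonym cantor = "nat \<Rightarrow> bool"

definition pair_b :: "baire \<Rightarrow> baire \<Rightarrow> baire" where
  "pair_b p q = (\<lambda>n. if even n then p (n div 2) else q (n div 2))"
definition fst_b :: "baire \<Rightarrow> baire" where "fst_b p = (\<lambda>n. p (2 * n))"
definition snd_b :: "baire \<Rightarrow> baire" where "snd_b p = (\<lambda>n. p (2 * n + 1))"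

definition comp_b :: "baire \<Rightarrow> nat \<Rightarrow> baire" where
  "comp_b p i = (\<lambda>n. p (prod_encode (i, n)))"

definition wcode :: "bool list \<Rightarrow> nat" where
  "wcode w = list_encode (map (\<lambda>b. if b then 1 else 0) w)"
definition wdecode :: "nat \<Rightarrow> bool list" where
  "wdecode n = map (\<lambda>k. k \<noteq> 0) (list_decode n)"

inductive recfn :: "nat \<Rightarrow> (nat list \<Rightarrow> nat) \<Rightarrow> bool" where
  rf_zero: "recfn n (\<lambda>_. 0)"
| rf_succ: "recfn 1 (\<lambda>xs. Suc (hd xs))"
| rf_proj: "i < n \<Longrightarrow> recfn n (\<lambda>xs. xs ! i)"
| rf_comp: "recfn m g \<Longrightarrow> length fs = m \<Longrightarrow> (\<forall>i<m. recfn n (fs ! i))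
            \<Longrightarrow> recfn n (\<lambda>xs. g (map (\<lambda>f. f xs) fs))"
| rf_prim: "recfn n g \<Longrightarrow> recfn (Suc (Suc n)) h
            \<Longrightarrow> recfn (Suc n) (\<lambda>ys. case ys of [] \<Rightarrow> 0
                   | y # xs \<Rightarrow> rec_nat (g xs) (\<lambda>k r. h (k # r # xs)) y)"
| rf_min: "recfn (Suc n) g \<Longrightarrow> (\<forall>xs. length xs = n \<longrightarrow> (\<exists>y. g (y # xs) = 0))
            \<Longrightarrow> recfn n (\<lambda>xs. LEAST y. g (y # xs) = 0)"

definition total_rec1 :: "(nat \<Rightarrow> nat) \<Rightarrow> bool" where
  "total_rec1 h \<longleftrightarrow> (\<exists>f. recfn 1 f \<and> (\<forall>x. h x = f [x]))"

text \<open>A partial function on Baire space is computable if it is computed (on its domain)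
  by a computable Kleene associate h: the n-th output digit is read off from the first
  prefix of the input on which h (queried with n) is nonzero.\<close>
definition comp_partial :: "(baire \<Rightarrow> baire option) \<Rightarrow> bool" where
  "comp_partial F \<longleftrightarrow> (\<exists>h. total_rec1 h \<and>
     (\<forall>p q. F p = Some q \<longrightarrow> (\<forall>n. \<exists>k.
        h (prod_encode (n, list_encode (map p [0..<k]))) = Suc (q n) \<and>
        (\<forall>j<k. h (prod_encode (n, list_encode (map p [0..<j]))) = 0))))"

text \<open>A problem is given on names: f p is the set of admissible output names;
  p is in the domain iff f p is nonempty.\<close>
type_synonym problem = "baire \<Rightarrow> baire set"

definition realizes :: "(baire \<Rightarrow> baire option) \<Rightarrow> problem \<Rightarrow> bool" where
  "realizes G f \<longleftrightarrow> (\<forall>p. f p \<noteq> {} \<longrightarrow> (\<exists>q. G p = Some q \<and> q \<in> f p))"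

definition wred :: "problem \<Rightarrow> problem \<Rightarrow> bool" (infix "\<le>\<^sub>W" 50) where
  "f \<le>\<^sub>W g \<longleftrightarrow> (\<exists>K H. comp_partial K \<and> comp_partial H \<and>
     (\<forall>G. realizes G g \<longrightarrow>
        realizes (\<lambda>p. case H p of None \<Rightarrow> None
                     | Some r \<Rightarrow> (case G r of None \<Rightarrow> None | Some s \<Rightarrow> K (pair_b p s))) f))"

definition prod_p :: "problem \<Rightarrow> problem \<Rightarrow> problem" where
  "prod_p f g = (\<lambda>p. {pair_b q r | q r. q \<in> f (fst_b p) \<and> r \<in> g (snd_b p)})"

fun pow_p :: "problem \<Rightarrow> nat \<Rightarrow> problem" where
  "pow_p f 0 = (\<lambda>p. {p})"
| "pow_p f (Suc n) = prod_p f (pow_p f n)"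

text \<open>f^*(n,x) = f^n(x): the name starts with n, followed by a name of x.\<close>
definition star_p :: "problem \<Rightarrow> problem" where
  "star_p f = (\<lambda>p. pow_p f (p 0) (\<lambda>k. p (Suc k)))"

text \<open>A represented pointclass is given by its (partial) representation; the class is its range.\<close>
type_synonym pcls = "baire \<Rightarrow> cantor set option"

definition cls :: "pcls \<Rightarrow> cantor set set" where
  "cls \<delta> = {A. \<exists>p. \<delta> p = Some A}"

definition cat :: "bool list \<Rightarrow> cantor \<Rightarrow> cantor" where
  "cat w y = (\<lambda>n. if n < length w then w ! n else y (n - length w))"

definition resc :: "bool list \<Rightarrow> cantor set \<Rightarrow> cantor set" where
  "resc w A = {cat w y | y. y \<in> A}"

definition unresc :: "bool list \<Rightarrow> cantor set \<Rightarrow> cantor set" where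
  "unresc w A = {y. cat w y \<in> A}"

definition cyl :: "bool list \<Rightarrow> cantor set" where
  "cyl w = {x. \<forall>i<length w. x i = w ! i}"

definition clopen_code :: "nat \<Rightarrow> cantor set" where
  "clopen_code c = (\<Union>w\<in>set (list_decode c). cyl (wdecode w))"

text \<open>Players are 1..np, outcomes 1..no. A turn function d maps finite histories to players.
  A strategy profile maps histories to moves.\<close>
fun hist :: "(bool list \<Rightarrow> bool) \<Rightarrow> nat \<Rightarrow> bool list" where
  "hist s 0 = []"
| "hist s (Suc n) = hist s n @ [s (hist s n)]"

definition play :: "(bool list \<Rightarrow> bool) \<Rightarrow> cantor" where
  "play s = (\<lambda>n. s (hist s n))"

text \<open>pref a oo oo' means: player a strictly prefers oo' to oo.\<close>
definition nash :: "nat \<Rightarrow> (bool list \<Rightarrow> nat) \<Rightarrow> (nat \<Rightarrow> nat \<Rightarrow> nat \<Rightarrow> bool)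
                    \<Rightarrow> (cantor \<Rightarrow> nat) \<Rightarrow> (bool list \<Rightarrow> bool) \<Rightarrow> bool" where
  "nash np d pref v s \<longleftrightarrow> (\<forall>a\<in>{1..np}. \<forall>s'.
      \<not> pref a (v (play s)) (v (play (\<lambda>h. if d h = a then s' h else s h))))"

definition win1 :: "(bool list \<Rightarrow> nat) \<Rightarrow> cantor set \<Rightarrow> (bool list \<Rightarrow> bool) \<Rightarrow> bool" where
  "win1 d W \<sigma> \<longleftrightarrow> (\<forall>\<tau>. play (\<lambda>h. if d h = 1 then \<sigma> h else \<tau> h) \<in> W)"

definition win2 :: "(bool list \<Rightarrow> nat) \<Rightarrow> cantor set \<Rightarrow> (bool list \<Rightarrow> bool) \<Rightarrow> bool" where
  "win2 d W \<sigma> \<longleftrightarrow> (\<forall>\<tau>. play (\<lambda>h. if d h = 2 then \<sigma> h else \<tau> h) \<notin> W)"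

definition determined :: "(bool list \<Rightarrow> nat) \<Rightarrow> cantor set \<Rightarrow> bool" where
  "determined d W \<longleftrightarrow> (\<exists>\<sigma>. win1 d W \<sigma>) \<or> (\<exists>\<sigma>. win2 d W \<sigma>)"

definition standing :: "pcls \<Rightarrow> bool" where
  "standing \<delta> \<longleftrightarrow>
     (\<forall>d W. (\<forall>h. d h \<in> {1, 2}) \<longrightarrow> W \<in> cls \<delta> \<longrightarrow> determined d W) \<and>
     {} \<in> cls \<delta> \<and> UNIV \<in> cls \<delta> \<and>
     (\<exists>K. comp_partial K \<and> (\<forall>w p A. \<delta> p = Some A \<longrightarrow>
        (\<exists>q. K (pair_b (\<lambda>_. wcode w) p) = Some q \<and> \<delta> q = Some (resc w A)))) \<and>
     (\<exists>K. comp_partial K \<and> (\<forall>w p A. \<delta> p = Some A \<longrightarrow>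
        (\<exists>q. K (pair_b (\<lambda>_. wcode w) p) = Some q \<and> \<delta> q = Some (unresc w A)))) \<and>
     (\<exists>K. comp_partial K \<and> (\<forall>c p A. \<delta> p = Some A \<longrightarrow>
        (\<exists>q. K (pair_b (\<lambda>_. c) p) = Some q \<and> \<delta> q = Some (A \<inter> clopen_code c))))"

text \<open>Closure of \<delta>1 under finite unions, rescaling and union with clopens, in normal form
  C \<union> (w_0 A_0) \<union> ... \<union> (w_{n-1} A_{n-1}); a name lists n, the clopen code of C,
  the codes of the words w_i and \<delta>1-names of the A_i.\<close>
definition gamma2 :: "pcls \<Rightarrow> pcls" where
  "gamma2 \<delta> q = (if \<forall>i<comp_b q 0 0. \<delta> (comp_b (comp_b q 3) i) \<noteq> None
     then Some (clopen_code (comp_b q 1 0) \<union>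
          (\<Union>i<comp_b q 0 0. resc (wdecode (comp_b q 2 i)) (the (\<delta> (comp_b (comp_b q 3) i)))))
     else None)"

definition pc_compl :: "pcls \<Rightarrow> pcls" where
  "pc_compl \<delta> q = map_option uminus (\<delta> q)"

text \<open>Union of represented classes: a tag followed by a name in the respective class.\<close>
definition pc_union :: "pcls \<Rightarrow> pcls \<Rightarrow> pcls" where
  "pc_union \<delta>1 \<delta>2 q = (if q 0 = 0 then \<delta>1 (\<lambda>k. q (Suc k))
                      else if q 0 = 1 then \<delta>2 (\<lambda>k. q (Suc k)) else None)"

definition gamma_full :: "pcls \<Rightarrow> pcls" where
  "gamma_full \<delta> = pc_union (gamma2 \<delta>) (pc_compl (gamma2 \<delta>))"

definition prof_name :: "baire \<Rightarrow> bool" where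
  "prof_name q \<longleftrightarrow> (\<forall>w. q (wcode w) \<in> {0, 1})"

definition prof_of :: "baire \<Rightarrow> bool list \<Rightarrow> bool" where
  "prof_of q = (\<lambda>w. q (wcode w) = 1)"

text \<open>Input of Win/FindWS: a table of the turn function (values in {1,2}) paired with a
  \<delta>-name of player 1's winning set.\<close>
definition dtab :: "baire \<Rightarrow> bool list \<Rightarrow> nat" where
  "dtab p = (\<lambda>w. fst_b p (wcode w))"

definition win_input :: "pcls \<Rightarrow> baire \<Rightarrow> cantor set \<Rightarrow> bool" where
  "win_input \<delta> p W \<longleftrightarrow> (\<forall>w. dtab p w \<in> {1, 2}) \<and> \<delta> (snd_b p) = Some W"

definition Win :: "pcls \<Rightarrow> problem" where
  "Win \<delta> p = {q. \<exists>W. win_input \<delta> p W \<and>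
     ((q 0 = 1 \<and> (\<exists>\<sigma>. win1 (dtab p) W \<sigma>)) \<or> (q 0 = 2 \<and> (\<exists>\<sigma>. win2 (dtab p) W \<sigma>)))}"

definition FindWS :: "pcls \<Rightarrow> problem" where
  "FindWS \<delta> p = {q. \<exists>W. win_input \<delta> p W \<and> (\<exists>\<sigma>. win1 (dtab p) W \<sigma>) \<and>
     prof_name q \<and> win1 (dtab p) W (prof_of q)}"

definition upper :: "nat \<Rightarrow> (nat \<Rightarrow> nat \<Rightarrow> bool) \<Rightarrow> nat set \<Rightarrow> bool" where
  "upper no pr U \<longleftrightarrow> U \<subseteq> {1..no} \<and> (\<forall>oo\<in>U. \<forall>oo'\<in>{1..no}. pr oo oo' \<longrightarrow> oo' \<in> U)"

definition game_name :: "pcls \<Rightarrow> baire \<Rightarrow> nat \<Rightarrow> nat \<Rightarrow> (bool list \<Rightarrow> nat)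
     \<Rightarrow> (nat \<Rightarrow> nat \<Rightarrow> nat \<Rightarrow> bool) \<Rightarrow> (cantor \<Rightarrow> nat) \<Rightarrow> bool" where
  "game_name \<delta> p np no d pref v \<longleftrightarrow>
     comp_b p 0 0 = np \<and> comp_b p 1 0 = no \<and>
     (\<forall>w. d w = comp_b p 2 (wcode w) \<and> d w \<in> {1..np}) \<and>
     (\<forall>a\<in>{1..np}. \<forall>oo\<in>{1..no}. \<forall>oo'\<in>{1..no}.
        comp_b p 3 (prod_encode (a, prod_encode (oo, oo'))) = (if pref a oo oo' then 1 else 0)) \<and>
     (\<forall>x. v x \<in> {1..no}) \<and>
     (\<forall>a\<in>{1..np}. \<forall>U. upper no (pref a) U \<longrightarrow>
        \<delta> (comp_b (comp_b p 4) (prod_encode (a, set_encode U))) = Some (v -` U))"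

definition lin_antag :: "nat \<Rightarrow> (nat \<Rightarrow> nat \<Rightarrow> nat \<Rightarrow> bool) \<Rightarrow> bool" where
  "lin_antag no pref \<longleftrightarrow>
     (\<forall>oo\<in>{1..no}. \<not> pref 1 oo oo) \<and>
     (\<forall>oc1\<in>{1..no}. \<forall>oc2\<in>{1..no}. \<forall>oc3\<in>{1..no}. pref 1 oc1 oc2 \<longrightarrow> pref 1 oc2 oc3 \<longrightarrow> pref 1 oc1 oc3) \<and>
     (\<forall>oc1\<in>{1..no}. \<forall>oc2\<in>{1..no}. oc1 \<noteq> oc2 \<longrightarrow> pref 1 oc1 oc2 \<or> pref 1 oc2 oc1) \<and>
     (\<forall>oc1\<in>{1..no}. \<forall>oc2\<in>{1..no}. pref 2 oc1 oc2 \<longleftrightarrow> pref 1 oc2 oc1)"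

definition NEap :: "pcls \<Rightarrow> problem" where
  "NEap \<delta> p = {q. prof_name q \<and> (\<exists>no d pref v. game_name \<delta> p 2 no d pref v \<and>
      lin_antag no pref \<and> nash 2 d pref v (prof_of q))}"

end

theory Submission
  imports Defs
begin

text \<open>
  Given \<open>n\<close> instances \<open>F\<^sub>i\<close> of \<open>FindWS\<close> and
  \<open>m\<close> instances \<open>W\<^sub>j\<close> of \<open>Win\<close>, we build a single
  two-player game with outcomes \<open>1 < \<dots> < m + 2\<close>, player 1 preferring larger and
  player 2 smaller outcomes. Player 2 either enters some \<open>F\<^sub>i\<close>, where the outcome
  is \<open>m + 2\<close> if player 1 wins and \<open>1\<close> otherwise, or concedes
  \<open>m + 2\<close>, or passes to a second phase. There player 1 writes claims
  \<open>c \<in> {0,1}\<^sup>m\<close> ("I win \<open>W\<^sub>j\<close>") and player 2 may challenge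
  a position \<open>j\<close>: a claim \<open>c\<^sub>j = 1\<close> is tested by playing
  \<open>W\<^sub>j\<close> (outcome \<open>m + 2\<close> or \<open>1\<close>), otherwise the outcome
  is \<open>|c| + 2\<close>.

  The value of this game is \<open>|T| + 2\<close>, where \<open>T\<close> is the set of
  \<open>W\<^sub>j\<close> won by player 1, and a Nash equilibrium attains it. If player 1's equilibrium
  strategy lost some \<open>F\<^sub>i\<close>, claimed a \<open>W\<^sub>j\<close> it cannot win, or omitted one it
  can win, player 2 could deviate to an outcome below the value. So this strategy wins every
  \<open>F\<^sub>i\<close> and its claims are exactly \<open>T\<close>: it answers all instances.

  The preimage of a final segment \<open>{t..m+2}\<close> of outcomes is a clopen set together with
  finitely many rescaled winning sets, hence in \<open>gamma2 \<delta>1\<close>; the upper sets of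
  player 2 are complements of such.
\<close>

section \<open>Total recursive functions\<close>

definition recursive :: "nat \<Rightarrow> (nat list \<Rightarrow> nat) \<Rightarrow> bool" where
  "recursive n f \<longleftrightarrow> (\<exists>g. recfn n g \<and> (\<forall>xs. length xs
      = n \<longrightarrow> g xs = f xs))"

named_theorems recursive_intros

lemma recursive_cong: "recursive n f \<Longrightarrow> (\<And>xs. length xs = n \<Longrightarrow> f xs = g xs)
    \<Longrightarrow> recursive n g"
  unfolding recursive_def by metis

lemma recursive_zero: "recursive n (\<lambda>_. 0)"
  unfolding recursive_def using rf_zero by blast

lemma recursive_succ1: "recursive 1 (\<lambda>xs. Suc (hd xs))"
  unfolding recursive_def using rf_succ by blast

lemma recursive_proj [recursive_intros]: "i < n \<Longrightarrow> recursive n (\<lambda>xs. xs ! i)"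
  unfolding recursive_def using rf_proj by blast

lemma recursive_comp:
  assumes "recursive m g" "length fs = m" "\<forall>i<m. recursive n (fs ! i)"
  shows "recursive n (\<lambda>xs. g (map (\<lambda>f. f xs) fs))"
proof -
  obtain g' where g': "recfn m g'" "\<forall>xs. length xs = m \<longrightarrow> g' xs = g xs" using assms(1)
      unfolding recursive_def by blast
  have "\<forall>i<m. \<exists>f'. recfn n f' \<and> (\<forall>xs. length xs = n \<longrightarrow> f' xs = (fs!i) xs)"
    using assms(3) unfolding recursive_def by blast
  then obtain F where F: "\<forall>i<m. recfn n (F i) \<and> (\<forall>xs. length xs
      = n \<longrightarrow> F i xs = (fs!i) xs)"
    by metis
  define fs' where "fs' = map F [0..<m]"
  have "recfn n (\<lambda>xs. g' (map (\<lambda>f. f xs) fs'))"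
    by (rule rf_comp[OF g'(1)]) (use F in \<open>auto simp: fs'_def\<close>)
  moreover have "\<forall>xs. length xs = n \<longrightarrow> g' (map (\<lambda>f. f xs) fs')
      = g (map (\<lambda>f. f xs) fs)"
  proof (intro allI impI)
    fix xs :: "nat list" assume l: "length xs = n"
    have "map (\<lambda>f. f xs) fs' = map (\<lambda>f. f xs) fs"
      using F l assms(2) by (auto simp: fs'_def intro!: nth_equalityI)
    then show "g' (map (\<lambda>f. f xs) fs') = g (map (\<lambda>f. f xs) fs)"
      using g'(2) assms(2) by simp
  qed
  ultimately show ?thesis unfolding recursive_def by blast
qed

lemma recursive_prim:
  assumes "recursive n g" "recursive (Suc (Suc n)) h"
  shows "recursive (Suc n) (\<lambda>ys. rec_nat (g (tl ys)) (\<lambda>k r. h (k # r # tl ys)) (hd ys))"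
proof -
  obtain g' where g': "recfn n g'" "\<forall>xs. length xs = n \<longrightarrow> g' xs = g xs" using assms(1)
      unfolding recursive_def by blast
  obtain h' where h': "recfn (Suc (Suc n)) h'" "\<forall>xs. length xs = Suc (Suc n) \<longrightarrow> h' xs
      = h xs" using assms(2) unfolding recursive_def by blast
  have r: "recfn (Suc n) (\<lambda>ys. case ys of [] \<Rightarrow> 0
      | y # xs \<Rightarrow> rec_nat (g' xs) (\<lambda>k r. h' (k # r # xs)) y)"
    by (rule rf_prim[OF g'(1) h'(1)])
  have "\<forall>ys. length ys = Suc n \<longrightarrow> (case ys of [] \<Rightarrow> 0
      | y # xs \<Rightarrow> rec_nat (g' xs) (\<lambda>k r. h' (k # r # xs)) y)
     = rec_nat (g (tl ys)) (\<lambda>k r. h (k # r # tl ys)) (hd ys)"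
  proof (intro allI impI)
    fix ys :: "nat list" assume "length ys = Suc n"
    then obtain y xs where ys: "ys = y # xs" "length xs = n" by (cases ys) auto
    have "rec_nat (g' xs) (\<lambda>k r. h' (k # r # xs)) y' = rec_nat (g xs) (\<lambda>k r. h (k # r # xs)) y'" for y'
      by (induction y') (use g' h' ys in auto)
    then show "(case ys of [] \<Rightarrow> 0 | y # xs \<Rightarrow> rec_nat (g' xs) (\<lambda>k r. h' (k # r # xs)) y)
     = rec_nat (g (tl ys)) (\<lambda>k r. h (k # r # tl ys)) (hd ys)" using ys by simp
  qed
  with r show ?thesis unfolding recursive_def by blast
qed

lemma recursive_min:
  assumes "recursive (Suc n) g" "\<And>xs. length xs = n \<Longrightarrow> \<exists>y. g (y # xs) = 0"
  shows "recursive n (\<lambda>xs. LEAST y. g (y # xs) = 0)"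
proof -
  obtain g' where g': "recfn (Suc n) g'" "\<forall>xs. length xs = Suc n \<longrightarrow> g' xs = g xs"
      using assms(1) unfolding recursive_def by blast
  have e: "\<forall>xs. length xs = n \<longrightarrow> (\<exists>y. g' (y # xs) = 0)" using assms(2) g'(2) by simp
  have "recfn n (\<lambda>xs. LEAST y. g' (y # xs) = 0)" by (rule rf_min[OF g'(1) e])
  moreover have "\<forall>xs. length xs = n \<longrightarrow> (LEAST y. g' (y # xs) = 0) = (LEAST y. g (y # xs) = 0)"
    using g'(2) by simp
  ultimately show ?thesis unfolding recursive_def by blast
qed

lemma recursive_comp1: "recursive 1 g \<Longrightarrow> recursive n F
    \<Longrightarrow> recursive n (\<lambda>xs. g [F xs])"
  using recursive_comp[of 1 g "[F]" n] by (simp add: less_Suc_eq)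

lemma recursive_comp2: "recursive 2 g \<Longrightarrow> recursive n F \<Longrightarrow> recursive n G
    \<Longrightarrow> recursive n (\<lambda>xs. g [F xs, G xs])"
  using recursive_comp[of 2 g "[F, G]" n] by (simp add: less_Suc_eq numeral_2_eq_2)

lemma recursive_comp3: "recursive 3 g \<Longrightarrow> recursive n F \<Longrightarrow> recursive n G
    \<Longrightarrow> recursive n K \<Longrightarrow> recursive n (\<lambda>xs. g [F xs, G xs, K xs])"
  using recursive_comp[of 3 g "[F, G, K]" n] by (simp add: less_Suc_eq numeral_3_eq_3)

lemma recursive_suc [recursive_intros]: "recursive n F \<Longrightarrow> recursive n (\<lambda>xs. Suc (F xs))"
  using recursive_comp1[OF recursive_succ1, of n F] by simp

lemma recursive_const [recursive_intros]: "recursive n (\<lambda>_. k)"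
  by (induction k) (auto intro: recursive_zero dest: recursive_suc)

lemma recursive_drop: "recursive n F \<Longrightarrow> recursive (k + n) (\<lambda>ys. F (drop k ys))"
proof -
  assume F: "recursive n F"
  have "recursive (k + n) (\<lambda>ys. F (map (\<lambda>f. f ys) (map (\<lambda>i ys. ys ! (k + i)) [0..<n])))"
    by (rule recursive_comp[OF F]) (auto intro!: recursive_proj)
  then show ?thesis
    by (rule recursive_cong) (auto intro!: nth_equalityI arg_cong[where f=F])
qed

lemma recursive_proj_drop [recursive_intros]: "k + i < n \<Longrightarrow> recursive n (\<lambda>xs. drop k xs ! i)"
  by (rule recursive_cong[OF recursive_proj[of "k+i" n]]) auto

lemma recursive_cons_arg:
  assumes P: "recursive (Suc n) P" and C: "recursive n C"
  shows "recursive n (\<lambda>xs. P (C xs # xs))"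
proof -
  have "recursive n (\<lambda>xs. P (map (\<lambda>f. f xs) (C # map (\<lambda>i xs. xs ! i) [0..<n])))"
    by (rule recursive_comp[OF P]) (auto intro!: recursive_proj C simp: nth_Cons split: nat.split)
  then show ?thesis
    by (rule recursive_cong) (auto intro!: nth_equalityI arg_cong[where f=P])
qed

lemma recursive_rec:
  assumes "recursive n A" "recursive (Suc (Suc n)) (\<lambda>ys. B (ys ! 0) (ys ! 1) (drop 2 ys))" "recursive n C"
  shows "recursive n (\<lambda>xs. rec_nat (A xs) (\<lambda>k r. B k r xs) (C xs))"
proof -
  have p: "recursive (Suc n) (\<lambda>ys. rec_nat (A (tl ys)) (\<lambda>k r. (\<lambda>ys. B (ys ! 0) (ys ! 1)
      (drop 2 ys)) (k # r # tl ys)) (hd ys))"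
    by (rule recursive_prim[OF assms(1,2)])
  from recursive_cons_arg[OF p assms(3)] show ?thesis by simp
qed

lemma recursive_ifz:
  assumes "recursive n X" "recursive n A" "recursive n B"
  shows "recursive n (\<lambda>xs. if X xs = 0 then A xs else B xs)"
proof -
  have b: "recursive (Suc (Suc n)) (\<lambda>ys. B (drop 2 ys))" using recursive_drop[OF assms(3), of 2] by simp
  have "recursive n (\<lambda>xs. rec_nat (A xs) (\<lambda>k r. B xs) (X xs))"
    by (rule recursive_rec[OF assms(2) _ assms(1)]) (use b in simp)
  then show ?thesis by (rule recursive_cong) (auto simp: gr0_conv_Suc)
qed

lemma recursive_add [recursive_intros]: "recursive n F \<Longrightarrow> recursive n G
    \<Longrightarrow> recursive n (\<lambda>xs. F xs + G xs)"
proof -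
  assume F: "recursive n F" and G: "recursive n G"
  have "recursive n (\<lambda>xs. rec_nat (F xs) (\<lambda>k r. Suc r) (G xs))"
    by (rule recursive_rec[OF F _ G]) (auto intro!: recursive_suc recursive_proj)
  moreover have "rec_nat a (\<lambda>k r. Suc r) b = a + b" for a b :: nat by (induction b) auto
  ultimately show ?thesis by simp
qed

lemma recursive_pred: "recursive n F \<Longrightarrow> recursive n (\<lambda>xs. F xs - 1)"
proof -
  assume F: "recursive n F"
  have "recursive n (\<lambda>xs. rec_nat 0 (\<lambda>k r. k) (F xs))"
    by (rule recursive_rec[OF recursive_const _ F]) (auto intro!: recursive_proj)
  moreover have "rec_nat 0 (\<lambda>k r. k) b = b - 1" for b :: nat by (induction b) auto
  ultimately show ?thesis by simp
qed

lemma recursive_sub [recursive_intros]: "recursive n F \<Longrightarrow> recursive n G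
    \<Longrightarrow> recursive n (\<lambda>xs. F xs - G xs)"
proof -
  assume F: "recursive n F" and G: "recursive n G"
  have "recursive n (\<lambda>xs. rec_nat (F xs) (\<lambda>k r. r - 1) (G xs))"
    by (rule recursive_rec[OF F _ G], rule recursive_pred, rule recursive_proj) simp
  moreover have "rec_nat a (\<lambda>k r. r - 1) b = a - b" for a b :: nat by (induction b) auto
  ultimately show ?thesis by simp
qed

lemma recursive_mult [recursive_intros]: "recursive n F \<Longrightarrow> recursive n G
    \<Longrightarrow> recursive n (\<lambda>xs. F xs * G xs)"
proof -
  assume F: "recursive n F" and G: "recursive n G"
  have f2: "recursive (Suc (Suc n)) (\<lambda>ys. F (drop 2 ys))" using recursive_drop[OF F, of 2] by simp
  have "recursive n (\<lambda>xs. rec_nat 0 (\<lambda>k r. r + F xs) (G xs))"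
    by (rule recursive_rec[OF recursive_const _ G]) (auto intro!: recursive_add recursive_proj f2)
  moreover have "rec_nat 0 (\<lambda>k r. r + a) b = a * b" for a b :: nat by (induction b) auto
  ultimately show ?thesis by simp
qed

lemma recursive_pow [recursive_intros]: "recursive n F \<Longrightarrow> recursive n G
    \<Longrightarrow> recursive n (\<lambda>xs. F xs ^ G xs)"
proof -
  assume F: "recursive n F" and G: "recursive n G"
  have f2: "recursive (Suc (Suc n)) (\<lambda>ys. F (drop 2 ys))" using recursive_drop[OF F, of 2] by simp
  have "recursive n (\<lambda>xs. rec_nat 1 (\<lambda>k r. r * F xs) (G xs))"
    by (rule recursive_rec[OF recursive_const _ G]) (auto intro!: recursive_mult recursive_proj f2)
  moreover have "rec_nat 1 (\<lambda>k r. r * a) b = a ^ b" for a b :: nat by (induction b) auto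
  ultimately show ?thesis by simp
qed

definition recursive_pred :: "nat \<Rightarrow> (nat list \<Rightarrow> bool) \<Rightarrow> bool" where
  "recursive_pred n P \<longleftrightarrow> recursive n (\<lambda>xs. if P xs then 1 else 0)"

lemma recursive_if [recursive_intros]: "recursive_pred n P \<Longrightarrow> recursive n A
    \<Longrightarrow> recursive n B \<Longrightarrow> recursive n (\<lambda>xs. if P xs then A xs else B xs)"
  unfolding recursive_pred_def
proof -
  assume "recursive n (\<lambda>xs. if P xs then 1 else 0)" "recursive n A" "recursive n B"
  from recursive_ifz[OF this(1) this(3) this(2)]
  show "recursive n (\<lambda>xs. if P xs then A xs else B xs)" by (rule recursive_cong) simp
qed

lemma recursive_pred_eq0 [recursive_intros]: "recursive n F \<Longrightarrow> recursive_pred n (\<lambda>xs. F xs = 0)"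
  unfolding recursive_pred_def by (rule recursive_ifz) (auto intro: recursive_const)

lemma recursive_pred_not [recursive_intros]: "recursive_pred n P
    \<Longrightarrow> recursive_pred n (\<lambda>xs. \<not> P xs)"
proof -
  assume "recursive_pred n P"
  from recursive_if[OF this recursive_const recursive_const, of 0 1] show ?thesis unfolding recursive_pred_def
      by (rule recursive_cong) simp
qed

lemma recursive_pred_conj [recursive_intros]: "recursive_pred n P \<Longrightarrow> recursive_pred n Q
    \<Longrightarrow> recursive_pred n (\<lambda>xs. P xs \<and> Q xs)"
  unfolding recursive_pred_def[of n "\<lambda>xs. P xs \<and> Q xs"]
  by (drule recursive_if[of n P "\<lambda>xs. if Q xs then 1
      else 0" "\<lambda>_. 0"]) (auto intro: recursive_const simp: recursive_pred_def elim: recursive_cong)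

lemma recursive_pred_disj [recursive_intros]: "recursive_pred n P \<Longrightarrow> recursive_pred n Q
    \<Longrightarrow> recursive_pred n (\<lambda>xs. P xs \<or> Q xs)"
  unfolding recursive_pred_def[of n "\<lambda>xs. P xs \<or> Q xs"]
  by (drule recursive_if[of n P "\<lambda>_. 1" "\<lambda>xs. if Q xs then 1
      else 0"]) (auto intro: recursive_const simp: recursive_pred_def elim: recursive_cong)

lemma recursive_pred_le [recursive_intros]: "recursive n F \<Longrightarrow> recursive n G
    \<Longrightarrow> recursive_pred n (\<lambda>xs. F xs \<le> G xs)"
  by (drule recursive_sub, assumption, drule recursive_pred_eq0) simp

lemma recursive_pred_less [recursive_intros]: "recursive n F \<Longrightarrow> recursive n G
    \<Longrightarrow> recursive_pred n (\<lambda>xs. F xs < G xs)"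
  by (drule recursive_suc, drule recursive_pred_le, assumption) (simp add: Suc_le_eq)

lemma recursive_pred_eq [recursive_intros]: "recursive n F \<Longrightarrow> recursive n G
    \<Longrightarrow> recursive_pred n (\<lambda>xs. F xs = G xs)"
proof -
  assume "recursive n F" "recursive n G"
  then have "recursive_pred n (\<lambda>xs. F xs \<le> G xs \<and> G xs \<le> F xs)"
      by (intro recursive_pred_conj recursive_pred_le)
  then show ?thesis unfolding recursive_pred_def by (rule recursive_cong) auto
qed

lemma recursive_least:
  assumes "recursive_pred (Suc n) (\<lambda>ys. P (ys ! 0) (drop 1 ys))" "recursive n B"
  shows "recursive n (\<lambda>xs. LEAST y. P y xs \<or> y = B xs)"
proof -
  have b: "recursive (Suc n) (\<lambda>ys. B (drop 1 ys))" using recursive_drop[OF assms(2), of 1] by simp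
  have g: "recursive (Suc n) (\<lambda>ys. if P (ys ! 0) (drop 1 ys) \<or> ys ! 0 = B (drop 1 ys) then 0 else 1)"
    by (intro recursive_if recursive_pred_disj recursive_pred_eq assms(1) b recursive_proj recursive_const) simp
  have "recursive n (\<lambda>xs. LEAST y. (if P ((y # xs) ! 0) (drop 1 (y # xs)) \<or> (y # xs) ! 0
      = B (drop 1 (y # xs)) then 0 else 1) = (0::nat))"
    by (rule recursive_min[OF g]) auto
  then show ?thesis by (rule recursive_cong) simp
qed

lemma recursive_cons_drop:
  assumes P: "recursive (Suc n) P" and C: "recursive (k + n) C"
  shows "recursive (k + n) (\<lambda>ys. P (C ys # drop k ys))"
proof -
  have "recursive (k + n) (\<lambda>ys. P (map (\<lambda>f. f ys) (C # map (\<lambda>i ys. ys ! (k + i)) [0..<n])))"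
    by (rule recursive_comp[OF P]) (auto intro!: recursive_proj C simp: nth_Cons split: nat.split)
  then show ?thesis
    by (rule recursive_cong) (auto intro!: nth_equalityI arg_cong[where f=P] simp: nth_Cons split: nat.split)
qed

lemma recursive_app2_drop2:
  assumes "recursive (Suc n) (\<lambda>ys. F (ys ! 0) (drop 1 ys))" "recursive (Suc (Suc n)) C"
  shows "recursive (Suc (Suc n)) (\<lambda>ys. F (C ys) (drop 2 ys))"
  using recursive_cons_drop[OF assms(1), of 2 C] assms(2) by simp

lemma recursive_triangle [recursive_intros]: "recursive n F
    \<Longrightarrow> recursive n (\<lambda>xs. triangle (F xs))"
proof -
  assume F: "recursive n F"
  have "recursive n (\<lambda>xs. rec_nat 0 (\<lambda>k r. r + Suc k) (F xs))"
    by (rule recursive_rec[OF recursive_const _ F]) (auto intro!: recursive_add recursive_suc recursive_proj)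
  moreover have "rec_nat 0 (\<lambda>k r. r + Suc k) b = triangle b" for b by (induction b) auto
  ultimately show ?thesis by simp
qed

lemma recursive_prod_encode [recursive_intros]: "recursive n F \<Longrightarrow> recursive n G
    \<Longrightarrow> recursive n (\<lambda>xs. prod_encode (F xs, G xs))"
  unfolding prod_encode_def by (simp add: recursive_add recursive_triangle)

definition unpair_fst :: "nat \<Rightarrow> nat" where "unpair_fst z = fst (prod_decode z)"
definition unpair_snd :: "nat \<Rightarrow> nat" where "unpair_snd z = snd (prod_decode z)"

lemma triangle_mono: "i \<le> j \<Longrightarrow> triangle i \<le> triangle j"
  by (induction j) (auto simp: le_Suc_eq)

lemma triangle_ge: "k \<le> triangle k"
  by (induction k) auto

definition unpair_sum :: "nat \<Rightarrow> nat" where "unpair_sum z = (LEAST s. z < triangle (Suc s) \<or> s = z)"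

lemma unpair_sum_prod_encode: "unpair_sum (prod_encode (a, b)) = a + b"
proof -
  let ?z = "prod_encode (a, b)"
  have z: "?z = triangle (a + b) + a" by (simp add: prod_encode_def)
  show ?thesis unfolding unpair_sum_def
  proof (rule Least_equality)
    show "?z < triangle (Suc (a + b)) \<or> a + b = ?z" using z by simp
  next
    fix y assume "?z < triangle (Suc y) \<or> y = ?z"
    then show "a + b \<le> y"
    proof
      assume "?z < triangle (Suc y)"
      then show ?thesis using z triangle_mono[of "Suc y" "a + b"] by (cases "Suc y \<le> a + b") auto
    next
      assume "y = ?z" then show ?thesis using z triangle_ge[of "a+b"] by simp
    qed
  qed
qed

lemma unpair_fst_prod_encode[simp]: "unpair_fst (prod_encode (a, b))
    = a" and unpair_snd_prod_encode[simp]: "unpair_snd (prod_encode (a, b)) = b"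
  by (simp_all add: unpair_fst_def unpair_snd_def)

lemma unpair_fst_alt: "unpair_fst z = z - triangle (unpair_sum z)"
proof -
  obtain a b where z: "z = prod_encode (a, b)" by (metis prod_decode_inverse surj_pair)
  show ?thesis unfolding z unpair_sum_prod_encode unpair_fst_prod_encode by (simp add: prod_encode_def)
qed

lemma unpair_snd_alt: "unpair_snd z = unpair_sum z - unpair_fst z"
proof -
  obtain a b where z: "z = prod_encode (a, b)" by (metis prod_decode_inverse surj_pair)
  show ?thesis unfolding z unpair_sum_prod_encode by simp
qed

lemma recursive_unpair_sum: "recursive n F \<Longrightarrow> recursive n (\<lambda>xs. unpair_sum (F xs))"
proof -
  assume F: "recursive n F"
  have f1: "recursive (Suc n) (\<lambda>ys. F (drop 1 ys))" using recursive_drop[OF F, of 1] by simp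
  have "recursive_pred (Suc n) (\<lambda>ys. F (drop 1 ys) < triangle (Suc (ys ! 0)))"
    by (intro recursive_pred_less f1 recursive_triangle recursive_suc recursive_proj) simp
  then show ?thesis unfolding unpair_sum_def by (rule recursive_least[OF _ F])
qed

lemma recursive_unpair_fst [recursive_intros]: "recursive n F
    \<Longrightarrow> recursive n (\<lambda>xs. unpair_fst (F xs))"
  unfolding unpair_fst_alt by (intro recursive_sub recursive_triangle recursive_unpair_sum)

lemma recursive_unpair_snd [recursive_intros]: "recursive n F
    \<Longrightarrow> recursive n (\<lambda>xs. unpair_snd (F xs))"
  unfolding unpair_snd_alt unpair_fst_alt by (intro recursive_sub recursive_triangle recursive_unpair_sum)

definition code_hd :: "nat \<Rightarrow> nat" where "code_hd z = unpair_fst (z - 1)"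
definition code_tl :: "nat \<Rightarrow> nat" where "code_tl z = unpair_snd (z - 1)"
definition code_Cons :: "nat \<Rightarrow> nat \<Rightarrow> nat" where "code_Cons a z = Suc (prod_encode (a, z))"
definition code_drop :: "nat \<Rightarrow> nat \<Rightarrow> nat" where "code_drop k z = (code_tl ^^ k) z"
definition code_nth :: "nat \<Rightarrow> nat \<Rightarrow> nat" where "code_nth z i = code_hd (code_drop i z)"
definition code_length :: "nat \<Rightarrow> nat" where "code_length z = (LEAST i. code_drop i z = 0 \<or> i = z)"
definition code_prepend :: "nat \<Rightarrow> (nat \<Rightarrow> nat) \<Rightarrow> nat \<Rightarrow> nat" where
  "code_prepend len f b = rec_nat b (\<lambda>k r. code_Cons (f (len - Suc k)) r) len"

lemma code_Cons_enc[simp]: "code_Cons a (list_encode xs) = list_encode (a # xs)"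
  by (simp add: code_Cons_def)

lemma prod_decode_0[simp]: "prod_decode 0 = (0, 0)"
  by (simp add: prod_decode_def prod_decode_aux.simps)

lemma code_hd_enc[simp]: "code_hd (list_encode (x # xs)) = x" by (simp add: code_hd_def)
lemma code_tl_enc[simp]: "code_tl (list_encode xs) = list_encode (tl xs)"
  by (cases xs) (auto simp: code_tl_def unpair_snd_def)

lemma code_drop_enc[simp]: "code_drop k (list_encode xs) = list_encode (drop k xs)"
  unfolding code_drop_def by (induction k arbitrary: xs) (auto simp: drop_Suc funpow_swap1 tl_drop)

lemma code_nth_enc[simp]: "i < length xs \<Longrightarrow> code_nth (list_encode xs) i = xs ! i"
  by (simp add: code_nth_def Cons_nth_drop_Suc[symmetric] del: list_encode.simps)

lemma length_le_enc: "length xs \<le> list_encode xs"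
  by (induction xs) (auto intro: le_trans[OF _ le_prod_encode_2])

lemma list_encode_0[simp]: "list_encode xs = 0 \<longleftrightarrow> xs = []"
  by (cases xs) auto

lemma code_length_enc[simp]: "code_length (list_encode xs) = length xs"
  unfolding code_length_def
  by (rule Least_equality) (auto simp: length_le_enc)

lemma code_prepend_enc: "code_prepend len f (list_encode ys) = list_encode (map f [0..<len] @ ys)"
proof -
  have "rec_nat (list_encode ys) (\<lambda>k r. code_Cons (f (len - Suc k)) r) k
      = list_encode (map f [len - k..<len] @ ys)"
    if "k \<le> len" for k using that
  proof (induction k)
    case (Suc k)
    then have "[len - Suc k..<len] = (len - Suc k) # [len - k..<len]"
      by (simp add: Suc_diff_Suc upt_conv_Cons)
    with Suc show ?case by simp
  qed simp
  then show ?thesis unfolding code_prepend_def by simp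
qed

lemma recursive_code_Cons [recursive_intros]: "recursive n F \<Longrightarrow> recursive n G
    \<Longrightarrow> recursive n (\<lambda>xs. code_Cons (F xs) (G xs))"
  unfolding code_Cons_def by (intro recursive_suc recursive_prod_encode)

lemma recursive_code_hd [recursive_intros]: "recursive n F \<Longrightarrow> recursive n (\<lambda>xs. code_hd (F xs))"
  unfolding code_hd_def by (intro recursive_unpair_fst recursive_pred)

lemma recursive_code_tl [recursive_intros]: "recursive n F \<Longrightarrow> recursive n (\<lambda>xs. code_tl (F xs))"
  unfolding code_tl_def by (intro recursive_unpair_snd recursive_pred)

lemma recursive_code_drop [recursive_intros]: "recursive n K \<Longrightarrow> recursive n F
    \<Longrightarrow> recursive n (\<lambda>xs. code_drop (K xs) (F xs))"
proof -
  assume K: "recursive n K" and F: "recursive n F"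
  have "recursive n (\<lambda>xs. rec_nat (F xs) (\<lambda>k r. code_tl r) (K xs))"
    by (rule recursive_rec[OF F _ K]) (auto intro!: recursive_code_tl recursive_proj)
  moreover have "rec_nat z (\<lambda>k r. code_tl r) k = code_drop k z" for k z
    by (induction k) (auto simp: code_drop_def)
  ultimately show ?thesis by simp
qed

lemma recursive_code_nth [recursive_intros]: "recursive n F \<Longrightarrow> recursive n K
    \<Longrightarrow> recursive n (\<lambda>xs. code_nth (F xs) (K xs))"
  unfolding code_nth_def by (intro recursive_code_hd recursive_code_drop)

lemma recursive_code_length [recursive_intros]: "recursive n F
    \<Longrightarrow> recursive n (\<lambda>xs. code_length (F xs))"
proof -
  assume F: "recursive n F"
  have f1: "recursive (Suc n) (\<lambda>ys. F (drop 1 ys))" using recursive_drop[OF F, of 1] by simp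
  show ?thesis unfolding code_length_def
    by (rule recursive_least[OF _ F]) (unfold recursive_pred_def, intro recursive_if recursive_pred_eq0 f1
        recursive_code_drop recursive_proj recursive_const, simp)
qed

lemma recursive_code_prepend:
  assumes L: "recursive n L" and F: "recursive (Suc n) (\<lambda>ys. F (ys ! 0) (drop 1 ys))" and B: "recursive n B"
  shows "recursive n (\<lambda>xs. code_prepend (L xs) (\<lambda>i. F i xs) (B xs))"
proof -
  have l2: "recursive (Suc (Suc n)) (\<lambda>ys. L (drop 2 ys))" using recursive_drop[OF L, of 2] by simp
  have "recursive (Suc (Suc n)) (\<lambda>ys. F (L (drop 2 ys) - Suc (ys ! 0)) (drop 2 ys))"
    by (rule recursive_app2_drop2[OF F]) (intro recursive_sub l2 recursive_suc recursive_proj; simp)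
  then have "recursive n (\<lambda>xs. rec_nat (B xs) (\<lambda>k r. code_Cons (F (L xs - Suc k) xs) r) (L xs))"
    by (intro recursive_rec[OF B _ L] recursive_code_Cons) (auto intro: recursive_proj)
  then show ?thesis unfolding code_prepend_def .
qed

lemma div_least: "0 < y \<Longrightarrow> (LEAST q. x < Suc q * y \<or> q = x) = x div (y::nat)"
proof (rule Least_equality)
  assume y: "0 < y"
  show "x < Suc (x div y) * y \<or> x div y = x"
    using y by (metis dividend_less_div_times mult.commute times_div_less_eq_dividend
        add.commute mult_Suc linorder_not_le add_less_mono1 less_add_same_cancel2)
next
  fix q assume y: "0 < y" and "x < Suc q * y \<or> q = x"
  then show "x div y \<le> q"
    by (metis div_le_dividend less_Suc_eq_le less_mult_imp_div_less)
qed

lemma recursive_div [recursive_intros]: "recursive n F \<Longrightarrow> recursive n G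
    \<Longrightarrow> recursive n (\<lambda>xs. F xs div G xs)"
proof -
  assume F: "recursive n F" and G: "recursive n G"
  have f1: "recursive (Suc n) (\<lambda>ys. F (drop 1 ys))" using recursive_drop[OF F, of 1] by simp
  have g1: "recursive (Suc n) (\<lambda>ys. G (drop 1 ys))" using recursive_drop[OF G, of 1] by simp
  have l: "recursive n (\<lambda>xs. LEAST q. F xs < Suc q * G xs \<or> q = F xs)"
    by (rule recursive_least[OF _ F], rule recursive_pred_less[OF f1])
      (intro recursive_mult recursive_suc recursive_proj g1; simp)
  have "recursive n (\<lambda>xs. if G xs = 0 then 0 else (LEAST q. F xs < Suc q * G xs \<or> q = F xs))"
    by (rule recursive_ifz[OF G recursive_const l])
  moreover have "0 < y \<Longrightarrow> (LEAST q. x < y + q * y \<or> q = x) = x div (y::nat)" for x y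
    using div_least[of y x] by simp
  ultimately show ?thesis by (auto elim: recursive_cong)
qed

lemma recursive_mod [recursive_intros]: "recursive n F \<Longrightarrow> recursive n G
    \<Longrightarrow> recursive n (\<lambda>xs. F xs mod G xs)"
proof -
  assume F: "recursive n F" and G: "recursive n G"
  have "recursive n (\<lambda>xs. F xs - G xs * (F xs div G xs))"
    by (intro recursive_sub recursive_mult recursive_div F G)
  then show ?thesis by (rule recursive_cong) (simp add: minus_mult_div_eq_mod)
qed

lemma recursive_pred_odd [recursive_intros]: "recursive n F
    \<Longrightarrow> recursive_pred n (\<lambda>xs. odd (F xs))"
proof -
  assume F: "recursive n F"
  have "recursive_pred n (\<lambda>xs. \<not> (F xs mod 2 = 0))"
      by (intro recursive_pred_not recursive_pred_eq0 recursive_mod F recursive_const)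
  then show ?thesis by (simp add: even_iff_mod_2_eq_zero)
qed

lemma recursive_pred_even [recursive_intros]: "recursive n F
    \<Longrightarrow> recursive_pred n (\<lambda>xs. even (F xs))"
proof -
  assume F: "recursive n F"
  have "recursive_pred n (\<lambda>xs. (F xs mod 2 = 0))" by (intro recursive_pred_eq0 recursive_mod F recursive_const)
  then show ?thesis by (simp add: even_iff_mod_2_eq_zero)
qed

lemma recursive_max [recursive_intros]: "recursive n F \<Longrightarrow> recursive n G
    \<Longrightarrow> recursive n (\<lambda>xs. max (F xs) (G xs))"
  unfolding max_def by (intro recursive_if recursive_pred_le)

definition code_append :: "nat \<Rightarrow> nat \<Rightarrow> nat" where "code_append a b
    = code_prepend (code_length a) (code_nth a) b"

lemma code_append_enc[simp]: "code_append (list_encode xs) (list_encode ys) = list_encode (xs @ ys)"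
proof -
  have "map (code_nth (list_encode xs)) [0..<length xs] = xs"
    by (auto intro!: nth_equalityI)
  then show ?thesis unfolding code_append_def by (simp add: code_prepend_enc)
qed

lemma recursive_code_append[recursive_intros]: "recursive n F \<Longrightarrow> recursive n G
    \<Longrightarrow> recursive n (\<lambda>xs. code_append (F xs) (G xs))"
proof -
  assume F: "recursive n F" and G: "recursive n G"
  have f1: "recursive (Suc n) (\<lambda>ys. F (drop 1 ys))" using recursive_drop[OF F, of 1] by simp
  show ?thesis unfolding code_append_def
    by (rule recursive_code_prepend[OF recursive_code_length[OF F] _ G]) (rule recursive_code_nth[OF
        f1 recursive_proj], simp)
qed

lemma recursive_compose1: "recursive 1 (\<lambda>ys. f (ys ! 0)) \<Longrightarrow> recursive n A
    \<Longrightarrow> recursive n (\<lambda>xs. f (A xs))"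
  by (drule recursive_comp1[of _ n A]) simp_all
lemma recursive_compose2: "recursive 2 (\<lambda>ys. f (ys ! 0) (ys ! 1)) \<Longrightarrow> recursive n A
    \<Longrightarrow> recursive n B \<Longrightarrow> recursive n (\<lambda>xs. f (A xs) (B xs))"
  by (drule recursive_comp2[of _ n A B]) simp_all
lemma recursive_compose3: "recursive 3 (\<lambda>ys. f (ys ! 0) (ys ! 1) (ys ! 2))
    \<Longrightarrow> recursive n A \<Longrightarrow> recursive n B \<Longrightarrow> recursive n C
    \<Longrightarrow> recursive n (\<lambda>xs. f (A xs) (B xs) (C xs))"
  by (drule recursive_comp3[of _ n A B C]) simp_all

lemma recursive_comp4: "recursive 4 g \<Longrightarrow> recursive n F \<Longrightarrow> recursive n G
    \<Longrightarrow> recursive n K \<Longrightarrow> recursive n L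
    \<Longrightarrow> recursive n (\<lambda>xs. g [F xs, G xs, K xs, L xs])"
  using recursive_comp[of 4 g "[F, G, K, L]" n] by (simp add: less_Suc_eq numeral_eq_Suc)
lemma recursive_comp5: "recursive 5 g \<Longrightarrow> recursive n F \<Longrightarrow> recursive n G
    \<Longrightarrow> recursive n K \<Longrightarrow> recursive n L \<Longrightarrow> recursive n M
    \<Longrightarrow> recursive n (\<lambda>xs. g [F xs, G xs, K xs, L xs, M xs])"
  using recursive_comp[of 5 g "[F, G, K, L, M]" n] by (simp add: less_Suc_eq numeral_eq_Suc)

lemma recursive_compose4: "recursive 4 (\<lambda>ys. f (ys ! 0) (ys ! 1) (ys ! 2) (ys ! 3))
    \<Longrightarrow> recursive n A \<Longrightarrow> recursive n B \<Longrightarrow> recursive n C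
    \<Longrightarrow> recursive n D
   \<Longrightarrow> recursive n (\<lambda>xs. f (A xs) (B xs) (C xs) (D xs))"
  by (drule recursive_comp4[of _ n A B C D]) simp_all
lemma recursive_compose5: "recursive 5 (\<lambda>ys. f (ys ! 0) (ys ! 1) (ys ! 2) (ys ! 3) (ys ! 4))
    \<Longrightarrow> recursive n A \<Longrightarrow> recursive n B \<Longrightarrow> recursive n C
    \<Longrightarrow> recursive n D
   \<Longrightarrow> recursive n E \<Longrightarrow> recursive n (\<lambda>xs. f (A xs) (B xs) (C xs) (D xs) (E xs))"
  by (drule recursive_comp5[of _ n A B C D E]) simp_all

declare recursive_rec[recursive_intros] recursive_code_prepend[recursive_intros] recursive_least[recursive_intros]

lemma recursive_pred_if[recursive_intros]: "recursive_pred n P \<Longrightarrow> recursive_pred n Q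
    \<Longrightarrow> recursive_pred n R \<Longrightarrow> recursive_pred n (\<lambda>xs. if P xs then Q xs else R xs)"
proof -
  assume "recursive_pred n P" "recursive_pred n Q" "recursive_pred n R"
  then have "recursive n (\<lambda>xs. if P xs then (if Q xs then 1 else 0) else (if R xs then 1 else 0))"
    unfolding recursive_pred_def by (intro recursive_if recursive_const) (simp_all add: recursive_pred_def)
  then show ?thesis unfolding recursive_pred_def by (rule recursive_cong) simp
qed

lemma total_rec1_recursive: "recursive 1 (\<lambda>xs. h (xs ! 0)) \<Longrightarrow> total_rec1 h"
  unfolding recursive_def total_rec1_def by force

text \<open>A use principle: if output digit \<open>x\<close> and a bound \<open>U f x\<close> on
  the part of the input it reads are computable from a finite prefix, the associate waits until
  \<open>U f x\<close> digits are known.\<close>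

lemma comp_partial_use:
  fixes Phi U :: "(nat \<Rightarrow> nat) \<Rightarrow> nat \<Rightarrow> nat"
  assumes rP: "recursive 1 (\<lambda>xs. Phi (code_nth (unpair_snd (xs ! 0))) (unpair_fst (xs ! 0)))"
    and rU: "recursive 1 (\<lambda>xs. U (code_nth (unpair_snd (xs ! 0))) (unpair_fst (xs ! 0)))"
    and use: "\<And>f g x. (\<forall>i < U f x. f i = g i) \<Longrightarrow> Phi f x = Phi g x \<and> U f x = U g x"
  shows "comp_partial (\<lambda>p. Some (\<lambda>x. Phi p x))"
proof -
  define h where "h = (\<lambda>z. if U (code_nth (unpair_snd z)) (unpair_fst z) \<le> code_length (unpair_snd z)
     then Suc (Phi (code_nth (unpair_snd z)) (unpair_fst z)) else 0)"
  have "recursive 1 (\<lambda>xs. h (xs ! 0))" unfolding h_def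
    by (intro recursive_if recursive_pred_le rU rP recursive_code_length recursive_unpair_snd recursive_proj
        recursive_suc recursive_const) simp
  then have th: "total_rec1 h" by (rule total_rec1_recursive)
  have key: "h (prod_encode (x, list_encode (map p [0..<k]))) =
      (if U p x \<le> k then Suc (Phi p x) else 0)" for p x k
  proof -
    let ?o = "code_nth (list_encode (map p [0..<k]))"
    have agree: "\<And>i. i < k \<Longrightarrow> ?o i = p i" by simp
    have "U ?o x \<le> k \<longleftrightarrow> U p x \<le> k"
    proof
      assume a: "U ?o x \<le> k"
      then have "\<forall>i < U ?o x. ?o i = p i" using agree by auto
      from use[OF this] a show "U p x \<le> k" by simp
    next
      assume a: "U p x \<le> k"
      then have "\<forall>i < U p x. p i = ?o i" using agree by auto
      from use[OF this] a show "U ?o x \<le> k" by simp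
    qed
    moreover have "U p x \<le> k \<Longrightarrow> Phi ?o x = Phi p x"
    proof -
      assume a: "U p x \<le> k"
      then have "\<forall>i < U p x. p i = ?o i" using agree by auto
      from use[OF this] show ?thesis by simp
    qed
    ultimately show ?thesis unfolding h_def by simp
  qed
  show ?thesis unfolding comp_partial_def
  proof (intro exI[of _ h] conjI th allI impI)
    fix p q x assume "Some (\<lambda>x. Phi p x) = Some q"
    then have q: "q = (\<lambda>x. Phi p x)" by simp
    show "\<exists>k. h (prod_encode (x, list_encode (map p [0..<k]))) = Suc (q x) \<and>
         (\<forall>j<k. h (prod_encode (x, list_encode (map p [0..<j]))) = 0)"
      by (rule exI[of _ "U p x"]) (simp add: key q)
  qed
qed

definition sdrop :: "nat \<Rightarrow> cantor \<Rightarrow> cantor" where "sdrop k x = (\<lambda>i. x (i + k))"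

lemma cat_nth_lt[simp]: "i < length w \<Longrightarrow> cat w y i = w ! i" by (simp add: cat_def)
lemma cat_nth_ge[simp]: "length w \<le> i \<Longrightarrow> cat w y i = y (i - length w)" by (simp add: cat_def)
lemma sdrop_cat[simp]: "sdrop (length w) (cat w y) = y" by (simp add: sdrop_def cat_def fun_eq_iff)
lemma cat_append: "cat (u @ w) y = cat u (cat w y)"
  by (auto simp: cat_def fun_eq_iff nth_append)
lemma cyl_iff: "x \<in> cyl u \<longleftrightarrow> x = cat u (sdrop (length u) x)"
  by (auto simp: cyl_def cat_def sdrop_def fun_eq_iff)

lemma resc_iff: "x \<in> resc u A \<longleftrightarrow> x \<in> cyl u \<and> sdrop (length u) x \<in> A"
  by (auto simp: resc_def cyl_iff)

lemma hist_len[simp]: "length (hist s k) = k" by (induction k) auto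

lemma hist_play: "hist s k = map (play s) [0..<k]"
  by (induction k) (auto simp: play_def)

lemma play_cat:
  assumes "play s \<in> cyl u"
  shows "play s = cat u (play (\<lambda>h. s (u @ h)))"
proof -
  have hu: "hist s (length u) = u"
    using assms by (auto simp: hist_play cyl_def intro!: nth_equalityI)
  have h2: "hist s (length u + k) = u @ hist (\<lambda>h. s (u @ h)) k" for k
    by (induction k) (use hu in auto)
  show ?thesis
  proof
    fix i show "play s i = cat u (play (\<lambda>h. s (u @ h))) i"
    proof (cases "i < length u")
      case True then show ?thesis using assms by (simp add: cyl_def)
    next
      case False
      then obtain k where "i = length u + k" by (metis le_Suc_ex not_less)
      then show ?thesis by (simp add: play_def h2)
    qed
  qed
qed

lemma play_follow:
  assumes "\<And>k. k < length u \<Longrightarrow> s (take k u) = u ! k"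
  shows "play s \<in> cyl u"
proof -
  have "k \<le> length u \<Longrightarrow> hist s k = take k u" for k
    by (induction k) (use assms in \<open>auto simp: take_Suc_conv_app_nth\<close>)
  then show ?thesis using assms by (auto simp: cyl_def play_def)
qed

section \<open>The game\<close>

definition choice_word :: "nat \<Rightarrow> bool list" where "choice_word i = replicate i True @ [False]"
definition escape_word :: "nat \<Rightarrow> bool list" where "escape_word n = replicate (Suc n) True"
definition count_true :: "bool list \<Rightarrow> nat" where "count_true c = card {l. l < length c \<and> c ! l}"

lemma length_choice_word[simp]: "length (choice_word i) = Suc i" by (simp add: choice_word_def)
lemma length_escape_word[simp]: "length (escape_word n) = Suc n" by (simp add: escape_word_def)
lemma choice_word_nth: "choice_word i ! k = (k < i)" if "k \<le> i" using that
  by (auto simp: choice_word_def nth_append)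

text \<open>Player 2 moves \<open>True\<close> to go on and
  \<open>False\<close> to stop, so that the first \<open>n + 1\<close> moves end in a leaf
  \<open>choice_word i\<close> (\<open>i < n\<close>: play \<open>F\<^sub>i\<close>, lemma suffix
  \<open>F\<close>), \<open>escape_word n\<close> (concede, suffix \<open>D\<close>) or
  \<open>choice_word n\<close>; after the latter player 1 writes \<open>m\<close> claims
  \<open>c\<close> and player 2 either challenges some \<open>j\<close> by
  \<open>choice_word j\<close> (suffix \<open>C\<close>) or accepts by
  \<open>replicate m True\<close> (suffix \<open>E\<close>).\<close>

definition outcome :: "nat \<Rightarrow> nat \<Rightarrow> (nat \<Rightarrow> cantor set) \<Rightarrow> (nat
    \<Rightarrow> cantor set) \<Rightarrow> cantor \<Rightarrow> nat" where
  "outcome n m WF WW x = (let b = (LEAST b. b \<le> n \<and> \<not> x b \<or> b = Suc n) in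
    if b < n then (if sdrop (Suc b) x \<in> WF b then m + 2 else 1)
    else if b = n then (let j = (LEAST j. j < m \<and> \<not> x (Suc n + m + j) \<or> j = m) in
      if j < m then (if x (Suc n + j) then (if sdrop (Suc n + m + Suc j) x \<in> WW j then m + 2 else 1)
                     else card {l. l < m \<and> x (Suc n + l)} + 2)
      else card {l. l < m \<and> x (Suc n + l)} + 2)
    else m + 2)"

lemma least_root_choice_word:
  assumes "i \<le> n" "\<forall>k\<le>i. x k = choice_word i ! k"
  shows "(LEAST b. b \<le> n \<and> \<not> x b \<or> b = Suc n) = i"
  by (rule Least_equality) (use assms in \<open>auto simp: choice_word_nth not_less[symmetric]\<close>)

lemma least_root_escape_word:
  assumes "\<forall>k\<le>n. x k"
  shows "(LEAST b. b \<le> n \<and> \<not> x b \<or> b = Suc n) = Suc n"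
  by (rule Least_equality) (use assms in auto)

lemma escape_word_nth[simp]: "k < Suc n \<Longrightarrow> escape_word n ! k"
  by (simp add: escape_word_def del: replicate_Suc)

lemma outcome_F:
  assumes "i < n"
  shows "outcome n m WF WW (cat (choice_word i) y) = (if y \<in> WF i then m + 2 else 1)"
proof -
  have "(LEAST b. b \<le> n \<and> \<not> cat (choice_word i) y b \<or> b = Suc n) = i"
    by (rule least_root_choice_word) (use assms in auto)
  moreover have "sdrop (Suc i) (cat (choice_word i) y) = y" using sdrop_cat[of "choice_word i" y] by simp
  ultimately show ?thesis using assms unfolding outcome_def Let_def by simp
qed

lemma outcome_D: "outcome n m WF WW (cat (escape_word n) y) = m + 2"
proof -
  have "(LEAST b. b \<le> n \<and> \<not> cat (escape_word n) y b \<or> b = Suc n) = Suc n"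
    by (rule least_root_escape_word) auto
  then show ?thesis unfolding outcome_def Let_def by simp
qed

lemma cat_claims_nth:
  assumes "length c = m"
  shows "cat (choice_word n @ c @ w) y k = (if k < Suc n then choice_word n ! k else if k
      < Suc n + m then c ! (k - Suc n)
     else cat w y (k - Suc n - m))"
  using assms by (auto simp: cat_append cat_def nth_append add.assoc)

lemma outcome_C:
  assumes "length c = m" "j < m"
  shows "outcome n m WF WW (cat (choice_word n @ c @ choice_word j) y) =
    (if c ! j then (if y \<in> WW j then m + 2 else 1) else count_true c + 2)"
proof -
  let ?x = "cat (choice_word n @ c @ choice_word j) y"
  have x: "?x k = (if k < Suc n then choice_word n ! k else if k < Suc n + m then c ! (k - Suc n)
     else cat (choice_word j) y (k - Suc n - m))" for k by (rule cat_claims_nth[OF assms(1)])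
  have b: "(LEAST b. b \<le> n \<and> \<not> ?x b \<or> b = Suc n) = n"
    by (rule least_root_choice_word) (auto simp: x)
  have jj: "(LEAST j'. j' < m \<and> \<not> ?x (Suc n + m + j') \<or> j' = m) = j"
    by (rule Least_equality) (use assms in \<open>auto simp: x choice_word_nth not_less[symmetric]\<close>)
  have c: "?x (Suc n + l) = c ! l" if "l < m" for l using that by (simp add: x)
  have cc: "{l. l < m \<and> ?x (Suc n + l)} = {l. l < length c \<and> c ! l}" using c assms by auto
  have sh: "sdrop (Suc n + m + Suc j) ?x = y"
    using sdrop_cat[of "choice_word n @ c @ choice_word j" y] assms by (simp add: add.assoc)
  have cj: "?x (Suc n + j) = c ! j" by (rule c[OF assms(2)])
  show ?thesis using assms unfolding outcome_def Let_def b jj sh count_true_def cc cj by simp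
qed

lemma outcome_E:
  assumes "length c = m"
  shows "outcome n m WF WW (cat (choice_word n @ c @ replicate m True) y) = count_true c + 2"
proof -
  let ?x = "cat (choice_word n @ c @ replicate m True) y"
  have x: "?x k = (if k < Suc n then choice_word n ! k else if k < Suc n + m then c ! (k - Suc n)
     else cat (replicate m True) y (k - Suc n - m))" for k by (rule cat_claims_nth[OF assms(1)])
  have b: "(LEAST b. b \<le> n \<and> \<not> ?x b \<or> b = Suc n) = n"
    by (rule least_root_choice_word) (auto simp: x)
  have jj: "(LEAST j'. j' < m \<and> \<not> ?x (Suc n + m + j') \<or> j' = m) = m"
    by (rule Least_equality) (use assms in \<open>auto simp: x\<close>)
  have c: "?x (Suc n + l) = c ! l" if "l < m" for l using that by (simp add: x)
  have cc: "{l. l < m \<and> ?x (Suc n + l)} = {l. l < length c \<and> c ! l}" using c assms by auto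
  show ?thesis unfolding outcome_def Let_def b jj count_true_def cc by simp
qed

lemma cyl_append_iff: "x \<in> cyl (u @ w) \<longleftrightarrow> x \<in> cyl u \<and> sdrop (length u) x \<in> cyl w"
proof -
  have "(\<forall>i<length u + length w. x i = (u @ w) ! i) \<longleftrightarrow>
      (\<forall>i<length u. x i = u ! i) \<and> (\<forall>i<length w. x (i + length u) = w ! i)" (is "?l
          \<longleftrightarrow> ?r")
  proof
    assume ?l then show ?r by (auto simp: nth_append)
  next
    assume r: ?r
    show ?l
    proof (intro allI impI)
      fix i assume "i < length u + length w"
      then show "x i = (u @ w) ! i"
        using r[THEN conjunct1, rule_format, of i] r[THEN conjunct2, rule_format, of "i - length u"]
        by (cases "i < length u") (auto simp: nth_append)
    qed
  qed
  then show ?thesis by (simp add: cyl_def sdrop_def)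
qed

lemma cyl_choice_word_or_replicate:
  fixes y :: cantor
  obtains (choice) i where "i < N" "y \<in> cyl (choice_word i)" | (all) "y \<in> cyl (replicate N True)"
proof (cases "\<forall>k<N. y k")
  case True then show ?thesis using all by (simp add: cyl_def)
next
  case False
  define i where "i = (LEAST k. \<not> y k)"
  have "\<not> y i" using False unfolding i_def by (metis (mono_tags) LeastI)
  moreover have "y k" if "k < i" for k using that not_less_Least unfolding i_def by blast
  moreover have "i < N" using False unfolding i_def by (meson Least_le le_less_trans)
  ultimately show ?thesis
    using choice by (auto simp: cyl_def choice_word_def nth_append less_Suc_eq)
qed
lemma leaf_cases:
  fixes x :: cantor
  obtains (F) i where "i < n" "x \<in> cyl (choice_word i)"
    | (D) "x \<in> cyl (escape_word n)"
    | (C) c j where "length c = m" "j < m" "x \<in> cyl (choice_word n @ c @ choice_word j)"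
    | (E) c where "length c = m" "x \<in> cyl (choice_word n @ c @ replicate m True)"
proof (cases x rule: cyl_choice_word_or_replicate[where N="Suc n"])
  case (choice i)
  show ?thesis
  proof (cases "i < n")
    case True
    then show ?thesis using F choice(2) by blast
  next
    case False
    with choice have "i = n" by simp
    with choice have root: "x \<in> cyl (choice_word n)" by simp
    define c where "c = map (sdrop (Suc n) x) [0..<m]"
    define y where "y = sdrop m (sdrop (Suc n) x)"
    have c: "length c = m" "sdrop (Suc n) x \<in> cyl c" by (simp_all add: c_def cyl_def)
    have rest: "x \<in> cyl (choice_word n @ c @ w) \<longleftrightarrow> y \<in> cyl w" for w
      using root c by (simp add: cyl_append_iff y_def)
    show ?thesis
    proof (cases y rule: cyl_choice_word_or_replicate[where N=m])
      case (choice j)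
      then show ?thesis using C[OF c(1) choice(1)] rest by blast
    next
      case all
      then show ?thesis using E[OF c(1)] rest by blast
    qed
  qed
next
  case all
  then show ?thesis using D by (simp add: escape_word_def)
qed

lemma play_at: "play s \<in> cyl u \<Longrightarrow> k < length u \<Longrightarrow> s (take k u) = u ! k"
proof -
  assume a: "play s \<in> cyl u" "k < length u"
  have "take k u = hist s k" using a by (auto simp: hist_play cyl_def intro!: nth_equalityI)
  then show ?thesis using a by (simp add: cyl_def play_def)
qed

lemma take_choice_word: "k \<le> i \<Longrightarrow> take k (choice_word i) = replicate k True"
  by (simp add: choice_word_def)

lemma choice_word_nth_last[simp]: "choice_word i ! i = False" by (simp add: choice_word_def nth_append)

lemma cyl_choice_word_disj: "x \<in> cyl (choice_word i) \<Longrightarrow> x \<in> cyl (choice_word k)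
    \<Longrightarrow> i = k"
proof (rule ccontr)
  assume a: "x \<in> cyl (choice_word i)" "x \<in> cyl (choice_word k)" "i \<noteq> k"
  show False
  proof (cases "i < k")
    case True
    then have "x i = choice_word i ! i" "x i = choice_word k ! i" using a by (auto simp: cyl_def)
    then show False using True by (simp add: choice_word_nth)
  next
    case False
    then have "k < i" using a by simp
    then have "x k = choice_word k ! k" "x k = choice_word i ! k" using a by (auto simp: cyl_def)
    then show False using \<open>k < i\<close> by (simp add: choice_word_nth)
  qed
qed

lemma cyl_choice_word_escape_word: "x \<in> cyl (choice_word i) \<Longrightarrow> i \<le> n \<Longrightarrow> x
    \<in> cyl (escape_word n) \<Longrightarrow> False"
proof -
  assume a: "x \<in> cyl (choice_word i)" "i \<le> n" "x \<in> cyl (escape_word n)"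
  then have "x i = choice_word i ! i" "x i = escape_word n ! i" by (auto simp: cyl_def)
  then show False using a(2) by simp
qed

definition claims_of :: "(bool list \<Rightarrow> bool) \<Rightarrow> nat \<Rightarrow> nat
    \<Rightarrow> bool list" where
  "claims_of s n k = rec_nat [] (\<lambda>_ c. c @ [s (choice_word n @ c)]) k"

lemma claims_of_0[simp]: "claims_of s n 0 = []" by (simp add: claims_of_def)
lemma claims_of_Suc[simp]: "claims_of s n (Suc k) = claims_of s n k @ [s (choice_word n @ claims_of s n k)]"
  by (simp add: claims_of_def)
lemma length_claims_of[simp]: "length (claims_of s n k) = k" by (induction k) auto
lemma take_claims_of: "l \<le> k \<Longrightarrow> take l (claims_of s n k) = claims_of s n l"
  by (induction k) (auto simp: le_Suc_eq)
lemma claims_of_nth: "l < k \<Longrightarrow> claims_of s n k ! l = s (choice_word n @ claims_of s n l)"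
  by (induction k) (auto simp: nth_append less_Suc_eq)

definition deviate :: "(bool list \<Rightarrow> nat) \<Rightarrow> nat \<Rightarrow> (bool list \<Rightarrow>
    bool) \<Rightarrow> (bool list \<Rightarrow> bool) \<Rightarrow> bool list \<Rightarrow> bool" where
  "deviate d a s s' = (\<lambda>h. if d h = a then s' h else s h)"

definition pref_ap :: "nat \<Rightarrow> nat \<Rightarrow> nat \<Rightarrow> bool" where
  "pref_ap a o1 o2 = (if a = 1 then o1 < o2 else o2 < o1)"

lemma nash_iff: "nash 2 d pref_ap v s \<longleftrightarrow>
   (\<forall>s'. v (play (deviate d 1 s s')) \<le> v (play s)) \<and> (\<forall>s'. v (play s)
       \<le> v (play (deviate d 2 s s')))"
proof -
  have e: "{1..2::nat} = {1, 2}" by auto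
  show ?thesis unfolding nash_def deviate_def pref_ap_def e by (auto simp: not_less)
qed

locale reduction_game =
  fixes n m :: nat and dF dW :: "nat \<Rightarrow> bool list \<Rightarrow> nat" and WF WW :: "nat
      \<Rightarrow> cantor set"
    and d :: "bool list \<Rightarrow> nat"
  assumes dF12: "i < n \<Longrightarrow> dF i r \<in> {1, 2}"
    and dW12: "j < m \<Longrightarrow> dW j r \<in> {1, 2}"
    and d12: "d h \<in> {1, 2}"
    and d_root: "a \<le> n \<Longrightarrow> d (replicate a True) = 2"
    and d_F: "i < n \<Longrightarrow> d (choice_word i @ r) = dF i r"
    and d_cl: "length c < m \<Longrightarrow> d (choice_word n @ c) = 1"
    and d_ch: "length c = m \<Longrightarrow> a < m \<Longrightarrow> d (choice_word n @ c @ replicate a True) = 2"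
    and d_W: "length c = m \<Longrightarrow> j < m \<Longrightarrow> d (choice_word n @ c @ choice_word j @ r) = dW j r"
    and FW: "i < n \<Longrightarrow> \<exists>\<sigma>. win1 (dF i) (WF i) \<sigma>"
    and det: "j < m \<Longrightarrow> determined (dW j) (WW j)"
begin

abbreviation "v \<equiv> outcome n m WF WW"
definition "wins1 j = (\<exists>\<sigma>. win1 (dW j) (WW j) \<sigma>)"
definition "true_claims = map wins1 [0..<m]"
definition "game_value = count_true true_claims + 2"
definition "\<sigma>F i = (SOME \<sigma>. win1 (dF i) (WF i) \<sigma>)"
definition "\<sigma>W j = (SOME \<sigma>. win1 (dW j) (WW j) \<sigma>)"
definition "\<tau>W j = (SOME \<sigma>. win2 (dW j) (WW j) \<sigma>)"
definition "root_choice h = (LEAST b. b \<le> n \<and> b < length h \<and> \<not> h ! b \<or> b = Suc n)"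
definition "challenge_choice z = (LEAST j. j < m \<and> j < length z \<and> \<not> z ! j \<or> j = m)"
\<comment> \<open>Player 2 challenges a false claim of a win if there is one, otherwise a claimed
  loss, and otherwise accepts.\<close>
definition "challenge_target c = (if \<exists>l<m. c ! l \<and> \<not> wins1 l then LEAST l. l < m
    \<and> c ! l \<and> \<not> wins1 l
   else if \<exists>l<m. \<not> c ! l then LEAST l. l < m \<and> \<not> c ! l else m)"
definition "strat1 h = (let b = root_choice h in if b < n then \<sigma>F b (drop (Suc b) h)
   else if b = n then (let r = drop (Suc n) h in if length r < m then wins1 (length r)
      else (let z = drop m r; j = challenge_choice z in if j < m then \<sigma>W j (drop (Suc j) z) else False))
   else False)"
definition "strat2 h = (let b = root_choice h in if b < n then False
   else if b = n then (let r = drop (Suc n) h in if length r < m then False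
      else (let z = drop m r; j = challenge_choice z in if j < m then \<tau>W j (drop (Suc j) z) else length z
          < challenge_target (take m r)))
   else length h < n)"

lemma \<sigma>F: "i < n \<Longrightarrow> win1 (dF i) (WF i) (\<sigma>F i)"
  unfolding \<sigma>F_def using FW by (metis someI_ex)
lemma \<sigma>W: "wins1 j \<Longrightarrow> win1 (dW j) (WW j) (\<sigma>W j)"
  unfolding \<sigma>W_def wins1_def by (metis someI_ex)
lemma \<tau>W: "j < m \<Longrightarrow> \<not> wins1 j \<Longrightarrow> win2 (dW j) (WW j) (\<tau>W j)"
  unfolding \<tau>W_def wins1_def using det unfolding determined_def by (metis someI_ex)

lemma root_choice_choice_word: "i \<le> n \<Longrightarrow> root_choice (choice_word i @ r) = i"
  unfolding root_choice_def by (rule Least_equality) (auto simp: nth_append choice_word_nth not_less[symmetric])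

lemma root_choice_rep: "a \<le> n \<Longrightarrow> root_choice (replicate a True) = Suc n"
  unfolding root_choice_def by (rule Least_equality) auto

lemma challenge_choice_choice_word: "j < m \<Longrightarrow> challenge_choice (choice_word j @ r) = j"
  unfolding challenge_choice_def by (rule Least_equality) (auto simp: nth_append choice_word_nth not_less[symmetric])

lemma challenge_choice_rep: "challenge_choice (replicate a True) = m"
  unfolding challenge_choice_def by (rule Least_equality) auto

lemma strat1_F: "i < n \<Longrightarrow> strat1 (choice_word i @ r) = \<sigma>F i r"
  by (simp add: strat1_def root_choice_choice_word)
lemma strat1_cl: "length c < m \<Longrightarrow> strat1 (choice_word n @ c) = wins1 (length c)"
  by (simp add: strat1_def root_choice_choice_word)
lemma strat1_W: "length c = m \<Longrightarrow> j < m
    \<Longrightarrow> strat1 (choice_word n @ c @ choice_word j @ r) = \<sigma>W j r"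
  by (simp add: strat1_def root_choice_choice_word challenge_choice_choice_word)

lemma strat2_root: "a \<le> n \<Longrightarrow> strat2 (replicate a True) = (a < n)"
  by (simp add: strat2_def root_choice_rep)
lemma strat2_ch: "length c = m \<Longrightarrow> a < m
    \<Longrightarrow> strat2 (choice_word n @ c @ replicate a True) = (a < challenge_target c)"
  by (simp add: strat2_def root_choice_choice_word challenge_choice_rep)
lemma strat2_W: "length c = m \<Longrightarrow> j < m
    \<Longrightarrow> strat2 (choice_word n @ c @ choice_word j @ r) = \<tau>W j r"
  by (simp add: strat2_def root_choice_choice_word challenge_choice_choice_word)

lemma count_true_le: "length c = m \<Longrightarrow> count_true c \<le> m"
proof -
  assume "length c = m"
  then have "{l. l < length c \<and> c ! l} \<subseteq> {..<m}" by auto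
  then show ?thesis unfolding count_true_def by (metis card_lessThan card_mono finite_lessThan)
qed

lemma game_value_le: "game_value \<le> m + 2" unfolding game_value_def using count_true_le[of true_claims]
  by (simp add: true_claims_def)

lemma count_true_mono: "length c = length c'
    \<Longrightarrow> (\<forall>l<length c. c ! l \<longrightarrow> c' ! l)
    \<Longrightarrow> count_true c \<le> count_true c'"
  unfolding count_true_def by (intro card_mono) auto

lemma count_true_strict: "length c = length c'
    \<Longrightarrow> (\<forall>l<length c. c ! l \<longrightarrow> c' ! l) \<Longrightarrow> j < length c
   \<Longrightarrow> \<not> c ! j \<Longrightarrow> c' ! j \<Longrightarrow> count_true c < count_true c'"
  unfolding count_true_def by (intro psubset_card_mono) auto

lemma true_claims_nth: "l < m \<Longrightarrow> true_claims ! l = wins1 l" by (simp add: true_claims_def)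
lemma length_true_claims[simp]: "length true_claims = m" by (simp add: true_claims_def)

lemma deviate_choice_word_rest:
  "i < n \<Longrightarrow> (\<lambda>r. deviate d 1 s strat1 (choice_word i @ r)) = (\<lambda>r. if dF i r = 1
      then \<sigma>F i r else s (choice_word i @ r))"
  by (simp add: deviate_def d_F strat1_F)

lemma claims_forced:
  assumes x: "play (deviate d 1 s strat1) \<in> cyl (choice_word n @ c @ w)" and cm: "length c = m"
  shows "c = true_claims"
proof -
  let ?p = "deviate d 1 s strat1"
  let ?u = "choice_word n @ c @ w"
  have cl: "c ! l = wins1 l" if l: "l < m" for l
  proof -
    have k: "Suc n + l < length ?u" using l cm by simp
    have tk: "take (Suc n + l) ?u = choice_word n @ take l c" using l cm by simp
    have "?p (take (Suc n + l) ?u) = ?u ! (Suc n + l)" by (rule play_at[OF x k])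
    then show ?thesis using l cm by (simp add: tk deviate_def d_cl strat1_cl nth_append)
  qed
  show "c = true_claims" by (rule nth_equalityI) (simp_all only: cm length_true_claims true_claims_nth cl)
qed

lemma value_lower: "game_value \<le> v (play (deviate d 1 s strat1))"
proof -
  let ?p = "deviate d 1 s strat1"
  let ?x = "play ?p"
  show ?thesis
  proof (cases ?x rule: leaf_cases[where n=n and m=m])
    case (F i)
    have x: "?x = cat (choice_word i) (play (\<lambda>r. ?p (choice_word i @ r)))" by (rule play_cat[OF F(2)])
    have "play (\<lambda>r. ?p (choice_word i @ r)) \<in> WF i"
      using \<sigma>F[OF F(1), unfolded win1_def, rule_format, of "\<lambda>r. s (choice_word i @ r)"]
      unfolding deviate_choice_word_rest[OF F(1)] by simp
    then show ?thesis using game_value_le unfolding x by (simp add: outcome_F[OF F(1)])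
  next
    case D
    then show ?thesis using game_value_le play_cat[OF D] by (metis outcome_D)
  next
    case (E c)
    have "c = true_claims" by (rule claims_forced[OF E(2) E(1)])
    then show ?thesis using play_cat[OF E(2)] E(1) by (metis outcome_E game_value_def order_refl)
  next
    case (C c j)
    let ?u = "choice_word n @ c @ choice_word j"
    have c: "c = true_claims" by (rule claims_forced[OF C(3) C(1)])
    have cl: "c ! l = wins1 l" if l: "l < m" for l using c l by (simp add: true_claims_nth)
    have x: "?x = cat ?u (play (\<lambda>r. ?p (?u @ r)))" by (rule play_cat[OF C(3)])
    have rest: "(\<lambda>r. ?p (?u @ r)) = (\<lambda>r. if dW j r = 1 then \<sigma>W j r else s (?u @ r))"
      using C by (simp add: deviate_def d_W strat1_W)
    show ?thesis
    proof (cases "wins1 j")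
      case True
      have "play (\<lambda>r. ?p (?u @ r)) \<in> WW j"
        using \<sigma>W[OF True, unfolded win1_def, rule_format, of "\<lambda>r. s (?u @ r)"] unfolding rest by simp
      then show ?thesis using game_value_le C True cl unfolding x by (simp add: outcome_C)
    next
      case False
      then show ?thesis using C cl unfolding x by (simp add: outcome_C game_value_def c[symmetric])
    qed
  qed
qed

lemma strat2_reaches_claims: "play (deviate d 2 s strat2) \<in> cyl (choice_word n)"
proof (rule play_follow)
  fix k assume "k < length (choice_word n)"
  then have k: "k \<le> n" by simp
  show "deviate d 2 s strat2 (take k (choice_word n)) = choice_word n ! k"
    using k by (simp add: take_choice_word deviate_def d_root strat2_root choice_word_nth)
qed

lemma challenge_target_cases:
  obtains (one) "challenge_target c < m" "c ! challenge_target c" "\<not> wins1 (challenge_target c)"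
  | (zero) "challenge_target c < m" "\<not> c ! challenge_target c" "\<forall>l<m. c ! l \<longrightarrow> wins1 l"
  | (none) "challenge_target c = m" "\<forall>l<m. c ! l \<and> wins1 l"
proof -
  consider (a) "\<exists>l<m. c ! l \<and> \<not> wins1 l" | (b) "\<not> (\<exists>l<m. c ! l
      \<and> \<not> wins1 l)" "\<exists>l<m. \<not> c ! l"
    | (c) "\<not> (\<exists>l<m. c ! l \<and> \<not> wins1 l)" "\<not> (\<exists>l<m. \<not> c ! l)" by blast
  then show ?thesis
  proof cases
    case a
    then have "challenge_target c = (LEAST l. l < m \<and> c ! l \<and> \<not> wins1 l)"
        by (simp add: challenge_target_def)
    moreover have "(LEAST l. l < m \<and> c ! l \<and> \<not> wins1 l) < m \<and> c ! (LEAST l. l < m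
        \<and> c ! l \<and> \<not> wins1 l)
       \<and> \<not> wins1 (LEAST l. l < m \<and> c ! l \<and> \<not> wins1 l)"
      using a by (metis (mono_tags, lifting) LeastI)
    ultimately show ?thesis using one by simp
  next
    case b
    have "challenge_target c = (LEAST l. l < m \<and> \<not> c ! l)"
      unfolding challenge_target_def by (subst if_not_P[OF b(1)], subst if_P[OF b(2)], rule refl)
    moreover have "(LEAST l. l < m \<and> \<not> c ! l) < m \<and> \<not> c ! (LEAST l. l < m \<and> \<not> c ! l)"
      using b by (metis (mono_tags, lifting) LeastI)
    ultimately show ?thesis using zero b by auto
  next
    case c
    have "challenge_target c = m"
      unfolding challenge_target_def by (subst if_not_P[OF c(1)], subst if_not_P[OF c(2)], rule refl)
    moreover have "\<forall>l<m. c ! l \<and> wins1 l" using c by blast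
    ultimately show ?thesis by (rule none)
  qed
qed

lemma strat2_accept_target:
  assumes x: "play (deviate d 2 s strat2) \<in> cyl (choice_word n @ c @ replicate m True)" and c: "length c = m"
  shows "challenge_target c = m"
proof (rule ccontr)
  let ?u = "choice_word n @ c @ replicate m True"
  assume "challenge_target c \<noteq> m"
  then have t: "challenge_target c < m" by (cases c rule: challenge_target_cases) auto
  let ?k = "Suc n + m + challenge_target c"
  have k: "?k < length ?u" using t c by simp
  have tk: "take ?k ?u = choice_word n @ c @ replicate (challenge_target c) True" using t c by simp
  have "deviate d 2 s strat2 (take ?k ?u) = ?u ! ?k" by (rule play_at[OF x k])
  then show False using t c by (simp add: tk deviate_def d_ch strat2_ch nth_append)
qed

lemma strat2_challenge_target:
  assumes x: "play (deviate d 2 s strat2) \<in> cyl (choice_word n @ c @ choice_word j)"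
    and c: "length c = m" "j < m"
  shows "challenge_target c = j"
proof -
  let ?u = "choice_word n @ c @ choice_word j"
  have ta: "(a < challenge_target c) = (a < j)" if a: "a \<le> j" for a
  proof -
    let ?k = "Suc n + m + a"
    have k: "?k < length ?u" using a c by simp
    have tk: "take ?k ?u = choice_word n @ c @ replicate a True" using a c by (simp add: take_choice_word)
    have "deviate d 2 s strat2 (take ?k ?u) = ?u ! ?k" by (rule play_at[OF x k])
    then show ?thesis using a c by (simp add: tk deviate_def d_ch strat2_ch nth_append choice_word_nth take_choice_word)
  qed
  have "\<not> j < challenge_target c" using ta[of j] by simp
  moreover have "\<not> challenge_target c < j" using ta[of "challenge_target c"] by fastforce
  ultimately show ?thesis by simp
qed

lemma value_upper: "v (play (deviate d 2 s strat2)) \<le> game_value"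
proof -
  let ?p = "deviate d 2 s strat2"
  let ?x = "play ?p"
  have xn: "?x \<in> cyl (choice_word n)" by (rule strat2_reaches_claims)
  show ?thesis
  proof (cases ?x rule: leaf_cases[where n=n and m=m])
    case (F i)
    then show ?thesis using cyl_choice_word_disj[OF F(2) xn] by simp
  next
    case D
    then show ?thesis using cyl_choice_word_escape_word[OF xn _ D] by simp
  next
    case (E c)
    have tm: "challenge_target c = m" by (rule strat2_accept_target[OF E(2,1)])
    have "\<forall>l<m. c ! l \<and> wins1 l" using tm by (cases c rule: challenge_target_cases) auto
    then have "count_true c \<le> count_true true_claims" using E(1)
        by (intro count_true_mono) (auto simp: true_claims_nth)
    then show ?thesis using play_cat[OF E(2)] E(1) by (metis outcome_E game_value_def add_le_mono1)
  next
    case (C c j)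
    let ?u = "choice_word n @ c @ choice_word j"
    have tj: "challenge_target c = j" by (rule strat2_challenge_target[OF C(3,1,2)])
    have x: "?x = cat ?u (play (\<lambda>r. ?p (?u @ r)))" by (rule play_cat[OF C(3)])
    have rest: "(\<lambda>r. ?p (?u @ r)) = (\<lambda>r. if dW j r = 2 then \<tau>W j r else s (?u @ r))"
      using C by (simp add: deviate_def d_W strat2_W)
    show ?thesis
    proof (cases c rule: challenge_target_cases)
      case one
      then have nt: "\<not> wins1 j" "c ! j" using tj by auto
      have "play (\<lambda>r. ?p (?u @ r)) \<notin> WW j"
        using \<tau>W[OF C(2) nt(1), unfolded win2_def, rule_format, of "\<lambda>r. s (?u @ r)"] unfolding rest by simp
      then show ?thesis using C nt by (simp add: x outcome_C game_value_def)
    next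
      case zero
      then have "\<not> c ! j" using tj by auto
      moreover have "count_true c \<le> count_true true_claims" using zero C
          by (intro count_true_mono) (auto simp: true_claims_nth)
      ultimately show ?thesis using C by (simp add: x outcome_C game_value_def)
    next
      case none
      then show ?thesis using tj C by simp
    qed
  qed
qed

definition "equilibrium h = (if d h = 2 then strat2 h else strat1 h)"

lemma d_1_or_2: "d h = 1 \<or> d h = 2" using d12[of h] by auto

lemma deviate1_equilibrium: "deviate d 1 equilibrium s' = deviate d 2 s' strat2"
  unfolding deviate_def equilibrium_def fun_eq_iff using d_1_or_2 by auto

lemma deviate2_equilibrium: "deviate d 2 equilibrium s' = deviate d 1 s' strat1"
  unfolding deviate_def equilibrium_def fun_eq_iff using d_1_or_2 by auto

lemma equilibrium_deviate2_strat2: "equilibrium = deviate d 2 equilibrium strat2"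
  unfolding deviate_def equilibrium_def fun_eq_iff by auto
lemma equilibrium_deviate1_strat1: "equilibrium = deviate d 1 equilibrium strat1"
  unfolding deviate_def equilibrium_def fun_eq_iff using d_1_or_2 by auto

lemma outcome_equilibrium: "v (play equilibrium) = game_value"
  using value_upper[of equilibrium] value_lower[of equilibrium] equilibrium_deviate2_strat2 equilibrium_deviate1_strat1 by (metis antisym)

lemma nash_equilibrium: "nash 2 d pref_ap v equilibrium"
  unfolding nash_iff outcome_equilibrium deviate1_equilibrium deviate2_equilibrium
      using value_upper value_lower by blast

lemma nash_value_bounds:
  assumes "nash 2 d pref_ap v s"
  shows "game_value \<le> v (play s)" "\<And>s'. game_value \<le> v (play (deviate d 2 s s'))"
proof -
  show "game_value \<le> v (play s)" using assms value_lower[of s] unfolding nash_iff by (metis le_trans)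
  then show "\<And>s'. game_value \<le> v (play (deviate d 2 s s'))" using assms unfolding nash_iff by (metis le_trans)
qed

lemma game_value_ge2: "2 \<le> game_value" by (simp add: game_value_def)

lemma nash_wins_findws:
  assumes ne: "nash 2 d pref_ap v s" and i: "i < n"
  shows "win1 (dF i) (WF i) (\<lambda>r. s (choice_word i @ r))"
  unfolding win1_def
proof
  fix \<tau> :: "bool list \<Rightarrow> bool"
  define s' where "s' h = (if length h \<le> i then length h < i else \<tau> (drop (Suc i) h))" for h
  let ?p = "deviate d 2 s s'"
  have cy: "play ?p \<in> cyl (choice_word i)"
  proof (rule play_follow)
    fix k assume "k < length (choice_word i)"
    then have k: "k \<le> i" by simp
    show "?p (take k (choice_word i)) = choice_word i ! k"
      using k i by (simp add: take_choice_word deviate_def d_root s'_def choice_word_nth)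
  qed
  have rest: "(\<lambda>r. ?p (choice_word i @ r)) = (\<lambda>h. if dF i h = 1
      then s (choice_word i @ h) else \<tau> h)"
    unfolding fun_eq_iff deviate_def s'_def using i dF12[OF i] by (auto simp: d_F)
  have x: "play ?p = cat (choice_word i) (play (\<lambda>r. ?p (choice_word i @ r)))" by (rule play_cat[OF cy])
  show "play (\<lambda>h. if dF i h = 1 then s (choice_word i @ h) else \<tau> h) \<in> WF i"
  proof (rule ccontr)
    assume "play (\<lambda>h. if dF i h = 1 then s (choice_word i @ h) else \<tau> h) \<notin> WF i"
    then have "v (play ?p) = 1" unfolding x rest by (simp add: outcome_F[OF i])
    then show False using nash_value_bounds(2)[OF ne, of s'] game_value_ge2 by simp
  qed
qed

lemma challenge_deviation:
  fixes s \<tau> :: "bool list \<Rightarrow> bool"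
  assumes j: "j < m"
  defines "u \<equiv> choice_word n @ claims_of s n m @ choice_word j"
  shows "\<exists>s'. play (deviate d 2 s s') = cat u (play (\<lambda>h. if dW j h = 2 then \<tau> h else s (u @ h)))"
proof -
  let ?c = "claims_of s n m"
  define s' where "s' h = (if length h \<le> n then length h < n else if length h < Suc n + m then False
     else if length h - (Suc n + m) \<le> j then length h - (Suc n + m) < j
     else \<tau> (drop (Suc n + m + Suc j) h))" for h
  let ?p = "deviate d 2 s s'"
  have cy: "play ?p \<in> cyl u"
  proof (rule play_follow)
    fix k assume k: "k < length u"
    consider (a) "k \<le> n" | (b) "Suc n \<le> k" "k < Suc n + m" | (c) a where "k = Suc n + m + a" "a \<le> j"
    proof -
      have kk: "k < Suc n + m + Suc j" using k unfolding u_def by simp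
      show ?thesis
      proof (cases "k \<le> n")
        case True then show ?thesis using that(1) by blast
      next
        case F1: False
        show ?thesis
        proof (cases "k < Suc n + m")
          case True then show ?thesis using that(2) F1 by simp
        next
          case False
          then have "k = Suc n + m + (k - (Suc n + m))" "k - (Suc n + m) \<le> j" using kk by simp_all
          then show ?thesis using that(3) by blast
        qed
      qed
    qed
    then show "?p (take k u) = u ! k"
    proof cases
      case a
      then have "take k u = replicate k True" unfolding u_def by (simp add: take_choice_word)
      then show ?thesis using a unfolding u_def by (simp add: deviate_def d_root s'_def choice_word_nth nth_append)
    next
      case b
      then obtain l where l: "k = Suc n + l" "l < m" by (metis add_less_cancel_left le_Suc_ex)
      then have "take k u = choice_word n @ claims_of s n l" unfolding u_def by (simp add: take_claims_of)
      then show ?thesis using l unfolding u_def by (simp add: deviate_def d_cl nth_append claims_of_nth)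
    next
      case c
      then have "take k u = choice_word n @ ?c @ replicate a True" unfolding u_def by (simp add: take_choice_word)
      then show ?thesis using c j unfolding u_def by (simp add: deviate_def d_ch s'_def nth_append choice_word_nth)
    qed
  qed
  have rest: "(\<lambda>r. ?p (u @ r)) = (\<lambda>h. if dW j h = 2 then \<tau> h else s (u @ h))"
    unfolding fun_eq_iff deviate_def s'_def u_def using j by (auto simp: d_W)
  show ?thesis using play_cat[OF cy] rest by metis
qed

lemma nash_claims_correct:
  assumes ne: "nash 2 d pref_ap v s" and j: "j < m"
  shows "claims_of s n m ! j = wins1 j"
proof -
  let ?c = "claims_of s n m"
  have vx: "\<And>\<tau>. game_value
      \<le> v (cat (choice_word n @ ?c @ choice_word j') (play (\<lambda>h. if dW j' h = 2 then \<tau> h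
      else s ((choice_word n @ ?c @ choice_word j') @ h))))"
    if "j' < m" for j' using challenge_deviation[OF that] nash_value_bounds(2)[OF ne] by metis
  have no1: "?c ! l \<longrightarrow> wins1 l" if l: "l < m" for l
  proof
    assume cl: "?c ! l"
    show "wins1 l"
    proof (rule ccontr)
      assume nt: "\<not> wins1 l"
      let ?y = "play (\<lambda>h. if dW l h = 2 then \<tau>W l h else s ((choice_word n @ ?c @ choice_word l) @ h))"
      have "?y \<notin> WW l" using \<tau>W[OF l nt, unfolded win2_def, rule_format, of "\<lambda>h. s
          ((choice_word n @ ?c @ choice_word l) @ h)"] by simp
      then have "v (cat (choice_word n @ ?c @ choice_word l) ?y) = 1" using l cl by (simp add: outcome_C)
      then show False using vx[OF l, of "\<tau>W l"] game_value_ge2 by simp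
    qed
  qed
  show ?thesis
  proof (rule ccontr)
    assume ne1: "?c ! j \<noteq> wins1 j"
    then have "\<not> ?c ! j" "wins1 j" using no1[OF j] by auto
    have "count_true ?c < count_true true_claims"
      by (rule count_true_strict[where j=j]) (use no1 j \<open>\<not> ?c ! j\<close> \<open>wins1 j\<close> in
          \<open>auto simp: true_claims_nth\<close>)
    moreover have "v (cat (choice_word n @ ?c @ choice_word j) (play (\<lambda>h. if dW j h = 2
        then \<sigma>F 0 h else s ((choice_word n @ ?c @ choice_word j) @ h))))
        = count_true ?c + 2" using j \<open>\<not> ?c ! j\<close> by (simp add: outcome_C)
    ultimately show False using vx[OF j, of "\<sigma>F 0"] by (simp add: game_value_def)
  qed
qed

end

definition nat_of_bool :: "bool \<Rightarrow> nat" where "nat_of_bool b = (if b then 1 else 0)"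

lemma wcode_alt: "wcode w = list_encode (map nat_of_bool w)"
  by (simp add: wcode_def nat_of_bool_def[abs_def])

lemma wdecode_wcode[simp]: "wdecode (wcode w) = w"
  by (simp add: wcode_def wdecode_def comp_def)

lemma code_length_wcode[simp]: "code_length (wcode w) = length w" by (simp add: wcode_alt)
lemma code_nth_wcode: "i < length w \<Longrightarrow> code_nth (wcode w) i = nat_of_bool (w ! i)"
  by (simp add: wcode_alt)
lemma code_drop_wcode[simp]: "code_drop k (wcode w) = wcode (drop k w)" by (simp add: wcode_alt drop_map)
lemma code_append_wcode[simp]: "code_append (wcode u) (wcode w) = wcode (u @ w)" by (simp add: wcode_alt)
lemma nat_of_bool_0[simp]: "nat_of_bool b = 0 \<longleftrightarrow> \<not> b" by (simp add: nat_of_bool_def)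
lemma wcode_Nil: "wcode [] = 0" by (simp add: wcode_def)
lemma wcode_Cons: "wcode (b # w) = code_Cons (nat_of_bool b) (wcode w)" by (simp add: wcode_alt)

definition code_choice_word :: "nat \<Rightarrow> nat" where "code_choice_word i
    = code_prepend i (\<lambda>_. 1) (code_Cons 0 0)"
definition code_escape_word :: "nat \<Rightarrow> nat" where "code_escape_word n
    = code_prepend (Suc n) (\<lambda>_. 1) 0"
definition bit_at :: "nat \<Rightarrow> nat \<Rightarrow> nat" where "bit_at c l = (c div 2 ^ l) mod 2"
definition code_bits :: "nat \<Rightarrow> nat \<Rightarrow> nat" where "code_bits c m = code_prepend m (bit_at c) 0"
definition bits :: "nat \<Rightarrow> nat \<Rightarrow> bool list" where "bits c m
    = map (\<lambda>l. odd (c div 2 ^ l)) [0..<m]"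
definition popcount :: "nat \<Rightarrow> nat \<Rightarrow> nat" where "popcount c m
    = rec_nat 0 (\<lambda>l r. r + bit_at c l) m"
definition code_challenge_leaf :: "nat \<Rightarrow> nat \<Rightarrow> nat \<Rightarrow> nat \<Rightarrow> nat" where
  "code_challenge_leaf n m ci j = code_append (code_choice_word n) (code_append (code_bits ci m) (code_choice_word j))"
definition code_accept_leaf :: "nat \<Rightarrow> nat \<Rightarrow> nat \<Rightarrow> nat" where
  "code_accept_leaf n m ci = code_append (code_choice_word n) (code_append (code_bits ci m)
      (code_prepend m (\<lambda>_. 1) 0))"

lemma code_choice_word_eq: "code_choice_word i = wcode (choice_word i)"
proof -
  have "code_choice_word i = code_prepend i (\<lambda>_. 1) (list_encode [0])"
      by (simp add: code_choice_word_def code_Cons_def)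
  also have "\<dots> = list_encode (map (\<lambda>_. 1) [0..<i] @ [0])" by (rule code_prepend_enc)
  also have "\<dots> = wcode (choice_word i)"
      by (simp add: wcode_alt choice_word_def nat_of_bool_def map_replicate_const)
  finally show ?thesis .
qed

lemma code_prepend_ones: "code_prepend m (\<lambda>_. 1) 0 = wcode (replicate m True)"
proof -
  have "code_prepend m (\<lambda>_. 1) 0 = code_prepend m (\<lambda>_. 1) (list_encode [])" by simp
  also have "\<dots> = list_encode (map (\<lambda>_. 1) [0..<m] @ [])" by (rule code_prepend_enc)
  also have "\<dots> = wcode (replicate m True)" by (simp add: wcode_alt nat_of_bool_def map_replicate_const)
  finally show ?thesis .
qed

lemma code_escape_word_eq: "code_escape_word n = wcode (escape_word n)"
  unfolding code_escape_word_def code_prepend_ones escape_word_def ..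

lemma bit_at_nat_of_bool: "bit_at c l = nat_of_bool (odd (c div 2 ^ l))"
  by (simp add: bit_at_def nat_of_bool_def odd_iff_mod_2_eq_one even_iff_mod_2_eq_zero)

lemma bit_at_fun: "bit_at c = (\<lambda>l. nat_of_bool (odd (c div 2 ^ l)))"
  by (rule ext) (rule bit_at_nat_of_bool)

lemma code_bits_eq: "code_bits c m = wcode (bits c m)"
proof -
  have "code_bits c m = code_prepend m (bit_at c) (list_encode [])" by (simp add: code_bits_def)
  also have "\<dots> = list_encode (map (bit_at c) [0..<m] @ [])" by (rule code_prepend_enc)
  also have "\<dots> = wcode (bits c m)" by (simp add: wcode_alt bits_def bit_at_fun comp_def)
  finally show ?thesis .
qed

lemma length_bits[simp]: "length (bits c m) = m" by (simp add: bits_def)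
lemma bits_nth: "l < m \<Longrightarrow> bits c m ! l = odd (c div 2 ^ l)" by (simp add: bits_def)

lemma popcount_eq: "popcount c m = count_true (bits c m)"
proof -
  have "rec_nat 0 (\<lambda>l r. r + bit_at c l) k = card {l. l < k \<and> odd (c div 2 ^ l)}" for k
  proof (induction k)
    case (Suc k)
    have e: "{l. l < Suc k \<and> odd (c div 2 ^ l)} = {l. l < k \<and> odd (c div 2 ^ l)} \<union>
        (if odd (c div 2 ^ k) then {k} else {})"
      by (auto simp: less_Suc_eq)
    show ?case using Suc by (simp add: e bit_at_nat_of_bool nat_of_bool_def card_insert_if)
  qed simp
  moreover have "{l. l < length (bits c m) \<and> bits c m ! l} = {l. l < m \<and> odd (c div 2 ^ l)}"
    by (auto simp: bits_nth)
  ultimately show ?thesis by (simp add: popcount_def count_true_def)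
qed

lemma code_challenge_leaf_eq: "code_challenge_leaf n m ci j = wcode (choice_word n @ bits ci m @ choice_word j)"
  by (simp add: code_challenge_leaf_def code_choice_word_eq code_bits_eq)

lemma code_accept_leaf_eq: "code_accept_leaf n m ci = wcode (choice_word n @ bits ci m @ replicate m True)"
  unfolding code_accept_leaf_def code_choice_word_eq code_bits_eq code_prepend_ones by simp

definition bits_value :: "bool list \<Rightarrow> nat" where "bits_value c
    = (\<Sum>l<length c. nat_of_bool (c ! l) * 2 ^ l)"

lemma bits_value_lt: "bits_value c < 2 ^ length c"
proof (induction c rule: rev_induct)
  case (snoc b c)
  have "bits_value (c @ [b]) = bits_value c + nat_of_bool b * 2 ^ length c"
    by (simp add: bits_value_def nth_append)
  also have "\<dots> < 2 ^ length c + 2 ^ length c" using snoc by (simp add: nat_of_bool_def)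
  finally show ?case by simp
qed (simp add: bits_value_def)

lemma bits_bits_value: "bits (bits_value c) (length c) = c"
proof (induction c rule: rev_induct)
  case (snoc b c)
  have bn: "bits_value (c @ [b]) = bits_value c + nat_of_bool b * 2 ^ length c"
    by (simp add: bits_value_def nth_append)
  show ?case
  proof (rule nth_equalityI)
    show "length (bits (bits_value (c @ [b])) (length (c @ [b]))) = length (c @ [b])" by simp
  next
    fix l assume "l < length (bits (bits_value (c @ [b])) (length (c @ [b])))"
    then have l: "l < Suc (length c)" by simp
    show "bits (bits_value (c @ [b])) (length (c @ [b])) ! l = (c @ [b]) ! l"
    proof (cases "l < length c")
      case True
      have "(bits_value c + nat_of_bool b * 2 ^ length c) div 2 ^ l
          = bits_value c div 2 ^ l + nat_of_bool b * 2 ^ (length c - l)"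
      proof -
        have eq: "nat_of_bool b * 2 ^ length c = (nat_of_bool b * 2 ^ (length c - l)) * 2 ^ l"
          using True by (simp add: power_add[symmetric] mult.assoc)
        show ?thesis unfolding eq by simp
      qed
      moreover have "even (nat_of_bool b * 2 ^ (length c - l))" using True by simp
      ultimately have "odd ((bits_value c + nat_of_bool b * 2 ^ length c) div 2 ^ l) = odd (bits_value c div 2 ^ l)"
        by simp
      moreover have "odd (bits_value c div 2 ^ l) = c ! l"
        using snoc True by (metis bits_nth)
      ultimately show ?thesis using True l by (simp add: bits_nth bn nth_append)
    next
      case False
      then have ll: "l = length c" using l by simp
      have "(bits_value c + nat_of_bool b * 2 ^ length c) div 2 ^ length c = nat_of_bool b"
        using bits_value_lt[of c] by simp
      then show ?thesis using ll by (simp add: bits_nth bn nat_of_bool_def)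
    qed
  qed
qed (simp add: bits_def)

text \<open>\<open>P (pos_findws i y)\<close> is digit \<open>y\<close> of the name of the
  \<open>i\<close>-th \<open>FindWS\<close> instance in an input \<open>P\<close> of
  \<open>prod_p (star_p _) (star_p _)\<close>, similarly for \<open>Win\<close>; \<open>P 0\<close>
  and \<open>P 1\<close> are the numbers of instances. Even digits of an instance name are its turn
  table, odd ones the \<open>\<delta>1\<close>-name.\<close>

definition pos_findws :: "nat \<Rightarrow> nat \<Rightarrow> nat" where "pos_findws i y = 2 ^ Suc i * (2 * y + 1)"
definition pos_win :: "nat \<Rightarrow> nat \<Rightarrow> nat" where "pos_win j y = 2 ^ Suc j * (2 * y + 1) + 1"

definition code_root_choice :: "nat \<Rightarrow> nat \<Rightarrow> nat" where
  "code_root_choice n y = (LEAST b. (b \<le> n \<and> b < code_length y \<and> code_nth y b = 0) \<or> b = Suc n)"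
definition code_challenge_choice :: "nat \<Rightarrow> nat \<Rightarrow> nat" where
  "code_challenge_choice m z = (LEAST j. (j < m \<and> j < code_length z \<and> code_nth z j = 0) \<or> j = m)"

text \<open>Names are produced digitwise: a digit is \<open>turn_digit\<close> (and likewise
  \<open>upset_digit\<close>, \<open>game_digit\<close>) applied to the single input digit at
  position \<open>turn_query\<close>, the form required by \<open>comp_partial_use\<close>.\<close>

definition turn_query :: "nat \<Rightarrow> nat \<Rightarrow> nat \<Rightarrow> nat" where
  "turn_query n m y = (let b = code_root_choice n y in if b < n then pos_findws b (2 * code_drop (Suc b) y)
     else if b = n then (let z = code_drop m (code_drop (Suc n) y); j = code_challenge_choice m z in
        if j < m then pos_win j (2 * code_drop (Suc j) z) else 0) else 0)"

definition turn_digit :: "nat \<Rightarrow> nat \<Rightarrow> nat \<Rightarrow> nat \<Rightarrow> nat" where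
  "turn_digit n m y v = (let b = code_root_choice n y in if b = Suc n then (if code_length y \<le> n then 2 else 1)
     else if b < n then v
     else (let r = code_drop (Suc n) y in if code_length r < m then 1
       else (let z = code_drop m r; j = code_challenge_choice m z in if j = m then (if code_length z < m
           then 2 else 1) else v)))"

definition turn_of :: "baire \<Rightarrow> bool list \<Rightarrow> nat" where
  "turn_of P w = turn_digit (P 0) (P 1) (wcode w) (P (turn_query (P 0) (P 1) (wcode w)))"

lemma code_root_choice_wcode: "code_root_choice n (wcode w) = (LEAST b. (b \<le> n \<and> b < length w
    \<and> \<not> w ! b) \<or> b = Suc n)"
  unfolding code_root_choice_def code_length_wcode
  by (rule arg_cong[where f=Least]) (auto simp: fun_eq_iff code_nth_wcode)

lemma code_challenge_choice_wcode: "code_challenge_choice m (wcode w) = (LEAST j. (j < m \<and> j < length w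
    \<and> \<not> w ! j) \<or> j = m)"
  unfolding code_challenge_choice_def code_length_wcode
  by (rule arg_cong[where f=Least]) (auto simp: fun_eq_iff code_nth_wcode)

lemma code_root_choice_choice_word: "i \<le> n \<Longrightarrow> code_root_choice n (wcode (choice_word i @ r)) = i"
  unfolding code_root_choice_wcode by (rule Least_equality) (auto simp: nth_append choice_word_nth not_less[symmetric])

lemma code_root_choice_rep: "a \<le> n \<Longrightarrow> code_root_choice n (wcode (replicate a True)) = Suc n"
  unfolding code_root_choice_wcode by (rule Least_equality) auto

lemma code_challenge_choice_choice_word: "j < m
    \<Longrightarrow> code_challenge_choice m (wcode (choice_word j @ r)) = j"
  unfolding code_challenge_choice_wcode
      by (rule Least_equality) (auto simp: nth_append choice_word_nth not_less[symmetric])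

lemma code_challenge_choice_rep: "code_challenge_choice m (wcode (replicate a True)) = m"
  unfolding code_challenge_choice_wcode by (rule Least_equality) auto

lemma code_root_choice_le: "code_root_choice n y \<le> Suc n"
  unfolding code_root_choice_def by (rule Least_le) simp

lemma code_challenge_choice_le: "code_challenge_choice m z \<le> m"
  unfolding code_challenge_choice_def by (rule Least_le) simp

context
  fixes P :: baire
  assumes turn_findws: "\<And>i w. i < P 0 \<Longrightarrow> P (pos_findws i (2 * wcode w)) \<in> {1, 2}"
    and turn_win: "\<And>j w. j < P 1 \<Longrightarrow> P (pos_win j (2 * wcode w)) \<in> {1, 2}"
begin

lemma turn_of_12: "turn_of P h \<in> {1, 2}"
proof -
  let ?n = "P 0" and ?m = "P 1" and ?y = "wcode h"
  define b where "b = code_root_choice ?n ?y"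
  have b: "b \<le> Suc ?n" unfolding b_def by (rule code_root_choice_le)
  define z where "z = code_drop ?m (code_drop (Suc ?n) ?y)"
  have z: "z = wcode (drop ?m (drop (Suc ?n) h))" unfolding z_def by simp
  define j where "j = code_challenge_choice ?m z"
  have j: "j \<le> ?m" unfolding j_def by (rule code_challenge_choice_le)
  show ?thesis
  proof (cases "b = Suc ?n")
    case True then show ?thesis unfolding turn_of_def turn_digit_def b_def[symmetric] by simp
  next
    case F1: False
    show ?thesis
    proof (cases "b < ?n")
      case True
      have "turn_of P h = P (pos_findws b (2 * wcode (drop (Suc b) h)))"
        using True unfolding turn_of_def turn_digit_def turn_query_def b_def[symmetric] by simp
      then show ?thesis using turn_findws[OF True] by simp
    next
      case False
      then have bn: "b = ?n" using F1 b by simp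
      show ?thesis
      proof (cases "j = ?m")
        case True
        then show ?thesis using bn unfolding turn_of_def turn_digit_def Let_def
          unfolding b_def[symmetric] z_def[symmetric] j_def[symmetric] by simp
      next
        case False
        then have jm: "j < ?m" using j by simp
        have "turn_of P h = (if code_length (code_drop (Suc ?n) ?y) < ?m then 1
            else P (pos_win j (2 * code_drop (Suc j) z)))"
          using bn jm unfolding turn_of_def turn_digit_def turn_query_def Let_def
          unfolding b_def[symmetric] z_def[symmetric] j_def[symmetric] by simp
        then show ?thesis using turn_win[OF jm] z by auto
      qed
    qed
  qed
qed

lemma turn_of_root: "a \<le> P 0 \<Longrightarrow> turn_of P (replicate a True) = 2"
  by (simp add: turn_of_def turn_digit_def code_root_choice_rep)

lemma turn_of_F: "i < P 0 \<Longrightarrow> turn_of P (choice_word i @ r) = P (pos_findws i (2 * wcode r))"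
  by (simp add: turn_of_def turn_digit_def turn_query_def code_root_choice_choice_word)

lemma turn_of_cl: "length c < P 1 \<Longrightarrow> turn_of P (choice_word (P 0) @ c) = 1"
  by (simp add: turn_of_def turn_digit_def code_root_choice_choice_word)

lemma turn_of_ch: "length c = P 1 \<Longrightarrow> a < P 1
    \<Longrightarrow> turn_of P (choice_word (P 0) @ c @ replicate a True) = 2"
  by (simp add: turn_of_def turn_digit_def code_root_choice_choice_word code_challenge_choice_rep)

lemma turn_of_W: "length c = P 1 \<Longrightarrow> j < P 1
    \<Longrightarrow> turn_of P (choice_word (P 0) @ c @ choice_word j @ r) = P (pos_win j (2 * wcode r))"
  by (simp add: turn_of_def turn_digit_def turn_query_def code_root_choice_choice_word
      code_challenge_choice_choice_word)

end

definition leaf :: "nat \<Rightarrow> nat \<Rightarrow> bool list \<Rightarrow> bool" where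
  "leaf n m u \<longleftrightarrow> (\<exists>i<n. u = choice_word i) \<or> u = escape_word n
      \<or> (\<exists>c j. length c = m \<and> j < m \<and> u = choice_word n @ c @ choice_word j)
     \<or> (\<exists>c. length c = m \<and> u = choice_word n @ c @ replicate m True)"

definition leaf_of :: "nat \<Rightarrow> nat \<Rightarrow> cantor \<Rightarrow> bool list" where
  "leaf_of n m x = (let b = (LEAST b. b \<le> n \<and> \<not> x b \<or> b = Suc n) in
     if b < n then choice_word b else if b = Suc n then escape_word n else
     (let c = map (\<lambda>l. x (Suc n + l)) [0..<m]; j = (LEAST j. j < m
         \<and> \<not> x (Suc n + m + j) \<or> j = m) in
      if j < m then choice_word n @ c @ choice_word j else choice_word n @ c @ replicate m True))"

lemma leaf_of_cat:
  assumes "leaf n m u"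
  shows "leaf_of n m (cat u y) = u"
  using assms unfolding leaf_def
proof (elim disjE exE conjE)
  fix i assume i: "i < n" "u = choice_word i"
  have "(LEAST b. b \<le> n \<and> \<not> cat u y b \<or> b = Suc n) = i"
    by (rule least_root_choice_word) (use i in auto)
  then show ?thesis using i by (simp add: leaf_of_def)
next
  assume u: "u = escape_word n"
  have "(LEAST b. b \<le> n \<and> \<not> cat u y b \<or> b = Suc n) = Suc n"
    by (rule least_root_escape_word) (use u in auto)
  then show ?thesis using u by (simp add: leaf_of_def)
next
  fix c j assume cj: "length c = m" "j < m" "u = choice_word n @ c @ choice_word j"
  let ?x = "cat (choice_word n @ c @ choice_word j) y"
  have x: "?x k = (if k < Suc n then choice_word n ! k else if k < Suc n + m then c ! (k - Suc n)
     else cat (choice_word j) y (k - Suc n - m))" for k by (rule cat_claims_nth[OF cj(1)])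
  have b: "(LEAST b. b \<le> n \<and> \<not> ?x b \<or> b = Suc n) = n"
    by (rule least_root_choice_word) (auto simp: x)
  have jj: "(LEAST j'. j' < m \<and> \<not> ?x (Suc n + m + j') \<or> j' = m) = j"
    by (rule Least_equality) (use cj in \<open>auto simp: x choice_word_nth not_less[symmetric]\<close>)
  have c: "map (\<lambda>l. ?x (Suc n + l)) [0..<m] = c" using cj by (auto intro!: nth_equalityI simp: x)
  show ?thesis using cj(1,2) unfolding cj(3) leaf_of_def Let_def b jj c by simp
next
  fix c assume cj: "length c = m" "u = choice_word n @ c @ replicate m True"
  let ?x = "cat (choice_word n @ c @ replicate m True) y"
  have x: "?x k = (if k < Suc n then choice_word n ! k else if k < Suc n + m then c ! (k - Suc n)
     else cat (replicate m True) y (k - Suc n - m))" for k by (rule cat_claims_nth[OF cj(1)])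
  have b: "(LEAST b. b \<le> n \<and> \<not> ?x b \<or> b = Suc n) = n"
    by (rule least_root_choice_word) (auto simp: x)
  have jj: "(LEAST j'. j' < m \<and> \<not> ?x (Suc n + m + j') \<or> j' = m) = m"
    by (rule Least_equality) (use cj in \<open>auto simp: x\<close>)
  have c: "map (\<lambda>l. ?x (Suc n + l)) [0..<m] = c" using cj by (auto intro!: nth_equalityI simp: x)
  show ?thesis using cj(1) unfolding cj(2) leaf_of_def Let_def b jj c by simp
qed

lemma leaf_unique:
  assumes "leaf n m u" "leaf n m w" "x \<in> cyl u" "x \<in> cyl w"
  shows "u = w"
  using leaf_of_cat[OF assms(1), of "sdrop (length u) x"] leaf_of_cat[OF assms(2), of "sdrop (length w) x"]
    assms(3,4) by (metis cyl_iff)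

lemma leaf_in_cyl_iff:
  assumes "leaf n m u" "leaf n m w" "x \<in> cyl u"
  shows "x \<in> cyl w \<longleftrightarrow> w = u"
  using leaf_unique[OF assms(1,2) assms(3)] assms(3) by auto

lemma leaf_choice_word: "i < n \<Longrightarrow> leaf n m (choice_word i)" by (auto simp: leaf_def)
lemma leaf_escape_word: "leaf n m (escape_word n)" by (auto simp: leaf_def)
lemma leaf_C: "length c = m \<Longrightarrow> j < m
    \<Longrightarrow> leaf n m (choice_word n @ c @ choice_word j)" by (auto simp: leaf_def)
lemma leaf_E: "length c = m \<Longrightarrow> leaf n m (choice_word n @ c @ replicate m True)" by (auto simp: leaf_def)

lemma choice_word_eq_iff[simp]: "choice_word i = choice_word j \<longleftrightarrow> i = j"
  by (metis length_choice_word nat.inject)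

lemma choice_word_ne_rep: "choice_word j \<noteq> replicate k True"
  by (metis choice_word_nth_last in_set_replicate nth_mem length_choice_word lessI)

lemma escape_word_ne_choice_word: "i \<le> n \<Longrightarrow> escape_word n \<noteq> choice_word i @ w"
proof
  assume "i \<le> n" "escape_word n = choice_word i @ w"
  then have "escape_word n ! i = (choice_word i @ w) ! i" by simp
  then show False using \<open>i \<le> n\<close> by (simp add: nth_append)
qed

section \<open>Preimages of final segments\<close>

text \<open>The leaves entering \<open>{x. t \<le> outcome x}\<close>: an index
  \<open>r = ci * (m + 1) + j\<close> codes the claims \<open>bits ci m\<close> together with a
  challenge \<open>j < m\<close> or acceptance \<open>j = m\<close>, and an index \<open>pc\<close>
  either a subgame \<open>F\<^sub>p\<^sub>c\<close> or a challenged \<open>W\<^sub>j\<close>.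
  Indices of leaves that do not qualify are mapped to \<open>escape_word n\<close>, whose cylinder
  belongs to the set anyway.\<close>

definition clopen_leaf :: "nat \<Rightarrow> nat \<Rightarrow> nat \<Rightarrow> nat \<Rightarrow> bool list" where
  "clopen_leaf n m t r = (let ci = r div Suc m; j = r mod Suc m in
     if (j = m \<or> \<not> odd (ci div 2 ^ j)) \<and> t \<le> count_true (bits ci m) + 2
     then (if j = m then choice_word n @ bits ci m @ replicate m True
         else choice_word n @ bits ci m @ choice_word j) else escape_word n)"

definition resc_leaf :: "nat \<Rightarrow> nat \<Rightarrow> nat \<Rightarrow> bool list" where
  "resc_leaf n m pc = (if pc < n then choice_word pc else (let r = pc - n; ci = r div m; j = r mod m in
     if odd (ci div 2 ^ j) then choice_word n @ bits ci m @ choice_word j else escape_word n))"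

definition resc_set :: "nat \<Rightarrow> nat \<Rightarrow> (nat \<Rightarrow> cantor set) \<Rightarrow> (nat
    \<Rightarrow> cantor set) \<Rightarrow> nat \<Rightarrow> cantor set" where
  "resc_set n m WF WW pc = (if pc < n then WF pc else WW ((pc - n) mod m))"

lemma leaf_clopen_leaf: "leaf n m (clopen_leaf n m t r)"
proof -
  have "r mod Suc m < m \<or> r mod Suc m = m" using mod_less_divisor[of "Suc m" r] by linarith
  then show ?thesis unfolding clopen_leaf_def Let_def using leaf_escape_word leaf_C leaf_E by auto
qed

lemma leaf_resc_leaf: "pc < n + 2 ^ m * m \<Longrightarrow> leaf n m (resc_leaf n m pc)"
proof -
  assume pc: "pc < n + 2 ^ m * m"
  show ?thesis
  proof (cases "pc < n")
    case True then show ?thesis by (simp add: resc_leaf_def leaf_choice_word)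
  next
    case False
    then have "0 < m" using pc by (cases m) auto
    then have "(pc - n) mod m < m" by simp
    then show ?thesis using False unfolding resc_leaf_def Let_def using leaf_escape_word leaf_C by auto
  qed
qed

lemma choice_word_ne_long: "i < n \<Longrightarrow> choice_word i \<noteq> choice_word n @ w"
  by (metis length_choice_word length_append le_add1 not_less Suc_less_eq)

lemma choice_word_ne_long2: "i < n \<Longrightarrow> choice_word n @ w \<noteq> choice_word i"
  using choice_word_ne_long by metis

lemma div_mod_mult_add: "j < (k::nat) \<Longrightarrow> (ci * k + j) div k = ci \<and> (ci * k + j) mod k = j"
  by (simp add: add.commute)

lemma mult_add_less_pow: "ci < 2 ^ m \<Longrightarrow> j < k \<Longrightarrow> ci * k + j < 2 ^ m * (k::nat)"
proof -
  assume "ci < 2 ^ m" "j < k"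
  then have "ci * k + j < ci * k + k" by simp
  also have "\<dots> = Suc ci * k" by simp
  also have "\<dots> \<le> 2 ^ m * k" using \<open>ci < 2 ^ m\<close> by (intro mult_le_mono1) simp
  finally show ?thesis .
qed

definition upset_decomp :: "nat \<Rightarrow> nat \<Rightarrow> (nat \<Rightarrow> cantor set) \<Rightarrow>
    (nat \<Rightarrow> cantor set) \<Rightarrow> nat \<Rightarrow> cantor set" where
  "upset_decomp n m WF WW t = cyl (escape_word n) \<union> (\<Union>r<2 ^ m * Suc m. cyl (clopen_leaf n m t r)) \<union>
     (\<Union>pc<n + 2 ^ m * m. resc (resc_leaf n m pc) (resc_set n m WF WW pc))"

lemma mem_upset_decomp: "x \<in> upset_decomp n m WF WW t \<longleftrightarrow> x \<in> cyl (escape_word n) \<or>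
    (\<exists>r<2 ^ m * Suc m. x \<in> cyl (clopen_leaf n m t r)) \<or>
    (\<exists>pc<n + 2 ^ m * m. x \<in> cyl (resc_leaf n m pc) \<and> sdrop (length (resc_leaf n m pc)) x
        \<in> resc_set n m WF WW pc)"
  by (auto simp: upset_decomp_def resc_iff)

lemma upset_decomp_findws:
  assumes t: "2 \<le> t" "t \<le> m + 2" and F: "i < n" "x \<in> cyl (choice_word i)"
  shows "x \<in> upset_decomp n m WF WW t \<longleftrightarrow> t \<le> outcome n m WF WW x"
    (is "?inL \<longleftrightarrow> ?inR")
proof -
  note memL = mem_upset_decomp[of x n m WF WW t]
  let ?u = "choice_word i"
  have lu: "leaf n m ?u" using F by (simp add: leaf_choice_word)
  have xs: "x = cat ?u (sdrop (Suc i) x)" using F(2) cyl_iff by (metis length_choice_word)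
  have c1: "x \<notin> cyl (escape_word n)"
      using leaf_in_cyl_iff[OF lu leaf_escape_word F(2)] escape_word_ne_choice_word[of i n "[]"] F by auto
  have c2: "x \<notin> cyl (clopen_leaf n m t r)" for r
  proof -
    have "clopen_leaf n m t r \<noteq> choice_word i"
      unfolding clopen_leaf_def Let_def
          using choice_word_ne_long2[OF F(1)] escape_word_ne_choice_word[of i n "[]"] F(1) by auto
    then show ?thesis using leaf_in_cyl_iff[OF lu leaf_clopen_leaf F(2)] by simp
  qed
  have c3: "x \<in> cyl (resc_leaf n m pc) \<longleftrightarrow> pc = i" if "pc < n + 2 ^ m * m" for pc
  proof -
    have "resc_leaf n m pc = choice_word i \<longleftrightarrow> pc = i"
      unfolding resc_leaf_def Let_def
          using choice_word_ne_long2[OF F(1)] escape_word_ne_choice_word[of i n "[]"] F(1) by auto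
    then show ?thesis using leaf_in_cyl_iff[OF lu leaf_resc_leaf[OF that] F(2)] by simp
  qed
  have iN: "i < n + 2 ^ m * m" using F(1) by simp
  have "?inL \<longleftrightarrow> sdrop (length (resc_leaf n m i)) x \<in> resc_set n m WF WW i"
    unfolding memL using c1 c2 c3 iN by blast
  moreover have "resc_leaf n m i = choice_word i" "resc_set n m WF WW i = WF i" using F(1)
    by (simp_all add: resc_leaf_def resc_set_def)
  ultimately have "?inL \<longleftrightarrow> sdrop (Suc i) x \<in> WF i" by simp
  moreover have "?inR \<longleftrightarrow> sdrop (Suc i) x \<in> WF i"
    using t F(1) by (subst xs, simp add: outcome_F)
  ultimately show ?thesis by simp
qed

lemma upset_decomp_escape:
  assumes t: "2 \<le> t" "t \<le> m + 2" and D: "x \<in> cyl (escape_word n)"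
  shows "x \<in> upset_decomp n m WF WW t \<longleftrightarrow> t \<le> outcome n m WF WW x"
    (is "?inL \<longleftrightarrow> ?inR")
proof -
  note memL = mem_upset_decomp[of x n m WF WW t]
  have "?inR" using t D by (metis cyl_iff outcome_D)
  moreover have "?inL" using D by (simp add: upset_decomp_def)
  ultimately show ?thesis by simp
qed

lemma clopen_leaf_eq_challenge:
  assumes C: "length c = m" "j < m" and eq: "clopen_leaf n m t r = choice_word n @ c @ choice_word j"
  shows "\<not> c ! j \<and> t \<le> count_true c + 2"
proof -
  let ?u = "choice_word n @ c @ choice_word j"
  let ?ci = "r div Suc m" and ?j = "r mod Suc m"
  have "escape_word n \<noteq> ?u" using escape_word_ne_choice_word[of n n] by simp
  then have cond: "(?j = m \<or> \<not> odd (?ci div 2 ^ ?j)) \<and> t \<le> count_true (bits ?ci m) + 2"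
    using eq unfolding clopen_leaf_def Let_def by (auto split: if_splits)
  show ?thesis
  proof (cases "?j = m")
    case True
    then have "choice_word n @ bits ?ci m @ replicate m True = ?u"
      using eq cond unfolding clopen_leaf_def Let_def by simp
    then show ?thesis using C(1) choice_word_ne_rep[of j m] by simp
  next
    case False
    then have "choice_word n @ bits ?ci m @ choice_word ?j = ?u"
      using eq cond unfolding clopen_leaf_def Let_def by simp
    then have "bits ?ci m = c" "?j = j" using C(1) by simp_all
    then show ?thesis using cond False C(2) by (auto simp: bits_nth)
  qed
qed

lemma resc_leaf_eq_challenge:
  assumes C: "length c = m" "j < m" and pc: "pc < n + 2 ^ m * m"
  shows "resc_leaf n m pc = choice_word n @ c @ choice_word j \<longleftrightarrow>
    (\<exists>ci. ci < 2 ^ m \<and> pc = n + ci * m + j \<and> bits ci m = c \<and> c ! j)"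
proof
  let ?u = "choice_word n @ c @ choice_word j"
  assume eq: "resc_leaf n m pc = ?u"
  have pn: "\<not> pc < n" using eq choice_word_ne_long[of pc n] unfolding resc_leaf_def by auto
  let ?ci = "(pc - n) div m" and ?j = "(pc - n) mod m"
  have "odd (?ci div 2 ^ ?j)"
    using eq pn escape_word_ne_choice_word[of n n] unfolding resc_leaf_def Let_def by (auto split: if_splits)
  moreover have "choice_word n @ bits ?ci m @ choice_word ?j = ?u"
    using eq pn calculation unfolding resc_leaf_def Let_def by simp
  ultimately have a: "bits ?ci m = c" "?j = j" "odd (?ci div 2 ^ ?j)" using C(1) by simp_all
  have "?ci < 2 ^ m" using pc pn C by (simp add: less_mult_imp_div_less div_less_iff_less_mult mult.commute)
  moreover have "pc = n + ?ci * m + j" using pn a(2) by (metis add.assoc le_add_diff_inverse not_less div_mult_mod_eq)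
  moreover have "c ! j" using a C(2) by (metis bits_nth)
  ultimately show "\<exists>ci. ci < 2 ^ m \<and> pc = n + ci * m + j \<and> bits ci m = c
      \<and> c ! j" using a by blast
next
  assume "\<exists>ci. ci < 2 ^ m \<and> pc = n + ci * m + j \<and> bits ci m = c \<and> c ! j"
  then obtain ci where ci: "ci < 2 ^ m" "pc = n + ci * m + j" "bits ci m = c" "c ! j" by blast
  have dm: "(pc - n) div m = ci" "(pc - n) mod m = j" using ci(2) C(2) by simp_all
  have "odd (ci div 2 ^ j)" using ci C(2) by (metis bits_nth)
  then show "resc_leaf n m pc = choice_word n @ c @ choice_word j" using ci dm unfolding resc_leaf_def Let_def by simp
qed

lemma upset_decomp_challenge:
  assumes t: "2 \<le> t" "t \<le> m + 2" and C: "length c = m" "j < m" "x \<in> cyl (choice_word n @ c @ choice_word j)"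
  shows "x \<in> upset_decomp n m WF WW t \<longleftrightarrow> t \<le> outcome n m WF WW x"
    (is "?inL \<longleftrightarrow> ?inR")
proof -
  note memL = mem_upset_decomp[of x n m WF WW t]
  let ?u = "choice_word n @ c @ choice_word j"
  have lu: "leaf n m ?u" using C by (simp add: leaf_C)
  have xs: "x = cat ?u (sdrop (length ?u) x)" using C(3) cyl_iff by metis
  have c1: "x \<notin> cyl (escape_word n)"
      using leaf_in_cyl_iff[OF lu leaf_escape_word C(3)] escape_word_ne_choice_word[of n n] by auto
  have c2: "x \<notin> cyl (clopen_leaf n m t r)" if nc: "\<not> (\<not> c ! j \<and> t \<le> count_true c + 2)" for r
    using leaf_in_cyl_iff[OF lu leaf_clopen_leaf C(3)] clopen_leaf_eq_challenge[OF C(1,2)] nc by blast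
  have c3: "x \<in> cyl (resc_leaf n m pc) \<and> sdrop (length (resc_leaf n m pc)) x
      \<in> resc_set n m WF WW pc \<longleftrightarrow>
      (\<exists>ci. ci < 2 ^ m \<and> pc = n + ci * m + j \<and> bits ci m = c \<and> c ! j
          \<and> sdrop (length ?u) x \<in> WW j)"
    if pc: "pc < n + 2 ^ m * m" for pc
  proof -
    have "resc_set n m WF WW pc = WW j" if "pc = n + ci * m + j" for ci
      using that C(2) by (simp add: resc_set_def)
    then show ?thesis
      using leaf_in_cyl_iff[OF lu leaf_resc_leaf[OF pc] C(3)] resc_leaf_eq_challenge[OF C(1,2) pc] by metis
  qed
  have vx: "outcome n m WF WW x = (if c ! j then (if sdrop (length ?u) x \<in> WW j then m + 2
      else 1) else count_true c + 2)"
    by (subst xs, rule outcome_C[OF C(1,2)])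
  show ?thesis
  proof (cases "\<not> c ! j \<and> t \<le> count_true c + 2")
    case True
    let ?r = "bits_value c * Suc m + j"
    have r: "?r < 2 ^ m * Suc m" using bits_value_lt[of c] C by (intro mult_add_less_pow) auto
    have dm: "?r div Suc m = bits_value c" "?r mod Suc m = j"
        using div_mod_mult_add[of j "Suc m" "bits_value c"] C(2) by auto
    have od: "odd (bits_value c div 2 ^ j) = c ! j"
        using bits_nth[OF C(2), of "bits_value c"] bits_bits_value[of c] C(1) by simp
    have "clopen_leaf n m t ?r = ?u" unfolding clopen_leaf_def Let_def dm od using True C bits_bits_value[of c] by simp
    then have "x \<in> cyl (clopen_leaf n m t ?r)" using C(3) by simp
    then have "?inL" unfolding upset_decomp_def using r by blast
    moreover have "?inR" using True vx by simp
    ultimately show ?thesis by simp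
  next
    case nc: False
    have nclop: "\<not> (\<exists>r<2 ^ m * Suc m. x \<in> cyl (clopen_leaf n m t r))"
      using c2[OF nc] by blast
    show ?thesis
    proof (cases "c ! j \<and> sdrop (length ?u) x \<in> WW j")
      case True
      let ?pc = "n + bits_value c * m + j"
      have pc: "?pc < n + 2 ^ m * m" using bits_value_lt[of c] C by (simp add: add.assoc mult_add_less_pow)
      have "\<exists>ci. ci < 2 ^ m \<and> ?pc = n + ci * m + j \<and> bits ci m = c \<and> c ! j
          \<and> sdrop (length ?u) x \<in> WW j"
        using True bits_value_lt[of c] bits_bits_value[of c] C(1) by blast
      then have "x \<in> resc (resc_leaf n m ?pc) (resc_set n m WF WW ?pc)" using c3[OF pc] by (simp add: resc_iff)
      then have "?inL" unfolding upset_decomp_def using pc by blast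
      moreover have "?inR" using True vx t by simp
      ultimately show ?thesis by simp
    next
      case False
      have "\<not> ?inL" using memL c1 nclop c3 False by auto
      moreover have "\<not> ?inR" using False nc vx t by auto
      ultimately show ?thesis by simp
    qed
  qed
qed

lemma clopen_leaf_eq_accept:
  assumes c: "length c = m" and eq: "clopen_leaf n m t r = choice_word n @ c @ replicate m True"
  shows "t \<le> count_true c + 2"
proof -
  let ?u = "choice_word n @ c @ replicate m True"
  let ?ci = "r div Suc m" and ?j = "r mod Suc m"
  have "escape_word n \<noteq> ?u" using escape_word_ne_choice_word[of n n] by simp
  then have cond: "(?j = m \<or> \<not> odd (?ci div 2 ^ ?j)) \<and> t \<le> count_true (bits ?ci m) + 2"
    using eq unfolding clopen_leaf_def Let_def by (auto split: if_splits)
  show ?thesis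
  proof (cases "?j = m")
    case True
    then have "choice_word n @ bits ?ci m @ replicate m True = ?u"
      using eq cond unfolding clopen_leaf_def Let_def by simp
    then show ?thesis using c cond by simp
  next
    case False
    then have "choice_word n @ bits ?ci m @ choice_word ?j = ?u"
      using eq cond unfolding clopen_leaf_def Let_def by simp
    then show ?thesis using c choice_word_ne_rep[of ?j m] by simp
  qed
qed

lemma upset_decomp_accept:
  assumes t: "2 \<le> t" "t \<le> m + 2" and E: "length c = m" "x \<in> cyl (choice_word n @ c @ replicate m True)"
  shows "x \<in> upset_decomp n m WF WW t \<longleftrightarrow> t \<le> outcome n m WF WW x"
    (is "?inL \<longleftrightarrow> ?inR")
proof -
  note memL = mem_upset_decomp[of x n m WF WW t]
  let ?u = "choice_word n @ c @ replicate m True"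
  have lu: "leaf n m ?u" using E by (simp add: leaf_E)
  have xs: "x = cat ?u (sdrop (length ?u) x)" using E(2) cyl_iff by metis
  have vx: "outcome n m WF WW x = count_true c + 2" by (subst xs, rule outcome_E[OF E(1)])
  show ?thesis
  proof (cases "t \<le> count_true c + 2")
    case True
    let ?r = "bits_value c * Suc m + m"
    have r: "?r < 2 ^ m * Suc m" using bits_value_lt[of c] E by (intro mult_add_less_pow) auto
    have dm: "?r div Suc m = bits_value c" "?r mod Suc m = m"
        using div_mod_mult_add[of m "Suc m" "bits_value c"] by auto
    have "clopen_leaf n m t ?r = ?u" unfolding clopen_leaf_def Let_def dm using True E bits_bits_value[of c] by simp
    then have "x \<in> cyl (clopen_leaf n m t ?r)" using E(2) by simp
    then have "?inL" unfolding upset_decomp_def using r by blast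
    then show ?thesis using True vx by simp
  next
    case False
    have c1: "x \<notin> cyl (escape_word n)"
        using leaf_in_cyl_iff[OF lu leaf_escape_word E(2)] escape_word_ne_choice_word[of n n] by auto
    have c2: "x \<notin> cyl (clopen_leaf n m t r)" for r
      using leaf_in_cyl_iff[OF lu leaf_clopen_leaf E(2)] clopen_leaf_eq_accept[OF E(1)] False by blast
    have c3: "x \<notin> cyl (resc_leaf n m pc)" if pc: "pc < n + 2 ^ m * m" for pc
    proof -
      have "resc_leaf n m pc \<noteq> ?u"
        unfolding resc_leaf_def Let_def
            using choice_word_ne_long[of pc n] escape_word_ne_choice_word[of n n] E(1) choice_word_ne_rep by auto
      then show ?thesis using leaf_in_cyl_iff[OF lu leaf_resc_leaf[OF pc] E(2)] by simp
    qed
    have "\<not> ?inL" using memL c1 c2 c3 by auto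
    then show ?thesis using False vx by simp
  qed
qed

lemma outcome_upset_decomp:
  assumes "2 \<le> t" "t \<le> m + 2"
  shows "upset_decomp n m WF WW t = {x. t \<le> outcome n m WF WW x}"
proof (intro set_eqI)
  fix x :: cantor
  show "x \<in> upset_decomp n m WF WW t \<longleftrightarrow> x \<in> {x. t \<le> outcome n m WF WW x}"
  proof (cases x rule: leaf_cases[where n=n and m=m])
    case (F i) then show ?thesis using upset_decomp_findws[OF assms F] by simp
  next
    case D then show ?thesis using upset_decomp_escape[OF assms D] by simp
  next
    case (C c j) then show ?thesis using upset_decomp_challenge[OF assms C] by simp
  next
    case (E c) then show ?thesis using upset_decomp_accept[OF assms E] by simp
  qed
qed

definition code_clopen_leaf :: "nat \<Rightarrow> nat \<Rightarrow> nat \<Rightarrow> nat \<Rightarrow> nat" where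
  "code_clopen_leaf n m t r = (let ci = r div Suc m; j = r mod Suc m in
     if (j = m \<or> bit_at ci j = 0) \<and> t \<le> popcount ci m + 2
     then (if j = m then code_accept_leaf n m ci else code_challenge_leaf n m ci j) else code_escape_word n)"

definition code_clopen_part :: "nat \<Rightarrow> nat \<Rightarrow> nat \<Rightarrow> nat" where
  "code_clopen_part n m t = code_prepend (2 ^ m * Suc m) (code_clopen_leaf n m t) (code_Cons (code_escape_word n) 0)"

definition code_resc_leaf :: "nat \<Rightarrow> nat \<Rightarrow> nat \<Rightarrow> nat" where
  "code_resc_leaf n m pc = (if pc < n then code_choice_word pc else (let r = pc - n; ci = r div m; j = r mod m in
     if bit_at ci j = 1 then code_challenge_leaf n m ci j else code_escape_word n))"

definition upset_digit :: "nat \<Rightarrow> nat \<Rightarrow> nat \<Rightarrow> nat \<Rightarrow> nat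
    \<Rightarrow> nat" where
  "upset_digit n m t x v = (if t \<le> 1 then (if unpair_fst x = 1 then 1 else 0) else if m + 2 < t then 0 else
     (let g = unpair_fst x; y = unpair_snd x in if g = 0 then n + 2 ^ m * m else if g = 1 then code_clopen_part n m t
        else if g = 2 then code_resc_leaf n m y else if g = 3 then v else 0))"

definition upset_query :: "nat \<Rightarrow> nat \<Rightarrow> nat \<Rightarrow> nat \<Rightarrow> nat" where
  "upset_query n m t x = (let g = unpair_fst x; y = unpair_snd x; pc = unpair_fst y; dg = unpair_snd y in
     if 2 \<le> t \<and> t \<le> m + 2 \<and> g = 3 then (if pc < n then pos_findws pc (2 * dg + 1)
       else pos_win ((pc - n) mod m) (2 * dg + 1)) else 0)"

lemma bit_at_0: "bit_at c l = 0 \<longleftrightarrow> \<not> odd (c div 2 ^ l)" by (simp add: bit_at_nat_of_bool)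
lemma bit_at_1: "bit_at c l = 1 \<longleftrightarrow> odd (c div 2 ^ l)"
  by (simp add: bit_at_nat_of_bool nat_of_bool_def)

lemma code_clopen_leaf_eq: "code_clopen_leaf n m t r = wcode (clopen_leaf n m t r)"
  unfolding code_clopen_leaf_def clopen_leaf_def Let_def bit_at_0 popcount_eq
      by (simp add: code_accept_leaf_eq code_challenge_leaf_eq code_escape_word_eq)

lemma code_resc_leaf_eq: "code_resc_leaf n m pc = wcode (resc_leaf n m pc)"
  unfolding code_resc_leaf_def resc_leaf_def Let_def bit_at_1
      by (simp add: code_choice_word_eq code_challenge_leaf_eq code_escape_word_eq)

lemma clopen_code_clopen_part: "clopen_code (code_clopen_part n m t) = cyl (escape_word n)
    \<union> (\<Union>r<2 ^ m * Suc m. cyl (clopen_leaf n m t r))"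
proof -
  have "code_clopen_part n m t
      = code_prepend (2 ^ m * Suc m) (code_clopen_leaf n m t) (list_encode [code_escape_word n])"
    by (simp add: code_clopen_part_def code_Cons_def)
  also have "\<dots> = list_encode (map (code_clopen_leaf n m t) [0..<2 ^ m * Suc m] @ [code_escape_word n])"
      by (rule code_prepend_enc)
  finally have "list_decode (code_clopen_part n m t)
      = map (code_clopen_leaf n m t) [0..<2 ^ m * Suc m] @ [code_escape_word n]" by simp
  then show ?thesis unfolding clopen_code_def by (auto simp: code_clopen_leaf_eq code_escape_word_eq)
qed

lemma clopen_code_0: "clopen_code 0 = {}" by (simp add: clopen_code_def)
lemma clopen_code_1: "clopen_code (Suc 0) = UNIV"
proof -
  have "list_decode 1 = [0]"
      by (metis list_decode.simps(2) list_decode.simps(1) One_nat_def prod_decode_0 case_prod_conv)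
  then show ?thesis by (simp add: clopen_code_def wdecode_def cyl_def)
qed

lemma outcome_range: "outcome n m WF WW x \<in> {1..m + 2}"
proof -
  have "card {l. l < m \<and> x (Suc n + l)} \<le> m"
    by (metis (no_types, lifting) card_lessThan card_mono finite_lessThan lessThan_iff mem_Collect_eq subsetI)
  then show ?thesis unfolding outcome_def Let_def by auto
qed

definition upset_name :: "baire \<Rightarrow> nat \<Rightarrow> baire" where
  "upset_name P t = (\<lambda>x. upset_digit (P 0) (P 1) t x (P (upset_query (P 0) (P 1) t x)))"

lemma gamma2_upset_name:
  fixes \<delta> :: pcls and P :: baire and WF WW :: "nat \<Rightarrow> cantor set"
  assumes name_findws: "\<And>i. i < P 0
      \<Longrightarrow> \<delta> (\<lambda>dg. P (pos_findws i (2 * dg + 1))) = Some (WF i)"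
    and name_win: "\<And>j. j < P 1 \<Longrightarrow> \<delta> (\<lambda>dg. P (pos_win j (2 * dg + 1))) = Some (WW j)"
  shows "gamma2 \<delta> (upset_name P t) = Some {x. t \<le> outcome (P 0) (P 1) WF WW x}"
proof -
  let ?n = "P 0" and ?m = "P 1" and ?q = "upset_name P t"
  let ?v = "outcome ?n ?m WF WW"
  have cb: "comp_b ?q k i = upset_name P t (prod_encode (k, i))" for k i by (simp add: comp_b_def)
  consider (lo) "t \<le> 1" | (hi) "?m + 2 < t" | (mid) "2 \<le> t" "t \<le> ?m + 2" by linarith
  then show ?thesis
  proof cases
    case lo
    have "{x. t \<le> ?v x} = UNIV" using lo outcome_range[of ?n ?m WF WW] by (auto, metis atLeastAtMost_iff le_trans)
    moreover have "gamma2 \<delta> ?q = Some UNIV"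
      unfolding gamma2_def cb using lo by (simp add: upset_name_def upset_digit_def clopen_code_1)
    ultimately show ?thesis by simp
  next
    case hi
    have "{x. t \<le> ?v x} = {}" using hi outcome_range[of ?n ?m WF WW]
        by (auto, metis atLeastAtMost_iff le_trans not_le)
    moreover have "gamma2 \<delta> ?q = Some {}"
      unfolding gamma2_def cb using hi by (simp add: upset_name_def upset_digit_def clopen_code_0)
    ultimately show ?thesis by simp
  next
    case mid
    let ?N = "?n + 2 ^ ?m * ?m"
    have N: "comp_b ?q 0 0 = ?N" unfolding cb using mid by (simp add: upset_name_def upset_digit_def)
    have C: "comp_b ?q 1 0 = code_clopen_part ?n ?m t" unfolding cb using mid
        by (simp add: upset_name_def upset_digit_def)
    have Wd: "comp_b ?q 2 i = code_resc_leaf ?n ?m i" for i unfolding cb using mid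
        by (simp add: upset_name_def upset_digit_def)
    have nm: "comp_b (comp_b ?q 3) i = (if i < ?n then (\<lambda>dg. P (pos_findws i (2 * dg + 1)))
        else (\<lambda>dg. P (pos_win ((i - ?n) mod ?m) (2 * dg + 1))))" for i
      using mid by (auto simp: comp_b_def upset_name_def upset_digit_def upset_query_def)
    have ps: "\<delta> (comp_b (comp_b ?q 3) i) = Some (resc_set ?n ?m WF WW i)" if i: "i < ?N" for i
    proof (cases "i < ?n")
      case True then show ?thesis using name_findws by (simp add: nm resc_set_def)
    next
      case False
      then have "0 < ?m" using i by (cases "P 1") auto
      then show ?thesis using False name_win[of "(i - ?n) mod ?m"] by (simp add: nm resc_set_def)
    qed
    have "gamma2 \<delta> ?q = Some (clopen_code (code_clopen_part ?n ?m t) \<union>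
        (\<Union>i<?N. resc (resc_leaf ?n ?m i) (resc_set ?n ?m WF WW i)))"
      unfolding gamma2_def N C Wd using ps by (simp add: code_resc_leaf_eq)
    also have "\<dots> = Some {x. t \<le> ?v x}"
      unfolding clopen_code_clopen_part using outcome_upset_decomp[OF mid, of ?n WF WW]
      by (simp add: upset_decomp_def)
    finally show ?thesis .
  qed
qed

definition code_set_min :: "nat \<Rightarrow> nat" where "code_set_min z = (LEAST k. odd (z div 2 ^ k) \<or> k = z)"
definition code_set_max :: "nat \<Rightarrow> nat" where "code_set_max z
    = (LEAST k. even (z div 2 ^ Suc k) \<or> k = z)"
text \<open>For an upper set \<open>U\<close> of player \<open>a\<close>, coded by \<open>z\<close>,
  the preimage of \<open>U\<close> is \<open>{x. threshold m a z \<le> outcome x}\<close>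
  (\<open>a = 1\<close>) or its complement (\<open>a = 2\<close>).\<close>

definition threshold :: "nat \<Rightarrow> nat \<Rightarrow> nat \<Rightarrow> nat" where
  "threshold m a z = (if a = 1 then (if z = 0 then m + 3 else code_set_min z) else (if z = 0 then 1
      else Suc (code_set_max z)))"
definition pref_digit :: "nat \<Rightarrow> nat" where
  "pref_digit y = (if (if unpair_fst y = 1 then unpair_fst (unpair_snd y) < unpair_snd (unpair_snd y)
      else unpair_snd (unpair_snd y) < unpair_fst (unpair_snd y)) then 1 else 0)"

text \<open>Components of the name: number of players, number of outcomes, turn table, preference
  table, and at \<open>(a, set_encode U)\<close> a \<open>gamma_full\<close>-name of the preimage of
  \<open>U\<close>, whose tag selects \<open>gamma2\<close> for player 1 and its complements for
  player 2.\<close>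

definition game_digit :: "nat \<Rightarrow> nat \<Rightarrow> nat \<Rightarrow> nat \<Rightarrow> nat" where
  "game_digit n m v x = (let g = unpair_fst x; y = unpair_snd x in
    if g = 0 then 2 else if g = 1 then m + 2 else if g = 2 then turn_digit n m y v else if g = 3 then pref_digit y
    else if g = 4 then (if unpair_snd y = 0 then (if unpair_fst (unpair_fst y) = 1 then 0 else 1)
        else upset_digit n m (threshold m (unpair_fst (unpair_fst y)) (unpair_snd (unpair_fst y))) (unpair_snd y - 1) v)
    else 0)"

definition game_query :: "nat \<Rightarrow> nat \<Rightarrow> nat \<Rightarrow> nat" where
  "game_query n m x = (let g = unpair_fst x; y = unpair_snd x in if g = 2 then turn_query n m y
    else if g = 4 \<and> unpair_snd y \<noteq> 0
        then upset_query n m (threshold m (unpair_fst (unpair_fst y)) (unpair_snd (unpair_fst y)))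
        (unpair_snd y - 1) else 0)"

definition game_of :: "baire \<Rightarrow> baire" where
  "game_of P = (\<lambda>x. game_digit (P 0) (P 1) (P (game_query (P 0) (P 1) x)) x)"

lemma set_encode_bit: "finite U \<Longrightarrow> odd (set_encode U div 2 ^ k) \<longleftrightarrow> k \<in> U"
  using set_encode_inverse[of U] unfolding set_decode_def by (metis mem_Collect_eq)

lemma set_encode_ge: "finite U \<Longrightarrow> k \<in> U \<Longrightarrow> k < set_encode U"
proof -
  assume "finite U" "k \<in> U"
  then have "2 ^ k \<le> set_encode U" unfolding set_encode_def by (intro member_le_sum) auto
  moreover have "k < 2 ^ k" by (rule less_exp)
  ultimately show ?thesis by linarith
qed

lemma code_set_min_eq: "finite U \<Longrightarrow> U \<noteq> {} \<Longrightarrow> code_set_min (set_encode U) = Min U"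
  unfolding code_set_min_def
proof (rule Least_equality)
  assume U: "finite U" "U \<noteq> {}"
  show "odd (set_encode U div 2 ^ Min U) \<or> Min U = set_encode U"
    using U by (simp add: set_encode_bit)
next
  fix y assume U: "finite U" "U \<noteq> {}" and y: "odd (set_encode U div 2 ^ y) \<or> y = set_encode U"
  then show "Min U \<le> y"
    by (metis Min_in Min_le less_imp_le set_encode_bit set_encode_ge le_trans)
qed

lemma code_set_max_eq:
  assumes "finite U" "M \<in> U" "\<And>k. 1 \<le> k \<Longrightarrow> k \<le> M \<Longrightarrow> k
      \<in> U" "Suc M \<notin> U"
  shows "code_set_max (set_encode U) = M"
  unfolding code_set_max_def
proof (rule Least_equality)
  have "even (set_encode U div 2 ^ Suc M)" using assms(1,4) set_encode_bit by blast
  then show "even (set_encode U div 2 ^ Suc M) \<or> M = set_encode U" by simp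
next
  fix y assume y: "even (set_encode U div 2 ^ Suc y) \<or> y = set_encode U"
  show "M \<le> y"
  proof (rule ccontr)
    assume "\<not> M \<le> y"
    then have "Suc y \<in> U" using assms(3) by simp
    then have "odd (set_encode U div 2 ^ Suc y)" using assms(1) set_encode_bit by blast
    moreover have "y < set_encode U" using set_encode_ge[OF assms(1,2)] \<open>\<not> M \<le> y\<close> by simp
    ultimately show False using y by simp
  qed
qed

lemma upper_pref_ap1: "upper no (pref_ap 1) U \<Longrightarrow> U \<noteq> {} \<Longrightarrow> U = {Min U..no}"
proof -
  assume u: "upper no (pref_ap 1) U" "U \<noteq> {}"
  have sub: "U \<subseteq> {1..no}" and cl: "\<And>a b. a \<in> U \<Longrightarrow> b \<in> {1..no}
      \<Longrightarrow> a < b \<Longrightarrow> b \<in> U"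
    using u unfolding upper_def pref_ap_def by auto
  have f: "finite U" using sub finite_subset by blast
  have mi: "Min U \<in> U" using f u(2) by simp
  show ?thesis
  proof
    show "U \<subseteq> {Min U..no}" using f sub by auto
  next
    show "{Min U..no} \<subseteq> U"
    proof
      fix b assume b: "b \<in> {Min U..no}"
      show "b \<in> U"
      proof (cases "b = Min U")
        case True then show ?thesis using mi by simp
      next
        case False
        then show ?thesis using cl[OF mi, of b] b mi sub by auto
      qed
    qed
  qed
qed

lemma upper_pref_ap2: "upper no (pref_ap 2) U \<Longrightarrow> U \<noteq> {} \<Longrightarrow> U = {1..Max U}"
proof -
  assume u: "upper no (pref_ap 2) U" "U \<noteq> {}"
  have sub: "U \<subseteq> {1..no}" and cl: "\<And>a b. a \<in> U \<Longrightarrow> b \<in> {1..no}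
      \<Longrightarrow> b < a \<Longrightarrow> b \<in> U"
    using u unfolding upper_def pref_ap_def by auto
  have f: "finite U" using sub finite_subset by blast
  have ma: "Max U \<in> U" using f u(2) by simp
  show ?thesis
  proof
    show "U \<subseteq> {1..Max U}" using f sub by auto
  next
    show "{1..Max U} \<subseteq> U"
    proof
      fix b assume b: "b \<in> {1..Max U}"
      show "b \<in> U"
      proof (cases "b = Max U")
        case True then show ?thesis using ma by simp
      next
        case False
        then show ?thesis using cl[OF ma, of b] b ma sub by auto
      qed
    qed
  qed
qed

lemma comp_b_game_of_4: "comp_b (comp_b (game_of P) 4) (prod_encode (a, z)) =
   (\<lambda>x2. if x2 = 0 then (if a = 1 then 0 else 1) else upset_name P (threshold (P 1) a z) (x2 - 1))"
  by (auto simp: comp_b_def game_of_def game_digit_def game_query_def upset_name_def fun_eq_iff)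

lemma threshold_player1:
  assumes U: "upper (m + 2) (pref_ap 1) U" and range: "\<And>x. f x \<in> {1..m + 2}"
  shows "{x. threshold m 1 (set_encode U) \<le> f x} = f -` U"
proof (cases "U = {}")
  case True
  have "\<not> m + 3 \<le> f x" for x using range[of x] by simp
  then show ?thesis using True by (simp add: threshold_def)
next
  case False
  have f: "finite U" using U finite_subset unfolding upper_def by blast
  have u: "U = {Min U..m + 2}" using upper_pref_ap1[OF U False] .
  have "set_encode U \<noteq> 0" using False f by (metis set_encode_inverse set_decode_zero)
  then have "threshold m 1 (set_encode U) = Min U" using code_set_min_eq[OF f False] by (simp add: threshold_def)
  then show ?thesis using range by (subst (2) u) auto
qed

lemma threshold_player2:
  assumes U: "upper (m + 2) (pref_ap 2) U" and range: "\<And>x. f x \<in> {1..m + 2}"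
  shows "- {x. threshold m 2 (set_encode U) \<le> f x} = f -` U"
proof (cases "U = {}")
  case True
  have "1 \<le> f x" for x using range[of x] by simp
  then show ?thesis using True by (simp add: threshold_def)
next
  case False
  have f: "finite U" using U finite_subset unfolding upper_def by blast
  have u: "U = {1..Max U}" using upper_pref_ap2[OF U False] .
  have "code_set_max (set_encode U) = Max U"
  proof (rule code_set_max_eq[OF f])
    show "Max U \<in> U" using f False by simp
    show "k \<in> U" if "1 \<le> k" "k \<le> Max U" for k using that by (subst u) simp
    show "Suc (Max U) \<notin> U" using f by (metis Max_ge Suc_n_not_le_n)
  qed
  moreover have "set_encode U \<noteq> 0" using False f by (metis set_encode_inverse set_decode_zero)
  ultimately have "threshold m 2 (set_encode U) = Suc (Max U)" by (simp add: threshold_def)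
  then show ?thesis using range by (subst (2) u) auto
qed

lemma gamma_full_game_of:
  fixes \<delta> :: pcls and P :: baire and WF WW :: "nat \<Rightarrow> cantor set"
  assumes name_findws: "\<And>i. i < P 0
      \<Longrightarrow> \<delta> (\<lambda>dg. P (pos_findws i (2 * dg + 1))) = Some (WF i)"
    and name_win: "\<And>j. j < P 1 \<Longrightarrow> \<delta> (\<lambda>dg. P (pos_win j (2 * dg + 1))) = Some (WW j)"
    and a: "a \<in> {1..2}" and U: "upper (P 1 + 2) (pref_ap a) U"
  shows "gamma_full \<delta> (comp_b (comp_b (game_of P) 4) (prod_encode (a, set_encode U))) =
     Some (outcome (P 0) (P 1) WF WW -` U)"
proof -
  have g: "gamma2 \<delta> (upset_name P t) = Some {x. t \<le> outcome (P 0) (P 1) WF WW x}" for t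
    by (rule gamma2_upset_name[where \<delta>=\<delta> and P=P and WF=WF and WW=WW, OF name_findws name_win])
  consider "a = 1" | "a = 2" using a by fastforce
  then show ?thesis
  proof cases
    case 1
    then show ?thesis using threshold_player1[OF U[unfolded 1] outcome_range]
      unfolding comp_b_game_of_4 gamma_full_def pc_union_def by (simp add: g)
  next
    case 2
    then show ?thesis using threshold_player2[OF U[unfolded 2] outcome_range]
      unfolding comp_b_game_of_4 gamma_full_def pc_union_def pc_compl_def by (simp add: g)
  qed
qed

lemma game_name_game_of:
  fixes \<delta> :: pcls and P :: baire and WF WW :: "nat \<Rightarrow> cantor set"
  assumes turn_findws: "\<And>i w. i < P 0 \<Longrightarrow> P (pos_findws i (2 * wcode w)) \<in> {1, 2}"
    and turn_win: "\<And>j w. j < P 1 \<Longrightarrow> P (pos_win j (2 * wcode w)) \<in> {1, 2}"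
    and name_findws: "\<And>i. i < P 0
        \<Longrightarrow> \<delta> (\<lambda>dg. P (pos_findws i (2 * dg + 1))) = Some (WF i)"
    and name_win: "\<And>j. j < P 1 \<Longrightarrow> \<delta> (\<lambda>dg. P (pos_win j (2 * dg + 1))) = Some (WW j)"
  shows "game_name (gamma_full \<delta>) (game_of P) 2 (P 1 + 2) (turn_of P) pref_ap (outcome (P 0) (P 1) WF WW)"
  unfolding game_name_def
proof (intro conjI ballI allI impI)
  show "comp_b (game_of P) 0 0 = 2" by (simp add: comp_b_def game_of_def game_digit_def)
  show "comp_b (game_of P) 1 0 = P 1 + 2" by (simp add: comp_b_def game_of_def game_digit_def)
next
  fix w
  show "turn_of P w = comp_b (game_of P) 2 (wcode w)"
    by (simp add: comp_b_def game_of_def game_digit_def game_query_def turn_of_def)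
  show "turn_of P w \<in> {1..2}" using turn_of_12[OF turn_findws turn_win, of w] by auto
next
  fix a oo oo' assume "a \<in> {1..2::nat}" "oo \<in> {1..P 1 + 2}" "oo' \<in> {1..P 1 + 2}"
  show "comp_b (game_of P) 3 (prod_encode (a, prod_encode (oo, oo'))) = (if pref_ap a oo oo' then 1 else 0)"
    by (simp add: comp_b_def game_of_def game_digit_def pref_digit_def pref_ap_def)
next
  fix x show "outcome (P 0) (P 1) WF WW x \<in> {1..P 1 + 2}" by (rule outcome_range)
next
  fix a U assume au: "a \<in> {1..2::nat}" "upper (P 1 + 2) (pref_ap a) U"
  show "gamma_full \<delta> (comp_b (comp_b (game_of P) 4) (prod_encode (a, set_encode U))) =
     Some (outcome (P 0) (P 1) WF WW -` U)"
    by (rule gamma_full_game_of[where \<delta>=\<delta> and P=P and WF=WF and WW=WW, OF name_findws name_win au])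
qed

lemma fst_pair[simp]: "fst_b (pair_b p q) = p" by (simp add: fst_b_def pair_b_def)
lemma snd_pair[simp]: "snd_b (pair_b p q) = q" by (simp add: snd_b_def pair_b_def)
lemma pair_fst_snd: "pair_b (fst_b q) (snd_b q) = q"
  by (auto simp: fun_eq_iff pair_b_def fst_b_def snd_b_def)

lemma prod_p_iff: "q \<in> prod_p f g p \<longleftrightarrow> fst_b q \<in> f (fst_b p)
    \<and> snd_b q \<in> g (snd_b p)"
  unfolding prod_p_def using pair_fst_snd by (auto, metis)

lemma pow_char: "q \<in> pow_p f k t \<longleftrightarrow>
   (\<forall>i<k. fst_b ((snd_b ^^ i) q) \<in> f (fst_b ((snd_b ^^ i) t))) \<and> (snd_b ^^ k) q = (snd_b ^^ k) t"
proof (induction k arbitrary: q t)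
  case 0 then show ?case by simp
next
  case (Suc k)
  have "q \<in> pow_p f (Suc k) t \<longleftrightarrow> fst_b q \<in> f (fst_b t) \<and> snd_b q
      \<in> pow_p f k (snd_b t)"
    by (simp add: prod_p_iff)
  also have "\<dots> \<longleftrightarrow> fst_b q \<in> f (fst_b t)
      \<and> (\<forall>i<k. fst_b ((snd_b ^^ Suc i) q) \<in> f (fst_b ((snd_b ^^ Suc i) t)))
      \<and> (snd_b ^^ Suc k) q = (snd_b ^^ Suc k) t"
    by (simp add: Suc.IH funpow_Suc_right del: funpow.simps)
  also have "\<dots> \<longleftrightarrow> (\<forall>i<Suc k. fst_b ((snd_b ^^ i) q)
      \<in> f (fst_b ((snd_b ^^ i) t))) \<and> (snd_b ^^ Suc k) q = (snd_b ^^ Suc k) t"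
    by (auto simp: less_Suc_eq_0_disj simp del: funpow.simps)
  finally show ?case .
qed

lemma snd_pow: "(snd_b ^^ i) t y = t (2 ^ i * Suc y - 1)"
proof (induction i arbitrary: y)
  case (Suc i)
  have "(snd_b ^^ Suc i) t y = (snd_b ^^ i) t (2 * y + 1)" by (simp add: snd_b_def)
  also have "\<dots> = t (2 ^ i * Suc (2 * y + 1) - 1)" by (rule Suc.IH)
  also have "2 ^ i * Suc (2 * y + 1) = 2 ^ Suc i * Suc y" by simp
  finally show ?case .
qed simp

lemma fst_snd_pow: "fst_b ((snd_b ^^ i) t) y = t (2 ^ i * (2 * y + 1) - 1)"
  by (simp add: fst_b_def snd_pow)

definition findws_arg :: "baire \<Rightarrow> nat \<Rightarrow> baire" where "findws_arg P i
    = (\<lambda>y. P (pos_findws i y))"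
definition win_arg :: "baire \<Rightarrow> nat \<Rightarrow> baire" where "win_arg P j = (\<lambda>y. P (pos_win j y))"

lemma findws_arg_eq: "fst_b ((snd_b ^^ i) (\<lambda>k. fst_b P (Suc k))) = findws_arg P i"
proof
  fix y
  define a where "a = (2::nat) ^ i * (2 * y + 1)"
  have a0: "Suc (a - 1) = a" unfolding a_def by simp
  have pa: "pos_findws i y = 2 * a" unfolding a_def pos_findws_def by simp
  have "fst_b ((snd_b ^^ i) (\<lambda>k. fst_b P (Suc k))) y = fst_b P (Suc (a - 1))"
    unfolding a_def by (rule fst_snd_pow)
  also have "\<dots> = P (pos_findws i y)" unfolding a0 pa by (simp add: fst_b_def)
  finally show "fst_b ((snd_b ^^ i) (\<lambda>k. fst_b P (Suc k))) y = findws_arg P i y" by (simp add: findws_arg_def)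
qed

lemma win_arg_eq: "fst_b ((snd_b ^^ i) (\<lambda>k. snd_b P (Suc k))) = win_arg P i"
proof
  fix y
  define a where "a = (2::nat) ^ i * (2 * y + 1)"
  have a0: "Suc (a - 1) = a" unfolding a_def by simp
  have pa: "pos_win i y = 2 * a + 1" unfolding a_def pos_win_def by simp
  have "fst_b ((snd_b ^^ i) (\<lambda>k. snd_b P (Suc k))) y = snd_b P (Suc (a - 1))"
    unfolding a_def by (rule fst_snd_pow)
  also have "\<dots> = P (pos_win i y)" unfolding a0 pa by (simp add: snd_b_def)
  finally show "fst_b ((snd_b ^^ i) (\<lambda>k. snd_b P (Suc k))) y = win_arg P i y" by (simp add: win_arg_def)
qed

lemma star_nonempty:
  assumes "star_p f p \<noteq> {}" "i < p 0"
  shows "f (fst_b ((snd_b ^^ i) (\<lambda>k. p (Suc k)))) \<noteq> {}"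
proof -
  obtain q where "q \<in> star_p f p" using assms(1) by blast
  then have "fst_b ((snd_b ^^ i) q) \<in> f (fst_b ((snd_b ^^ i) (\<lambda>k. p (Suc k))))"
    using assms(2) unfolding star_p_def pow_char by blast
  then show ?thesis by blast
qed

definition two_val :: "nat \<Rightarrow> nat" where "two_val z = (LEAST i. odd (z div 2 ^ i) \<or> i = z)"

lemma pow_div_split: "k \<le> i \<Longrightarrow> (2 ^ i * a) div 2 ^ k = 2 ^ (i - k) * (a::nat)"
proof -
  assume "k \<le> i"
  then have "(2::nat) ^ i = 2 ^ (i - k) * 2 ^ k" by (metis le_add_diff_inverse2 power_add)
  then have e: "2 ^ i * a = (2 ^ (i - k) * a) * 2 ^ k" by (simp add: mult.commute mult.left_commute)
  show ?thesis unfolding e by simp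
qed

lemma two_val_eq: "two_val (2 ^ i * (2 * y + 1)) = i"
  unfolding two_val_def
proof (rule Least_equality)
  show "odd (2 ^ i * (2 * y + 1) div 2 ^ i) \<or> i = 2 ^ i * (2 * y + 1)" by simp
next
  fix k assume k: "odd (2 ^ i * (2 * y + 1) div 2 ^ k) \<or> k = 2 ^ i * (2 * y + 1)"
  show "i \<le> k"
  proof (rule ccontr)
    assume "\<not> i \<le> k"
    then have ki: "k < i" by simp
    have "2 ^ i * (2 * y + 1) div 2 ^ k = 2 ^ (i - k) * (2 * y + 1)" by (rule pow_div_split) (use ki in simp)
    then have "even (2 ^ i * (2 * y + 1) div 2 ^ k)" using ki by simp
    moreover have "k < 2 ^ i * (2 * y + 1)"
    proof -
      have "i < 2 ^ i" by (rule less_exp)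
      moreover have "(2::nat) ^ i \<le> 2 ^ i * (2 * y + 1)" by simp
      ultimately show ?thesis using ki by linarith
    qed
    ultimately show False using k by simp
  qed
qed

lemma two_val_ge: "n \<le> two_val (2 ^ n * Suc y)"
  unfolding two_val_def
proof (rule LeastI2_wellorder[of _ "2 ^ n * Suc y"])
  show "odd (2 ^ n * Suc y div 2 ^ (2 ^ n * Suc y)) \<or> 2 ^ n * Suc y = 2 ^ n * Suc y" by simp
next
  fix a assume a: "odd (2 ^ n * Suc y div 2 ^ a) \<or> a = 2 ^ n * Suc y"
  show "n \<le> a"
  proof (rule ccontr)
    assume "\<not> n \<le> a"
    then have an: "a < n" by simp
    have "2 ^ n * Suc y div 2 ^ a = 2 ^ (n - a) * Suc y" by (rule pow_div_split) (use an in simp)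
    then have "even (2 ^ n * Suc y div 2 ^ a)" using an by simp
    moreover have "a < 2 ^ n * Suc y"
    proof -
      have "n < 2 ^ n" by (rule less_exp)
      moreover have "(2::nat) ^ n \<le> 2 ^ n * Suc y" by simp
      ultimately show ?thesis using an by linarith
    qed
    ultimately show False using a by simp
  qed
qed

lemma div_pow_Suc_odd: "2 ^ i * (2 * y + 1) div 2 ^ Suc i = (y::nat)"
proof -
  have p: "(2::nat) ^ Suc i = 2 ^ i * 2" by simp
  have "2 ^ i * (2 * y + 1) div 2 ^ i = 2 * y + 1" by simp
  then show ?thesis unfolding p div_mult2_eq by simp
qed

definition code_normalize :: "nat \<Rightarrow> nat" where
  "code_normalize z = code_prepend (code_length z) (\<lambda>k. if code_nth z k = 0 then 0 else 1) 0"

lemma code_normalize_eq: "code_normalize z = wcode (wdecode z)"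
proof -
  obtain xs where z: "z = list_encode xs" by (metis list_decode_inverse)
  have "code_normalize z = code_prepend (length xs) (\<lambda>k. if code_nth z k = 0 then 0 else 1) (list_encode [])"
    by (simp add: code_normalize_def z)
  also have "\<dots> = list_encode (map (\<lambda>k. if code_nth z k = 0 then 0 else 1) [0..<length xs] @ [])"
      by (rule code_prepend_enc)
  also have "\<dots> = wcode (wdecode z)"
    unfolding wcode_alt wdecode_def z
        by (auto simp: nat_of_bool_def intro!: arg_cong[where f=list_encode] nth_equalityI)
  finally show ?thesis .
qed

definition code_claims :: "(nat \<Rightarrow> nat) \<Rightarrow> nat \<Rightarrow> nat \<Rightarrow> nat" where
  "code_claims f n j = rec_nat (code_choice_word n) (\<lambda>k w. code_append w (code_Cons (if f (2 * w + 1)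
      = 1 then 1 else 0) 0)) j"

lemma code_claims_0[simp]: "code_claims f n 0 = code_choice_word n" by (simp add: code_claims_def)
lemma code_claims_Suc[simp]: "code_claims f n (Suc j) = code_append (code_claims f n j) (code_Cons
    (if f (2 * code_claims f n j + 1) = 1 then 1 else 0) 0)"
  by (simp add: code_claims_def)

lemma pair_odd[simp]: "pair_b P S (Suc (2 * k)) = S k" by (simp add: pair_b_def)
lemma pair_even[simp]: "pair_b P S (2 * k) = P k" by (simp add: pair_b_def)
lemma pair_0[simp]: "pair_b P S 0 = P 0" by (simp add: pair_b_def)
lemma pair_2[simp]: "pair_b P S 2 = P 1" by (simp add: pair_b_def)

lemma code_claims_eq: "code_claims (pair_b P S) n j = wcode (choice_word n @ claims_of (prof_of S) n j)"
proof (induction j)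
  case 0 then show ?case by (simp add: code_choice_word_eq)
next
  case (Suc j)
  let ?u = "choice_word n @ claims_of (prof_of S) n j"
  have e: "code_Cons (if pair_b P S (2 * wcode ?u + 1) = 1 then 1 else 0) 0 = wcode [prof_of S ?u]"
    by (simp add: prof_of_def wcode_Cons wcode_Nil nat_of_bool_def)
  have "code_claims (pair_b P S) n (Suc j) = code_append (wcode ?u) (wcode [prof_of S ?u])"
    unfolding code_claims_Suc Suc.IH e ..
  then show ?case by simp
qed

text \<open>Output digit \<open>2 (2\<^sup>i (2y + 1) - 1)\<close> is digit \<open>y\<close> of the
  \<open>i\<close>-th \<open>FindWS\<close> answer, i.e. the equilibrium move at
  \<open>choice_word i @ wdecode y\<close>; the odd output digits give the \<open>Win\<close>
  answers from the equilibrium claims. Beyond the number of instances the input is copied, as the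
  tail condition of \<open>star_p\<close> demands.\<close>

definition answer_digit :: "(nat \<Rightarrow> nat) \<Rightarrow> nat \<Rightarrow> nat" where
  "answer_digit f x = (let x' = x div 2; i = two_val (Suc x'); y = Suc x' div 2 ^ Suc i in
    if even x then (if i < f 0 then (if f (2 * code_append (code_choice_word i) (code_normalize y) + 1) = 1
        then 1 else 0) else f (2 * (2 * x' + 2)))
    else (if i < f 2 then (if y = 0 then (if f (2 * code_claims f (f 0) i + 1) = 1 then 1 else 2) else 0)
          else f (2 * (2 * x' + 3))))"

definition answer :: "baire \<Rightarrow> baire \<Rightarrow> baire" where "answer P S
    = (\<lambda>x. answer_digit (pair_b P S) x)"

lemma answer_even: "fst_b (answer P S) z = answer_digit (pair_b P S) (2 * z)" by (simp add: fst_b_def answer_def)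
lemma answer_odd: "snd_b (answer P S) z = answer_digit (pair_b P S) (Suc (2 * z))" by (simp add: snd_b_def answer_def)

lemma answer_findws: "i < P 0 \<Longrightarrow> fst_b ((snd_b ^^ i) (fst_b (answer P S))) y =
   (if S (wcode (choice_word i @ wdecode y)) = 1 then 1 else 0)"
proof -
  assume i: "i < P 0"
  define a where "a = 2 ^ i * (2 * y + 1) - 1"
  have sa: "Suc a = 2 ^ i * (2 * y + 1)" unfolding a_def by simp
  have va: "two_val (Suc a) = i" unfolding sa by (rule two_val_eq)
  have dv0: "Suc a div 2 ^ Suc i = y" unfolding sa by (rule div_pow_Suc_odd)
  then have dv: "Suc a div (2 * 2 ^ i) = y" by simp
  have "fst_b ((snd_b ^^ i) (fst_b (answer P S))) y = answer_digit (pair_b P S) (2 * a)"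
    unfolding fst_snd_pow answer_even a_def ..
  also have "\<dots> = (if S (wcode (choice_word i @ wdecode y)) = 1 then 1 else 0)"
    unfolding answer_digit_def Let_def using i by (simp add: va dv code_normalize_eq code_choice_word_eq)
  finally show ?thesis .
qed

lemma answer_findws_tail: "(snd_b ^^ P 0) (fst_b (answer P S)) = (snd_b ^^ P 0) (\<lambda>k. fst_b P (Suc k))"
proof
  fix y
  define a where "a = 2 ^ P 0 * Suc y - 1"
  have sa: "Suc a = 2 ^ P 0 * Suc y" unfolding a_def by simp
  have va: "\<not> two_val (Suc a) < P 0" unfolding sa using two_val_ge[of "P 0" y] by simp
  have "(snd_b ^^ P 0) (fst_b (answer P S)) y = answer_digit (pair_b P S) (2 * a)"
    unfolding snd_pow answer_even a_def ..
  also have "\<dots> = P (2 * a + 2)" unfolding answer_digit_def Let_def using va by (simp add: pair_b_def)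
  also have "\<dots> = (snd_b ^^ P 0) (\<lambda>k. fst_b P (Suc k)) y"
    unfolding snd_pow a_def[symmetric] by (simp add: fst_b_def)
  finally show "(snd_b ^^ P 0) (fst_b (answer P S)) y = (snd_b ^^ P 0) (\<lambda>k. fst_b P (Suc k)) y" .
qed

lemma answer_win: "j < P 1 \<Longrightarrow> fst_b ((snd_b ^^ j) (snd_b (answer P S))) y =
   (if y = 0 then (if S (code_claims (pair_b P S) (P 0) j) = 1 then 1 else 2) else 0)"
proof -
  assume j: "j < P 1"
  define a where "a = 2 ^ j * (2 * y + 1) - 1"
  have sa: "Suc a = 2 ^ j * (2 * y + 1)" unfolding a_def by simp
  have va: "two_val (Suc a) = j" unfolding sa by (rule two_val_eq)
  have dv0: "Suc a div 2 ^ Suc j = y" unfolding sa by (rule div_pow_Suc_odd)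
  then have dv: "Suc a div (2 * 2 ^ j) = y" by simp
  have "fst_b ((snd_b ^^ j) (snd_b (answer P S))) y = answer_digit (pair_b P S) (Suc (2 * a))"
    unfolding fst_snd_pow answer_odd a_def ..
  also have "\<dots> = (if y = 0 then (if S (code_claims (pair_b P S) (P 0) j) = 1 then 1 else 2) else 0)"
    unfolding answer_digit_def Let_def using j by (simp add: va dv)
  finally show ?thesis .
qed

lemma answer_win_tail: "(snd_b ^^ P 1) (snd_b (answer P S)) = (snd_b ^^ P 1) (\<lambda>k. snd_b P (Suc k))"
proof
  fix y
  define a where "a = 2 ^ P 1 * Suc y - 1"
  have sa: "Suc a = 2 ^ P 1 * Suc y" unfolding a_def by simp
  have va: "\<not> two_val (Suc a) < P 1" unfolding sa using two_val_ge[of "P 1" y] by simp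
  have "(snd_b ^^ P 1) (snd_b (answer P S)) y = answer_digit (pair_b P S) (Suc (2 * a))"
    unfolding snd_pow answer_odd a_def ..
  also have "\<dots> = P (2 * a + 3)" unfolding answer_digit_def Let_def using va by (simp add: pair_b_def)
  also have "\<dots> = (snd_b ^^ P 1) (\<lambda>k. snd_b P (Suc k)) y"
    unfolding snd_pow a_def[symmetric] by (simp add: snd_b_def, rule arg_cong[where f=P], simp)
  finally show "(snd_b ^^ P 1) (snd_b (answer P S)) y = (snd_b ^^ P 1) (\<lambda>k. snd_b P (Suc k)) y" .
qed

lemma dtab_findws_arg: "dtab (findws_arg P i) = (\<lambda>w. P (pos_findws i (2 * wcode w)))"
  by (simp add: dtab_def fst_b_def findws_arg_def fun_eq_iff)
lemma dtab_win_arg: "dtab (win_arg P j) = (\<lambda>w. P (pos_win j (2 * wcode w)))"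
  by (simp add: dtab_def fst_b_def win_arg_def fun_eq_iff)
lemma snd_findws_arg: "snd_b (findws_arg P i) = (\<lambda>dg. P (pos_findws i (2 * dg + 1)))"
  by (simp add: snd_b_def findws_arg_def fun_eq_iff)
lemma snd_win_arg: "snd_b (win_arg P j) = (\<lambda>dg. P (pos_win j (2 * dg + 1)))"
  by (simp add: snd_b_def win_arg_def fun_eq_iff)

lemma lin_antag_pref_ap: "lin_antag no pref_ap"
  unfolding lin_antag_def pref_ap_def by auto

lemma game_nameD:
  assumes "game_name \<delta> p np no d pref v"
  shows "comp_b p 1 0 = no" and "d w = comp_b p 2 (wcode w)"
    and "a \<in> {1..np} \<Longrightarrow> o1 \<in> {1..no} \<Longrightarrow> o2 \<in> {1..no} \<Longrightarrow>
      comp_b p 3 (prod_encode (a, prod_encode (o1, o2))) = (if pref a o1 o2 then 1 else 0)"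
    and "v x \<in> {1..no}"
    and "a \<in> {1..np} \<Longrightarrow> upper no (pref a) U \<Longrightarrow>
      \<delta> (comp_b (comp_b p 4) (prod_encode (a, set_encode U))) = Some (v -` U)"
  using assms unfolding game_name_def by blast+

lemma game_name_unique:
  assumes gn: "game_name \<delta> p 2 no d pref v" and gn': "game_name \<delta> p 2 no' d' pref_ap v'"
  shows no: "no = no'" and "d = d'"
    and pref: "\<And>a o1 o2. a \<in> {1..2} \<Longrightarrow> o1 \<in> {1..no} \<Longrightarrow> o2
        \<in> {1..no} \<Longrightarrow> pref a o1 o2 = pref_ap a o1 o2"
    and "v = v'"
proof -
  note G = game_nameD[OF gn] and G' = game_nameD[OF gn']
  show no: "no = no'" using G(1) G'(1) by simp
  show "d = d'" using G(2) G'(2) by (simp add: fun_eq_iff)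
  show pref: "pref a o1 o2 = pref_ap a o1 o2" if "a \<in> {1..2}" "o1 \<in> {1..no}" "o2 \<in> {1..no}" for a o1 o2
  proof -
    have "comp_b p 3 (prod_encode (a, prod_encode (o1, o2))) = (if pref a o1 o2 then 1 else 0)"
      by (rule G(3)[OF that])
    moreover have "comp_b p 3 (prod_encode (a, prod_encode (o1, o2))) = (if pref_ap a o1 o2 then 1 else 0)"
      by (rule G'(3)) (use that no in simp_all)
    ultimately show ?thesis by (cases "pref a o1 o2"; cases "pref_ap a o1 o2") simp_all
  qed
  \<comment> \<open>The final segments of the outcome order are upper sets for player 1, and their
    preimages are read off the common name \<open>p\<close>.\<close>
  have segment: "v -` {t..no} = v' -` {t..no}" if "t \<in> {1..no}" for t
  proof -
    have one: "(1::nat) \<in> {1..2}" by simp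
    have "upper no (pref 1) {t..no}" and "upper no' (pref_ap 1) {t..no}"
      using that pref[OF one] no by (auto simp: upper_def pref_ap_def)
    from G(5)[OF one this(1)] G'(5)[OF one this(2)] show ?thesis by simp
  qed
  show "v = v'"
  proof
    fix x
    have "v x \<in> {1..no}" and "v' x \<in> {1..no}" using G(4) G'(4) no by auto
    then have "v x \<le> v' x" and "v' x \<le> v x"
      using segment[of "v x"] segment[of "v' x"] by (auto simp: set_eq_iff)
    then show "v x = v' x" by simp
  qed
qed

locale reduction_instance =
  fixes \<delta>1 :: pcls and P :: baire
  assumes st: "standing \<delta>1"
    and ne: "prod_p (star_p (FindWS \<delta>1)) (star_p (Win \<delta>1)) P \<noteq> {}"
begin

abbreviation "n \<equiv> P 0"
abbreviation "m \<equiv> P 1"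
definition "WF i = the (\<delta>1 (\<lambda>dg. P (pos_findws i (2 * dg + 1))))"
definition "WW j = the (\<delta>1 (\<lambda>dg. P (pos_win j (2 * dg + 1))))"
definition "dF i r = P (pos_findws i (2 * wcode r))"
definition "dW j r = P (pos_win j (2 * wcode r))"

lemma dW_eq: "dW j = (\<lambda>w. P (pos_win j (2 * wcode w)))" by (simp add: dW_def fun_eq_iff)
lemma findws_nonempty: "i < n \<Longrightarrow> FindWS \<delta>1 (findws_arg P i) \<noteq> {}"
proof -
  assume i: "i < n"
  obtain q where "q \<in> prod_p (star_p (FindWS \<delta>1)) (star_p (Win \<delta>1)) P" using ne by blast
  then have "star_p (FindWS \<delta>1) (fst_b P) \<noteq> {}" by (auto simp: prod_p_iff)
  moreover have "i < fst_b P 0" using i by (simp add: fst_b_def)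
  ultimately have "FindWS \<delta>1 (fst_b ((snd_b ^^ i) (\<lambda>k. fst_b P (Suc k)))) \<noteq>
      {}" by (rule star_nonempty)
  then show ?thesis unfolding findws_arg_eq .
qed

lemma win_nonempty: "j < m \<Longrightarrow> Win \<delta>1 (win_arg P j) \<noteq> {}"
proof -
  assume j: "j < m"
  obtain q where "q \<in> prod_p (star_p (FindWS \<delta>1)) (star_p (Win \<delta>1)) P" using ne by blast
  then have "star_p (Win \<delta>1) (snd_b P) \<noteq> {}" by (auto simp: prod_p_iff)
  moreover have "j < snd_b P 0" using j by (simp add: snd_b_def)
  ultimately have "Win \<delta>1 (fst_b ((snd_b ^^ j) (\<lambda>k. snd_b P (Suc k)))) \<noteq>
      {}" by (rule star_nonempty)
  then show ?thesis unfolding win_arg_eq .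
qed

lemma findws_input: "i < n \<Longrightarrow> win_input \<delta>1 (findws_arg P i) (WF i)
    \<and> (\<exists>\<sigma>. win1 (dF i) (WF i) \<sigma>)"
proof -
  assume i: "i < n"
  obtain q where "q \<in> FindWS \<delta>1 (findws_arg P i)" using findws_nonempty[OF i] by blast
  then obtain W where "win_input \<delta>1 (findws_arg P i) W" "\<exists>\<sigma>. win1 (dtab
      (findws_arg P i)) W \<sigma>"
    unfolding FindWS_def by blast
  moreover then have "W = WF i" unfolding win_input_def WF_def snd_findws_arg by simp
  ultimately show ?thesis by (simp add: dtab_findws_arg dF_def[abs_def])
qed

lemma win_input_arg: "j < m \<Longrightarrow> win_input \<delta>1 (win_arg P j) (WW j)"
proof -
  assume j: "j < m"
  obtain q where "q \<in> Win \<delta>1 (win_arg P j)" using win_nonempty[OF j] by blast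
  then obtain W where "win_input \<delta>1 (win_arg P j) W" unfolding Win_def by blast
  moreover then have "W = WW j" unfolding win_input_def WW_def snd_win_arg by simp
  ultimately show ?thesis by simp
qed

lemma turn_findws: "i < n \<Longrightarrow> P (pos_findws i (2 * wcode w)) \<in> {1, 2}"
  using findws_input[of i] unfolding win_input_def dtab_findws_arg by blast
lemma turn_win: "j < m \<Longrightarrow> P (pos_win j (2 * wcode w)) \<in> {1, 2}"
  using win_input_arg[of j] unfolding win_input_def dtab_win_arg by blast
lemma name_findws: "i < n \<Longrightarrow> \<delta>1 (\<lambda>dg. P (pos_findws i (2 * dg + 1))) = Some (WF i)"
  using findws_input[of i] unfolding win_input_def snd_findws_arg by blast
lemma name_win: "j < m \<Longrightarrow> \<delta>1 (\<lambda>dg. P (pos_win j (2 * dg + 1))) = Some (WW j)"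
  using win_input_arg[of j] unfolding win_input_def snd_win_arg by blast

lemma reduction_game_axioms: "reduction_game n m dF dW WF WW (turn_of P)"
proof
  fix i r assume "i < n" then show "dF i r \<in> {1, 2}" unfolding dF_def by (rule turn_findws)
next
  fix j r assume "j < m" then show "dW j r \<in> {1, 2}" unfolding dW_def by (rule turn_win)
next
  fix h show "turn_of P h \<in> {1, 2}" by (rule turn_of_12[OF turn_findws turn_win])
next
  fix a assume a: "a \<le> n" show "turn_of P (replicate a True) = 2"
      using turn_of_root[OF turn_findws turn_win a] by simp
next
  fix i r assume i: "i < n" show "turn_of P (choice_word i @ r) = dF i r" unfolding dF_def
      using turn_of_F[OF turn_findws turn_win i] by simp
next
  fix c :: "bool list" assume c: "length c < m" show "turn_of P (choice_word n @ c) = 1"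
      using turn_of_cl[OF turn_findws turn_win c] by simp
next
  fix c :: "bool list" and a assume ca: "length c = m" "a
      < m" show "turn_of P (choice_word n @ c @ replicate a True) = 2"
    using turn_of_ch[OF turn_findws turn_win ca] by simp
next
  fix c :: "bool list" and j r assume cj: "length c = m" "j
      < m" show "turn_of P (choice_word n @ c @ choice_word j @ r) = dW j r"
    unfolding dW_def using turn_of_W[OF turn_findws turn_win cj] by simp
next
  fix i assume "i < n" then show "\<exists>\<sigma>. win1 (dF i) (WF i) \<sigma>" using findws_input by blast
next
  fix j assume j: "j < m"
  have "\<forall>h. dW j h \<in> {1, 2}" using turn_win[OF j] by (simp add: dW_def)
  moreover have "WW j \<in> cls \<delta>1" using name_win[OF j] by (auto simp: cls_def)
  ultimately show "determined (dW j) (WW j)" using st unfolding standing_def by blast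
qed

sublocale g: reduction_game n m dF dW WF WW "turn_of P"
  by (rule reduction_game_axioms)

lemma game_name_of_input: "game_name (gamma_full \<delta>1) (game_of P) 2 (m + 2) (turn_of P)
    pref_ap (outcome n m WF WW)"
  by (rule game_name_game_of) (use turn_findws turn_win name_findws name_win in auto)

lemma NEap_nonempty: "NEap (gamma_full \<delta>1) (game_of P) \<noteq> {}"
proof -
  define S0 where "S0 z = (if g.equilibrium (wdecode z) then 1 else 0 :: nat)" for z :: nat
  have pn: "prof_name S0" by (simp add: prof_name_def S0_def)
  have po: "prof_of S0 = g.equilibrium" by (simp add: prof_of_def S0_def fun_eq_iff)
  have "prof_name S0 \<and> (\<exists>no d pref v. game_name (gamma_full \<delta>1) (game_of P) 2 no d pref v \<and>
      lin_antag no pref \<and> nash 2 d pref v (prof_of S0))"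
    by (rule conjI[OF pn], rule exI[of _ "m + 2"], rule exI[of _ "turn_of P"], rule exI[of _ pref_ap],
        rule exI[of _ "outcome n m WF WW"], rule conjI[OF game_name_of_input], rule conjI[OF lin_antag_pref_ap])
       (unfold po, rule g.nash_equilibrium)
  then have "S0 \<in> NEap (gamma_full \<delta>1) (game_of P)" unfolding NEap_def by simp
  then show ?thesis by blast
qed

lemma nash_of_game_name:
  assumes gn: "game_name (gamma_full \<delta>1) (game_of P) 2 no d pref v" and na: "nash 2 d pref v s"
  shows "nash 2 (turn_of P) pref_ap (outcome n m WF WW) s"
  unfolding nash_def
proof (intro ballI allI)
  fix a s' assume a: "a \<in> {1..2::nat}"
  note uniq = game_name_unique[OF gn game_name_of_input]
  have range: "v x \<in> {1..no}" for x by (rule game_nameD(4)[OF gn])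
  have "\<not> pref a (v (play s)) (v (play (\<lambda>h. if d h = a then s' h else s h)))"
    using na a unfolding nash_def by blast
  then show "\<not> pref_ap a (outcome n m WF WW (play s))
      (outcome n m WF WW (play (\<lambda>h. if turn_of P h = a then s' h else s h)))"
    using uniq(3)[OF a range range] unfolding uniq(2,4) by simp
qed

lemma answer_findws_correct:
  assumes nash: "nash 2 (turn_of P) pref_ap (outcome n m WF WW) (prof_of S)"
  shows "fst_b (answer P S) \<in> star_p (FindWS \<delta>1) (fst_b P)"
  unfolding star_p_def pow_char
proof (intro conjI allI impI)
  fix i assume "i < fst_b P 0"
  then have i: "i < n" by (simp add: fst_b_def)
  define q where "q y = (if S (wcode (choice_word i @ wdecode y)) = 1 then 1 else 0 :: nat)" for y :: nat
  have qe: "fst_b ((snd_b ^^ i) (fst_b (answer P S))) = q"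
    using answer_findws[where P=P and S=S, OF i] by (simp add: q_def fun_eq_iff)
  have pq: "prof_of q = (\<lambda>r. prof_of S (choice_word i @ r))" by (simp add: prof_of_def q_def fun_eq_iff)
  have pnq: "prof_name q" by (simp add: prof_name_def q_def)
  have w1: "win1 (dtab (findws_arg P i)) (WF i) (prof_of q)"
    using g.nash_wins_findws[OF nash i] unfolding pq dtab_findws_arg dF_def[abs_def] .
  have "q \<in> FindWS \<delta>1 (findws_arg P i)"
    unfolding FindWS_def using findws_input[OF i] pnq w1 unfolding dtab_findws_arg dF_def[abs_def] by blast
  then show "fst_b ((snd_b ^^ i) (fst_b (answer P S)))
      \<in> FindWS \<delta>1 (fst_b ((snd_b ^^ i) (\<lambda>k. fst_b P (Suc k))))"
    unfolding qe findws_arg_eq .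
next
  show "(snd_b ^^ fst_b P 0) (fst_b (answer P S)) = (snd_b ^^ fst_b P 0) (\<lambda>k. fst_b P (Suc k))"
    using answer_findws_tail[of P S] by (simp add: fst_b_def)
qed

lemma answer_win_correct:
  assumes nash: "nash 2 (turn_of P) pref_ap (outcome n m WF WW) (prof_of S)"
  shows "snd_b (answer P S) \<in> star_p (Win \<delta>1) (snd_b P)"
  unfolding star_p_def pow_char
proof (intro conjI allI impI)
  fix j assume "j < snd_b P 0"
  then have j: "j < m" by (simp add: snd_b_def)
  define q where "q y = (if y = 0 then (if S (code_claims (pair_b P S) n j) = 1 then 1 else 2)
      else 0 :: nat)" for y :: nat
  have qe: "fst_b ((snd_b ^^ j) (snd_b (answer P S))) = q"
    using answer_win[where P=P and S=S, OF j] by (simp add: q_def fun_eq_iff)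
  have c: "S (code_claims (pair_b P S) n j) = 1 \<longleftrightarrow> g.wins1 j"
    using g.nash_claims_correct[OF nash j] claims_of_nth[OF j, of "prof_of S" n]
    by (simp add: code_claims_eq prof_of_def)
  have dj: "g.wins1 j \<or> (\<exists>\<sigma>. win2 (dW j) (WW j) \<sigma>)" using g.det[OF j]
      unfolding determined_def g.wins1_def by blast
  have wi: "win_input \<delta>1 (win_arg P j) (WW j)" by (rule win_input_arg[OF j])
  have "q \<in> Win \<delta>1 (win_arg P j)"
  proof (cases "g.wins1 j")
    case True
    then have "q 0 = 1" using c by (simp add: q_def)
    moreover have "\<exists>\<sigma>. win1 (dtab (win_arg P j)) (WW j) \<sigma>" using True
        unfolding g.wins1_def dtab_win_arg dW_eq .
    ultimately show ?thesis unfolding Win_def mem_Collect_eq using wi by blast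
  next
    case False
    then have "q 0 = 2" using c by (simp add: q_def)
    moreover have "\<exists>\<sigma>. win2 (dtab (win_arg P j)) (WW j) \<sigma>" using False dj
        unfolding dtab_win_arg dW_eq by blast
    ultimately show ?thesis unfolding Win_def mem_Collect_eq using wi by blast
  qed
  then show "fst_b ((snd_b ^^ j) (snd_b (answer P S)))
      \<in> Win \<delta>1 (fst_b ((snd_b ^^ j) (\<lambda>k. snd_b P (Suc k))))"
    unfolding qe win_arg_eq .
next
  show "(snd_b ^^ snd_b P 0) (snd_b (answer P S)) = (snd_b ^^ snd_b P 0) (\<lambda>k. snd_b P (Suc k))"
    using answer_win_tail[of P S] by (simp add: snd_b_def)
qed

lemma answer_correct:
  assumes "S \<in> NEap (gamma_full \<delta>1) (game_of P)"
  shows "answer P S \<in> prod_p (star_p (FindWS \<delta>1)) (star_p (Win \<delta>1)) P"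
proof -
  obtain no d pref v where gn: "game_name (gamma_full \<delta>1) (game_of P) 2 no d pref v"
    and na: "nash 2 d pref v (prof_of S)" using assms unfolding NEap_def by blast
  note nash = nash_of_game_name[OF gn na]
  show ?thesis using answer_findws_correct[OF nash] answer_win_correct[OF nash] by (simp add: prod_p_iff)
qed

end

section \<open>Computability of the reduction maps\<close>

lemma recursive_code_choice_word [recursive_intros]:
  "recursive n A \<Longrightarrow> recursive n (\<lambda>xs. code_choice_word (A xs))"
  by (rule recursive_compose1[where f=code_choice_word]) (unfold code_choice_word_def, intro recursive_intros; simp)

lemma recursive_code_escape_word [recursive_intros]:
  "recursive n A \<Longrightarrow> recursive n (\<lambda>xs. code_escape_word (A xs))"
  by (rule recursive_compose1[where f=code_escape_word]) (unfold code_escape_word_def, intro recursive_intros; simp)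

lemma recursive_bit_at [recursive_intros]:
  "recursive n A \<Longrightarrow> recursive n B \<Longrightarrow> recursive n (\<lambda>xs. bit_at (A xs) (B xs))"
  by (rule recursive_compose2[where f=bit_at]) (unfold bit_at_def, intro recursive_intros; simp)

lemma recursive_code_bits [recursive_intros]:
  "recursive n A \<Longrightarrow> recursive n B \<Longrightarrow> recursive n (\<lambda>xs. code_bits (A xs) (B xs))"
  by (rule recursive_compose2[where f=code_bits]) (unfold code_bits_def, intro recursive_intros; simp)

lemma recursive_popcount [recursive_intros]:
  "recursive n A \<Longrightarrow> recursive n B \<Longrightarrow> recursive n (\<lambda>xs. popcount (A xs) (B xs))"
  by (rule recursive_compose2[where f=popcount]) (unfold popcount_def, intro recursive_intros; simp)

lemma recursive_code_challenge_leaf [recursive_intros]: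
  "recursive n A \<Longrightarrow> recursive n B \<Longrightarrow> recursive n C \<Longrightarrow> recursive n D
      \<Longrightarrow> recursive n (\<lambda>xs. code_challenge_leaf (A xs) (B xs) (C xs) (D xs))"
  by (rule recursive_compose4[where f=code_challenge_leaf]) (unfold code_challenge_leaf_def,
      intro recursive_intros; simp)

lemma recursive_code_accept_leaf [recursive_intros]:
  "recursive n A \<Longrightarrow> recursive n B \<Longrightarrow> recursive n C
      \<Longrightarrow> recursive n (\<lambda>xs. code_accept_leaf (A xs) (B xs) (C xs))"
  by (rule recursive_compose3[where f=code_accept_leaf]) (unfold code_accept_leaf_def, intro recursive_intros; simp)

lemma recursive_code_clopen_leaf [recursive_intros]:
  "recursive n A \<Longrightarrow> recursive n B \<Longrightarrow> recursive n C \<Longrightarrow> recursive n D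
      \<Longrightarrow> recursive n (\<lambda>xs. code_clopen_leaf (A xs) (B xs) (C xs) (D xs))"
  by (rule recursive_compose4[where f=code_clopen_leaf]) (unfold code_clopen_leaf_def Let_def,
      intro recursive_intros; simp)

lemma recursive_code_clopen_part [recursive_intros]:
  "recursive n A \<Longrightarrow> recursive n B \<Longrightarrow> recursive n C
      \<Longrightarrow> recursive n (\<lambda>xs. code_clopen_part (A xs) (B xs) (C xs))"
  by (rule recursive_compose3[where f=code_clopen_part]) (unfold code_clopen_part_def, intro recursive_intros; simp)

lemma recursive_code_resc_leaf [recursive_intros]:
  "recursive n A \<Longrightarrow> recursive n B \<Longrightarrow> recursive n C
      \<Longrightarrow> recursive n (\<lambda>xs. code_resc_leaf (A xs) (B xs) (C xs))"
  by (rule recursive_compose3[where f=code_resc_leaf]) (unfold code_resc_leaf_def Let_def, intro recursive_intros; simp)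

lemma recursive_pos_findws [recursive_intros]:
  "recursive n A \<Longrightarrow> recursive n B \<Longrightarrow> recursive n (\<lambda>xs. pos_findws (A xs) (B xs))"
  by (rule recursive_compose2[where f=pos_findws]) (unfold pos_findws_def, intro recursive_intros; simp)

lemma recursive_pos_win [recursive_intros]:
  "recursive n A \<Longrightarrow> recursive n B \<Longrightarrow> recursive n (\<lambda>xs. pos_win (A xs) (B xs))"
  by (rule recursive_compose2[where f=pos_win]) (unfold pos_win_def, intro recursive_intros; simp)

lemma recursive_upset_digit [recursive_intros]:
  "recursive n A \<Longrightarrow> recursive n B \<Longrightarrow> recursive n C \<Longrightarrow> recursive n D
      \<Longrightarrow> recursive n E
      \<Longrightarrow> recursive n (\<lambda>xs. upset_digit (A xs) (B xs) (C xs) (D xs) (E xs))"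
  by (rule recursive_compose5[where f=upset_digit]) (unfold upset_digit_def Let_def, intro recursive_intros; simp)

lemma recursive_upset_query [recursive_intros]:
  "recursive n A \<Longrightarrow> recursive n B \<Longrightarrow> recursive n C \<Longrightarrow> recursive n D
      \<Longrightarrow> recursive n (\<lambda>xs. upset_query (A xs) (B xs) (C xs) (D xs))"
  by (rule recursive_compose4[where f=upset_query]) (unfold upset_query_def Let_def, intro recursive_intros; simp)

lemma recursive_code_root_choice [recursive_intros]:
  "recursive n A \<Longrightarrow> recursive n B
      \<Longrightarrow> recursive n (\<lambda>xs. code_root_choice (A xs) (B xs))"
  by (rule recursive_compose2[where f=code_root_choice]) (unfold code_root_choice_def, intro recursive_intros; simp)

lemma recursive_code_challenge_choice [recursive_intros]:
  "recursive n A \<Longrightarrow> recursive n B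
      \<Longrightarrow> recursive n (\<lambda>xs. code_challenge_choice (A xs) (B xs))"
  by (rule recursive_compose2[where f=code_challenge_choice]) (unfold code_challenge_choice_def,
      intro recursive_intros; simp)

lemma recursive_turn_query [recursive_intros]:
  "recursive n A \<Longrightarrow> recursive n B \<Longrightarrow> recursive n C
      \<Longrightarrow> recursive n (\<lambda>xs. turn_query (A xs) (B xs) (C xs))"
  by (rule recursive_compose3[where f=turn_query]) (unfold turn_query_def Let_def, intro recursive_intros; simp)

lemma recursive_turn_digit [recursive_intros]:
  "recursive n A \<Longrightarrow> recursive n B \<Longrightarrow> recursive n C \<Longrightarrow> recursive n D
      \<Longrightarrow> recursive n (\<lambda>xs. turn_digit (A xs) (B xs) (C xs) (D xs))"
  by (rule recursive_compose4[where f=turn_digit]) (unfold turn_digit_def Let_def, intro recursive_intros; simp)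

lemma recursive_code_set_min [recursive_intros]:
  "recursive n A \<Longrightarrow> recursive n (\<lambda>xs. code_set_min (A xs))"
  by (rule recursive_compose1[where f=code_set_min]) (unfold code_set_min_def, intro recursive_intros; simp)

lemma recursive_code_set_max [recursive_intros]:
  "recursive n A \<Longrightarrow> recursive n (\<lambda>xs. code_set_max (A xs))"
  by (rule recursive_compose1[where f=code_set_max]) (unfold code_set_max_def, intro recursive_intros; simp)

lemma recursive_threshold [recursive_intros]:
  "recursive n A \<Longrightarrow> recursive n B \<Longrightarrow> recursive n C
      \<Longrightarrow> recursive n (\<lambda>xs. threshold (A xs) (B xs) (C xs))"
  by (rule recursive_compose3[where f=threshold]) (unfold threshold_def, intro recursive_intros; simp)

lemma recursive_pref_digit [recursive_intros]:
  "recursive n A \<Longrightarrow> recursive n (\<lambda>xs. pref_digit (A xs))"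
  by (rule recursive_compose1[where f=pref_digit]) (unfold pref_digit_def, intro recursive_intros; simp)

lemma recursive_game_digit [recursive_intros]:
  "recursive n A \<Longrightarrow> recursive n B \<Longrightarrow> recursive n C \<Longrightarrow> recursive n D
      \<Longrightarrow> recursive n (\<lambda>xs. game_digit (A xs) (B xs) (C xs) (D xs))"
  by (rule recursive_compose4[where f=game_digit]) (unfold game_digit_def Let_def, intro recursive_intros; simp)

lemma recursive_game_query [recursive_intros]:
  "recursive n A \<Longrightarrow> recursive n B \<Longrightarrow> recursive n C
      \<Longrightarrow> recursive n (\<lambda>xs. game_query (A xs) (B xs) (C xs))"
  by (rule recursive_compose3[where f=game_query]) (unfold game_query_def Let_def, intro recursive_intros; simp)

lemma recursive_two_val [recursive_intros]:
  "recursive n A \<Longrightarrow> recursive n (\<lambda>xs. two_val (A xs))"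
  by (rule recursive_compose1[where f=two_val]) (unfold two_val_def, intro recursive_intros; simp)

lemma recursive_code_normalize [recursive_intros]:
  "recursive n A \<Longrightarrow> recursive n (\<lambda>xs. code_normalize (A xs))"
  by (rule recursive_compose1[where f=code_normalize]) (unfold code_normalize_def, intro recursive_intros; simp)

definition game_use :: "baire \<Rightarrow> nat \<Rightarrow> nat" where
  "game_use f x = Suc (max 1 (game_query (f 0) (f 1) x))"

lemma comp_partial_game_of: "comp_partial (\<lambda>p. Some (game_of p))"
proof (rule comp_partial_use)
  show "recursive 1 (\<lambda>xs. game_of (code_nth (unpair_snd (xs ! 0))) (unpair_fst (xs ! 0)))"
    unfolding game_of_def by (intro recursive_intros) simp_all
  show "recursive 1 (\<lambda>xs. game_use (code_nth (unpair_snd (xs ! 0))) (unpair_fst (xs ! 0)))"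
    unfolding game_use_def by (intro recursive_intros) simp_all
next
  fix f g :: baire and x
  assume a: "\<forall>i < game_use f x. f i = g i"
  have l: "0 < game_use f x" "1 < game_use f x" "game_query (f 0) (f 1) x < game_use f x"
    unfolding game_use_def by simp_all
  have f0: "f 0 = g 0" "f 1 = g 1" using a l by blast+
  have f2: "f (game_query (f 0) (f 1) x) = g (game_query (f 0) (f 1) x)" using a l by blast
  show "game_of f x = game_of g x \<and> game_use f x = game_use g x"
    unfolding game_of_def game_use_def f0[symmetric] f2 by simp
qed

definition answer_query :: "(nat \<Rightarrow> nat) \<Rightarrow> nat \<Rightarrow> nat" where
  "answer_query f x = (let x' = x div 2; i = two_val (Suc x'); y = Suc x' div 2 ^ Suc i in
    if even x then (if i < f 0 then 2 * code_append (code_choice_word i) (code_normalize y) + 1 else 2 * (2 * x' + 2))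
    else (if i < f 2 then (if y = 0 then 2 * code_claims f (f 0) i + 1 else 0) else 2 * (2 * x' + 3)))"
definition answer_use :: "(nat \<Rightarrow> nat) \<Rightarrow> nat \<Rightarrow> nat" where
  "answer_use f x = Suc (max 2 (answer_query f x))"

lemma list_encode_app_ge: "list_encode xs \<le> list_encode (xs @ ys)"
proof (induction xs)
  case (Cons x xs)
  have "prod_encode (x, list_encode xs) \<le> prod_encode (x, list_encode (xs @ ys))"
    using Cons triangle_mono[of "x + list_encode xs" "x + list_encode (xs @ ys)"]
    by (simp add: prod_encode_def)
  then show ?case by simp
qed simp

lemma code_append_ge: "a \<le> code_append a b"
proof -
  obtain xs ys where "a = list_encode xs" "b = list_encode ys" by (metis list_decode_inverse)
  then show ?thesis by (simp add: list_encode_app_ge)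
qed

lemma code_claims_mono: "l \<le> k \<Longrightarrow> code_claims f n l \<le> code_claims f n k"
  by (rule lift_Suc_mono_le[of "code_claims f n"]) (simp_all add: code_append_ge)

lemma code_claims_use: "(\<forall>l<k. f (2 * code_claims f n l + 1) = g (2 * code_claims f n l + 1))
    \<Longrightarrow> code_claims f n k = code_claims g n k"
  by (induction k) auto

lemma comp_partial_answer: "comp_partial (\<lambda>p. Some (\<lambda>x. answer_digit p x))"
proof (rule comp_partial_use)
  show "recursive 1 (\<lambda>xs. answer_digit (code_nth (unpair_snd (xs ! 0))) (unpair_fst (xs ! 0)))"
    unfolding answer_digit_def code_claims_def Let_def by (intro recursive_intros) simp_all
  show "recursive 1 (\<lambda>xs. answer_use (code_nth (unpair_snd (xs ! 0))) (unpair_fst (xs ! 0)))"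
    unfolding answer_use_def answer_query_def code_claims_def Let_def by (intro recursive_intros) simp_all
next
  fix f g :: "nat \<Rightarrow> nat" and x
  assume a: "\<forall>i < answer_use f x. f i = g i"
  have l: "0 < answer_use f x" "2 < answer_use f x" "answer_query f x < answer_use f x"
      unfolding answer_use_def by simp_all
  have f0: "f 0 = g 0" "f 2 = g 2" using a l by blast+
  have fk: "f (answer_query f x) = g (answer_query f x)" using a l by blast
  define x' where "x' = x div 2"
  define i where "i = two_val (Suc x')"
  define y where "y = Suc x' div 2 ^ Suc i"
  have kp: "answer_query h x = (if even x then (if i < h 0
      then 2 * code_append (code_choice_word i) (code_normalize y) + 1 else 2 * (2 * x' + 2))
    else (if i < h 2 then (if y = 0 then 2 * code_claims h (h 0) i + 1 else 0) else 2 * (2 * x' + 3)))" for h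
    unfolding answer_query_def Let_def x'_def[symmetric] i_def[symmetric] y_def[symmetric] ..
  have kph: "answer_digit h x = (if even x then (if i < h 0 then
      (if h (2 * code_append (code_choice_word i) (code_normalize y) + 1) = 1 then 1 else 0) else h (2 * (2 * x' + 2)))
    else (if i < h 2 then (if y = 0 then (if h (2 * code_claims h (h 0) i + 1) = 1 then 1 else 2) else 0)
          else h (2 * (2 * x' + 3))))" for h
    unfolding answer_digit_def Let_def x'_def[symmetric] i_def[symmetric] y_def[symmetric] ..
  have cnq: "code_claims f (f 0) i = code_claims g (g 0) i" if "\<not> even x" "i < f 2" "y = 0"
  proof -
    have "\<forall>l<i. f (2 * code_claims f (f 0) l + 1) = g (2 * code_claims f (f 0) l + 1)"
    proof (intro allI impI)
      fix l assume "l < i"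
      then have "code_claims f (f 0) l \<le> code_claims f (f 0) i" by (intro code_claims_mono) simp
      then have "2 * code_claims f (f 0) l + 1 < answer_use f x" using that unfolding answer_use_def kp by simp
      then show "f (2 * code_claims f (f 0) l + 1) = g (2 * code_claims f (f 0) l + 1)" using a by blast
    qed
    then show ?thesis using code_claims_use f0 by metis
  qed
  have kq: "answer_query f x = answer_query g x"
  proof (cases "even x")
    case True then show ?thesis unfolding kp f0 by simp
  next
    case False
    then show ?thesis using cnq unfolding kp f0 by simp
  qed
  have "answer_digit f x = answer_digit g x"
  proof (cases "even x")
    case True
    then show ?thesis using fk unfolding kph kp f0 by (cases "i < g 0") simp_all
  next
    case False
    then show ?thesis using fk cnq unfolding kph kp f0 by (cases "i < g 2"; cases "y = 0") simp_all
  qed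
  then show "answer_digit f x = answer_digit g x \<and> answer_use f x = answer_use g x"
      unfolding answer_use_def kq by simp
qed

lemma wred_by_total_maps:
  assumes "comp_partial (\<lambda>p. Some (H p))" and "comp_partial (\<lambda>q. Some (K q))"
    and "\<And>p. f p \<noteq> {} \<Longrightarrow> g (H p) \<noteq> {}"
    and "\<And>p s. f p \<noteq> {} \<Longrightarrow> s \<in> g (H p) \<Longrightarrow> K (pair_b p s) \<in> f p"
  shows "f \<le>\<^sub>W g"
  unfolding wred_def
proof (intro exI conjI allI impI)
  fix G assume "realizes G g"
  then show "realizes (\<lambda>p. case Some (H p) of None \<Rightarrow> None
      | Some r \<Rightarrow> (case G r of None \<Rightarrow> None | Some s \<Rightarrow> Some (K (pair_b p s)))) f"
    using assms(3,4) unfolding realizes_def by fastforce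
qed (fact assms)+

theorem lemma27:
  fixes \<delta>1 :: pcls
  assumes "standing \<delta>1" and "standing (gamma_full \<delta>1)"
  shows "prod_p (star_p (FindWS \<delta>1)) (star_p (Win \<delta>1)) \<le>\<^sub>W NEap (gamma_full \<delta>1)"
proof (rule wred_by_total_maps[OF comp_partial_game_of comp_partial_answer])
  fix p assume "prod_p (star_p (FindWS \<delta>1)) (star_p (Win \<delta>1)) p \<noteq> {}"
  then interpret reduction_instance \<delta>1 p using assms(1) by unfold_locales
  show "NEap (gamma_full \<delta>1) (game_of p) \<noteq> {}" by (rule NEap_nonempty)
  show "answer_digit (pair_b p s) \<in> prod_p (star_p (FindWS \<delta>1)) (star_p (Win \<delta>1)) p"
    if "s \<in> NEap (gamma_full \<delta>1) (game_of p)" for s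
    using answer_correct[OF that] by (simp add: answer_def)
qed

end
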